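(* Let $\langle\mathcal{P},\mathcal{S}\rangle$ be an ADP problem. For a set $\mathcal{J}$ of dependency pairs and an ADP $\alpha=\ell\to\{p_1:r_1,\dots,p_k:r_k\}^m\in\mathcal{P}$ let $\alpha|_{\mathcal{J}}=\ell\to\{p_1:\sharp_{\Phi_1}(r_1),\dots,p_k:\sharp_{\Phi_k}(r_k)\}^m$, where for $1\le j\le k$, $\pi\in\Phi_j$ iff there is a dependency pair $\ell^\sharp\to t^\sharp\in\mathcal{J}$ with $t\trianglelefteq_\sharp^\pi r_j$. Let $\mathcal{P}|_{\mathcal{J}}=\{\alpha|_{\mathcal{J}}\mid\alpha\in\mathcal{P}\}$ and $\mathcal{S}|_{\mathcal{J}}=\{\alpha|_{\mathcal{J}}\mid\alpha\in\mathcal{S}\}$. Then the processor \[\mathrm{Proc}_{\mathtt{DG}}(\langle\mathcal{P},\mathcal{S}\rangle)=(\mathrm{Pol}_0,\{\langle\mathcal{P}|_{\mathcal{J}},\mathcal{S}|_{\mathcal{J}}\rangle\mid\mathcal{J}\text{ is an SCC-prefix of the }\mathcal{P}\text{-dependency graph}\})\] is sound.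
   Context: Annotated dependency pairs (ADPs): over a finite signature $\Sigma$ with fresh annotated copies $f^\sharp$ of the defined symbols, an ADP is $\ell\to\{p_1:r_1,\dots,p_k:r_k\}^m$ with $\ell$ a non-variable unannotated term, $r_j$ possibly annotated, $\mathcal{V}(r_j)\subseteq\mathcal{V}(\ell)$, $0<p_j\le1$, $\sum p_j=1$, flag $m\in\{\mathsf{true},\mathsf{false}\}$. For a set $\mathcal{P}$, defined symbols are roots of left-hand sides; basic terms are $f(t_1,\dots,t_k)$ with $f$ defined and $t_i$ free of defined symbols; $|t|$ term size; $\flat$ removes all annotations; $t^\sharp$ annotates the root; $\sharp_\Phi(t)$ is the term $t$ with exactly the (defined or annotated) symbols at positions in $\Phi$ annotated and all other annotations removed; $\flat^\uparrow_\pi$ removes annotations strictly above $\pi$; $t\trianglelefteq_\sharp^\pi s$ means $s$ has an annotated symbol at $\pi$ and $t=\flat(s|_\pi)$; $t\trianglelefteq_\sharp s$ means this holds for some $\pi$. Rewriting with $\mathcal{P}$ (innermost): at a position $\pi$ with defined or annotated symbol, ADP $\ell\to\{p_j:r_j\}^m\in\mathcal{P}$, $\sigma$ with $\flat(s|_\pi)=\ell\sigma$ whose proper subterms are normal forms: $t_j=s[r_j\sigma]_\pi$ (at: $m=\mathsf{true}$, $\pi$ annotated), $s[\flat(r_j)\sigma]_\pi$ (nt), $\flat^\uparrow_\pi(s[r_j\sigma]_\pi)$ (af), $\flat^\uparrow_\pi(s[\flat(r_j)\sigma]_\pi)$ (nf). A term is in argument normal form w.r.t. $\mathcal{P}$ if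 all its proper subterms are normal forms. $\mathcal{P}$-chain trees: possibly infinite finitely-branching trees with nodes $(p_v:t_v)$, root probability 1, $t_v$ rewriting to $\{\tfrac{p_w}{p_v}:t_w\}_w$ at inner nodes. For $\mathcal{S}\subseteq\mathcal{P}$, $\operatorname{edl}_{\langle\mathcal{P},\mathcal{S}\rangle}(\mathfrak{T})$ sums $p_v$ over inner nodes rewritten by (at)/(af)-steps with ADPs in $\mathcal{S}$; $\operatorname{edh}_{\langle\mathcal{P},\mathcal{S}\rangle}(t)$ = sup over chain trees rooted at $t^\sharp$; $\iota_{\langle\mathcal{P},\mathcal{S}\rangle}=\iota(n\mapsto\sup\{\operatorname{edh}_{\langle\mathcal{P},\mathcal{S}\rangle}(t)\mid t\text{ basic},|t|\le n\})$; complexities $\mathfrak{C}=\{\mathrm{Pol}_0,\mathrm{Pol}_1,\dots,\mathrm{Exp},\mathrm{2\text{-}Exp},\mathrm{Fin},\omega\}$ ordered in that order, $\oplus$ = maximum, $\iota(f)=\mathrm{Pol}_a$ for least $a$ with $f\in O(n^a)$, else $\mathrm{Exp}$ if $f\in O(2^{\mathrm{pol}(n)})$, else $\mathrm{2\text{-}Exp}$ if $f\in O(2^{2^{\mathrm{pol}(n)}})$, else $\mathrm{Fin}$ if $f$ never equals $\omega$, else $\omega$. Dependency graph: $\mathrm{np}(\mathcal{P})=\{\ell\to\flat(r_j)\mid\ell\to\{p_1:r_1,\dots,p_k:r_k\}^{\mathsf{true}}\in\mathcal{P},1\le j\le k\}$ (an ordinary TRS). For an ADP $\alpha=\ell\to\{p_1:r_1,\dots,p_k:r_k\}^m$,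 $\mathrm{dp}(\alpha)=\{\ell^\sharp\to t^\sharp\mid1\le j\le k,t\trianglelefteq_\sharp r_j\}$; $\mathrm{dp}^\bot(\alpha)=\{\ell^\sharp\to\bot\}$ ($\bot$ a fresh symbol) if $\mathrm{dp}(\alpha)=\emptyset$ and $\mathrm{dp}(\alpha)$ otherwise; $\mathrm{dp}(\mathcal{P})=\bigcup_{\alpha\in\mathcal{P}}\mathrm{dp}^\bot(\alpha)$. The $\mathcal{P}$-dependency graph has nodes $\mathrm{dp}(\mathcal{P})$ and an edge from $\ell_1^\sharp\to t_1^\sharp$ to $\ell_2^\sharp\to\dots$ iff there are substitutions $\sigma_1,\sigma_2$ with $t_1^\sharp\sigma_1$ reducing in zero or more innermost $\mathrm{np}(\mathcal{P})$-steps to $\ell_2^\sharp\sigma_2$ and $\ell_1^\sharp\sigma_1,\ell_2^\sharp\sigma_2$ in argument normal form w.r.t. $\mathcal{P}$. An SCC is a maximal set $\mathcal{G}$ of nodes such that for all $\alpha,\alpha'\in\mathcal{G}$ there is a non-empty path from $\alpha$ to $\alpha'$ traversing only nodes of $\mathcal{G}$. A node reaches $\mathcal{G}$ if there is a path of length $\ge0$ to it. $\mathcal{J}\subseteq\mathrm{dp}(\mathcal{P})$ is an SCC-prefix if there is an SCC $\mathcal{G}\subseteq\mathcal{J}$ such that $\mathcal{J}$ is a maximal set in which all elements reach $\mathcal{G}$ and for all $\alpha,\beta\in\mathcal{J}$, $\alpha$ reaches $\beta$ or $\beta$ reaches $\alpha$. ADP problems, proof trees, soundness: ADP problem $\langle\mathcal{P},\mathcal{S}\rangle$,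 $\mathcal{P}$ finite, $\mathcal{S}\subseteq\mathcal{P}$, solved iff $\mathcal{S}=\emptyset$. A processor maps an ADP problem to $(c,\{\langle\mathcal{P}_1,\mathcal{S}_1\rangle,\dots,\langle\mathcal{P}_n,\mathcal{S}_n\rangle\})$, $c\in\mathfrak{C}$. A proof tree is a finite tree with labels $L_{\mathcal{A}}$ (ADP problems), $L_{\mathcal{C}}$ (complexities) where each inner node and its children arise by a processor application and leaves carry $\mathrm{Pol}_0$ if solved, $\omega$ otherwise; it is well formed if for each node $v$ with $L_{\mathcal{A}}(v)=\langle\mathcal{P},\mathcal{S}\rangle$ and root path $v_1,\dots,v_k=v$: $\iota_{\langle\mathcal{P},\mathcal{S}\rangle}\sqsubseteq L_{\mathcal{C}}(v_1)\oplus\dots\oplus L_{\mathcal{C}}(v_{k-1})\oplus\max\{L'_{\mathcal{C}}(w)\mid w$ reachable from $v$, incl. $v\}$ and $\iota_{\langle\mathcal{P},\mathcal{P}\setminus\mathcal{S}\rangle}\sqsubseteq L_{\mathcal{C}}(v_1)\oplus\dots\oplus L_{\mathcal{C}}(v_{k-1})$ ($L'_{\mathcal{C}}=L_{\mathcal{C}}$ on inner nodes, $\iota_{L_{\mathcal{A}}(w)}$ on leaves). A processor with output $(c,\{\langle\mathcal{P}_i,\mathcal{S}_i\rangle\}_{i\le n})$ on $\langle\mathcal{P},\mathcal{S}\rangle$ is sound if for every well-formed proof tree and node $v$ labeled $\langle\mathcal{P},\mathcal{S}\rangle$ with root path $v_1,\dots,v_k=v$: $\iota_{\langle\mathcal{P},\mathcal{S}\rangle}\sqsubseteq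 L_{\mathcal{C}}(v_1)\oplus\dots\oplus L_{\mathcal{C}}(v_{k-1})\oplus c\oplus\iota_{\langle\mathcal{P}_1,\mathcal{S}_1\rangle}\oplus\dots\oplus\iota_{\langle\mathcal{P}_n,\mathcal{S}_n\rangle}$ and $\iota_{\langle\mathcal{P}_i,\mathcal{P}_i\setminus\mathcal{S}_i\rangle}\sqsubseteq L_{\mathcal{C}}(v_1)\oplus\dots\oplus L_{\mathcal{C}}(v_{k-1})\oplus c$ for all $i$. *)

theory Defs
  imports Complex_Main "HOL-Library.Extended_Nonnegative_Real" "HOL-Library.Multiset"
    "HOL-Computational_Algebra.Polynomial"
begin

section \<open>Terms with annotations\<close>

text \<open>Terms over function symbols of type 'f and variables of type 'v.
  The Boolean flag of a function node records whether the symbol is annotated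
  (i.e. is the annotated copy f-sharp of f).\<close>

datatype ('f,'v) aterm = Var 'v | Fun 'f bool "('f,'v) aterm list"

type_synonym pos = "nat list"

lemma size_nth_aterm_less: "i < length ts \<Longrightarrow> size (ts ! i) < Suc (size_list size ts)"
  using size_list_estimation'[OF nth_mem[of i ts], of "size (ts ! i)" size] by simp

function poss :: "('f,'v) aterm \<Rightarrow> pos set" where
  "poss (Var x) = {[]}"
| "poss (Fun f b ts) = insert [] (\<Union>i \<in> {..<length ts}. (Cons i) ` poss (ts ! i))"
  by pat_completeness auto
termination
  by (relation "measure size") (auto simp: size_nth_aterm_less)

fun subt_at :: "('f,'v) aterm \<Rightarrow> pos \<Rightarrow> ('f,'v) aterm" where
  "subt_at t [] = t"
| "subt_at (Fun f b ts) (i # p) = subt_at (ts ! i) p"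
| "subt_at (Var x) (i # p) = Var x"

fun replace_at :: "('f,'v) aterm \<Rightarrow> pos \<Rightarrow> ('f,'v) aterm \<Rightarrow> ('f,'v) aterm" where
  "replace_at t [] s = s"
| "replace_at (Fun f b ts) (i # p) s = Fun f b (ts[i := replace_at (ts ! i) p s])"
| "replace_at (Var x) (i # p) s = Var x"

fun tsubst :: "('f,'v) aterm \<Rightarrow> ('v \<Rightarrow> ('f,'v) aterm) \<Rightarrow> ('f,'v) aterm" where
  "tsubst (Var x) \<sigma> = \<sigma> x"
| "tsubst (Fun f b ts) \<sigma> = Fun f b (map (\<lambda>t. tsubst t \<sigma>) ts)"

fun vars :: "('f,'v) aterm \<Rightarrow> 'v set" where
  "vars (Var x) = {x}"
| "vars (Fun f b ts) = (\<Union>t \<in> set ts. vars t)"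

fun funs :: "('f,'v) aterm \<Rightarrow> 'f set" where
  "funs (Var x) = {}"
| "funs (Fun f b ts) = insert f (\<Union>t \<in> set ts. funs t)"

fun annfuns :: "('f,'v) aterm \<Rightarrow> 'f set" where
  "annfuns (Var x) = {}"
| "annfuns (Fun f b ts) = (if b then {f} else {}) \<union> (\<Union>t \<in> set ts. annfuns t)"

fun tsize :: "('f,'v) aterm \<Rightarrow> nat" where
  "tsize (Var x) = 1"
| "tsize (Fun f b ts) = Suc (sum_list (map tsize ts))"

fun flat :: "('f,'v) aterm \<Rightarrow> ('f,'v) aterm" where
  "flat (Var x) = Var x"
| "flat (Fun f b ts) = Fun f False (map flat ts)"

fun sharp_root :: "('f,'v) aterm \<Rightarrow> ('f,'v) aterm" where
  "sharp_root (Var x) = Var x"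
| "sharp_root (Fun f b ts) = Fun f True ts"

fun flat_above :: "pos \<Rightarrow> ('f,'v) aterm \<Rightarrow> ('f,'v) aterm" where
  "flat_above [] t = t"
| "flat_above (i # p) (Fun f b ts) = Fun f False (ts[i := flat_above p (ts ! i)])"
| "flat_above (i # p) (Var x) = Var x"

fun root_annotated :: "('f,'v) aterm \<Rightarrow> bool" where
  "root_annotated (Var x) = False"
| "root_annotated (Fun f b ts) = b"

definition annotated_at :: "('f,'v) aterm \<Rightarrow> pos \<Rightarrow> bool" where
  "annotated_at s \<pi> \<longleftrightarrow> \<pi> \<in> poss s \<and> root_annotated (subt_at s \<pi>)"

definition unannotated :: "('f,'v) aterm \<Rightarrow> bool" where
  "unannotated t \<longleftrightarrow> flat t = t"

text \<open>D is the set of defined symbols;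
  the extra position argument is the position of the current subterm.\<close>
function sharp_Phi_at :: "'f set \<Rightarrow> pos set \<Rightarrow> pos \<Rightarrow> ('f,'v) aterm \<Rightarrow> ('f,'v) aterm" where
  "sharp_Phi_at D \<Phi> p (Var x) = Var x"
| "sharp_Phi_at D \<Phi> p (Fun f b ts) =
     Fun f (p \<in> \<Phi> \<and> (f \<in> D \<or> b))
       (map (\<lambda>i. sharp_Phi_at D \<Phi> (p @ [i]) (ts ! i)) [0..<length ts])"
  by pat_completeness auto
termination
  by (relation "measure (\<lambda>(D,\<Phi>,p,t). size t)") (auto simp: size_nth_aterm_less)

definition sharp_Phi :: "'f set \<Rightarrow> pos set \<Rightarrow> ('f,'v) aterm \<Rightarrow> ('f,'v) aterm" where
  "sharp_Phi D \<Phi> t = sharp_Phi_at D \<Phi> [] t"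

definition sharp_sub :: "('f,'v) aterm \<Rightarrow> pos \<Rightarrow> ('f,'v) aterm \<Rightarrow> bool" where
  "sharp_sub t \<pi> s \<longleftrightarrow> annotated_at s \<pi> \<and> t = flat (subt_at s \<pi>)"

definition proper_subterm :: "('f,'v) aterm \<Rightarrow> ('f,'v) aterm \<Rightarrow> bool" where
  "proper_subterm u t \<longleftrightarrow> (\<exists>\<pi> \<in> poss t. \<pi> \<noteq> [] \<and> subt_at t \<pi> = u)"

section \<open>Annotated dependency pairs\<close>

datatype ('f,'v) adp =
  ADP (lhs: "('f,'v) aterm") (rhs: "(real \<times> ('f,'v) aterm) multiset") (flag: bool)

type_synonym ('f,'v) problem = "('f,'v) adp set \<times> ('f,'v) adp set"

definition defs :: "('f,'v) adp set \<Rightarrow> 'f set" where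
  "defs P = {f. \<exists>\<alpha> \<in> P. \<exists>b ts. lhs \<alpha> = Fun f b ts}"

definition valid_adp :: "'f set \<Rightarrow> ('f,'v) adp \<Rightarrow> bool" where
  "valid_adp D \<alpha> \<longleftrightarrow>
     (\<exists>f ts. lhs \<alpha> = Fun f False ts) \<and> unannotated (lhs \<alpha>) \<and>
     (\<forall>(p, r) \<in># rhs \<alpha>. vars r \<subseteq> vars (lhs \<alpha>) \<and> 0 < p \<and> p \<le> 1 \<and> annfuns r \<subseteq> D) \<and>
     sum_mset (image_mset fst (rhs \<alpha>)) = 1"

definition adp_problem :: "('f,'v) problem \<Rightarrow> bool" where
  "adp_problem PS \<longleftrightarrow> (case PS of (P, S) \<Rightarrow>
     finite P \<and> S \<subseteq> P \<and> (\<forall>\<alpha> \<in> P. valid_adp (defs P) \<alpha>))"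

section \<open>Innermost rewriting with ADPs\<close>

definition NF :: "('f,'v) adp set \<Rightarrow> ('f,'v) aterm \<Rightarrow> bool" where
  "NF P t \<longleftrightarrow> \<not> (\<exists>\<pi> \<in> poss t. \<exists>\<alpha> \<in> P. \<exists>\<sigma>. flat (subt_at t \<pi>) = tsubst (lhs \<alpha>) \<sigma>)"

definition ANF :: "('f,'v) adp set \<Rightarrow> ('f,'v) aterm \<Rightarrow> bool" where
  "ANF P t \<longleftrightarrow> (\<forall>u. proper_subterm u t \<longrightarrow> NF P u)"

definition adp_redex :: "('f,'v) adp set \<Rightarrow> ('f,'v) aterm \<Rightarrow> pos \<Rightarrow> ('f,'v) adp
    \<Rightarrow> ('v \<Rightarrow> ('f,'v) aterm) \<Rightarrow> bool" where
  "adp_redex P s \<pi> \<alpha> \<sigma> \<longleftrightarrow> \<pi> \<in> poss s \<and> \<alpha> \<in> P \<and>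
     flat (subt_at s \<pi>) = tsubst (lhs \<alpha>) \<sigma> \<and>
     (\<forall>u. proper_subterm u (tsubst (lhs \<alpha>) \<sigma>) \<longrightarrow> NF P u)"

definition adp_result :: "('f,'v) aterm \<Rightarrow> pos \<Rightarrow> ('f,'v) adp
    \<Rightarrow> ('v \<Rightarrow> ('f,'v) aterm) \<Rightarrow> (real \<times> ('f,'v) aterm) multiset" where
  "adp_result s \<pi> \<alpha> \<sigma> = image_mset (\<lambda>(p, r). (p,
      if flag \<alpha> \<and> annotated_at s \<pi> then replace_at s \<pi> (tsubst r \<sigma>)
      else if flag \<alpha> \<and> \<not> annotated_at s \<pi> then replace_at s \<pi> (tsubst (flat r) \<sigma>)
      else if \<not> flag \<alpha> \<and> annotated_at s \<pi> then flat_above \<pi> (replace_at s \<pi> (tsubst r \<sigma>))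
      else flat_above \<pi> (replace_at s \<pi> (tsubst (flat r) \<sigma>)))) (rhs \<alpha>)"

section \<open>Chain trees and expected derivation length\<close>

text \<open>Nodes are addresses (lists of child indices); nch v is the number of children of v
  (0 for leaves); for inner nodes the rewrite step used is recorded (ADP, position,
  substitution).\<close>
record ('f,'v) ctree =
  cnodes :: "nat list set"
  cprob :: "nat list \<Rightarrow> real"
  cterm :: "nat list \<Rightarrow> ('f,'v) aterm"
  nch :: "nat list \<Rightarrow> nat"
  crule :: "nat list \<Rightarrow> ('f,'v) adp"
  cpos :: "nat list \<Rightarrow> pos"
  csub :: "nat list \<Rightarrow> 'v \<Rightarrow> ('f,'v) aterm"

definition chain_tree :: "('f,'v) adp set \<Rightarrow> ('f,'v) ctree \<Rightarrow> bool" where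
  "chain_tree P T \<longleftrightarrow>
     [] \<in> cnodes T \<and> cprob T [] = 1 \<and>
     (\<forall>w \<in> cnodes T. w \<noteq> [] \<longrightarrow> butlast w \<in> cnodes T) \<and>
     (\<forall>v \<in> cnodes T. \<forall>i. v @ [i] \<in> cnodes T \<longleftrightarrow> i < nch T v) \<and>
     (\<forall>v \<in> cnodes T. 0 < nch T v \<longrightarrow>
        adp_redex P (cterm T v) (cpos T v) (crule T v) (csub T v) \<and>
        mset (map (\<lambda>i. (cprob T (v @ [i]) / cprob T v, cterm T (v @ [i]))) [0..<nch T v])
          = adp_result (cterm T v) (cpos T v) (crule T v) (csub T v))"

definition counted_nodes :: "('f,'v) adp set \<Rightarrow> ('f,'v) ctree \<Rightarrow> nat list set" where
  "counted_nodes S T = {v \<in> cnodes T. 0 < nch T v \<and> crule T v \<in> S \<and>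
                                      annotated_at (cterm T v) (cpos T v)}"

definition edl :: "('f,'v) adp set \<Rightarrow> ('f,'v) ctree \<Rightarrow> ennreal" where
  "edl S T = (SUP F \<in> {F. finite F \<and> F \<subseteq> counted_nodes S T}. \<Sum>v\<in>F. ennreal (cprob T v))"

definition edh :: "('f,'v) adp set \<Rightarrow> ('f,'v) adp set \<Rightarrow> ('f,'v) aterm \<Rightarrow> ennreal" where
  "edh P S t = (SUP T \<in> {T. chain_tree P T \<and> cterm T [] = sharp_root t}. edl S T)"

definition basic :: "('f,'v) adp set \<Rightarrow> ('f,'v) aterm \<Rightarrow> bool" where
  "basic P t \<longleftrightarrow> (\<exists>f ts. t = Fun f False ts \<and> f \<in> defs P \<and>
      (\<forall>u \<in> set ts. funs u \<inter> defs P = {} \<and> unannotated u))"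

section \<open>Complexities\<close>

datatype cplx = Pol nat | Exp | TwoExp | Fin | Omega

fun cidx :: "cplx \<Rightarrow> nat" where
  "cidx (Pol a) = 0" | "cidx Exp = 1" | "cidx TwoExp = 2" | "cidx Fin = 3" | "cidx Omega = 4"

fun cdeg :: "cplx \<Rightarrow> nat" where
  "cdeg (Pol a) = a" | "cdeg Exp = 0" | "cdeg TwoExp = 0" | "cdeg Fin = 0" | "cdeg Omega = 0"

instantiation cplx :: linorder
begin
definition less_eq_cplx :: "cplx \<Rightarrow> cplx \<Rightarrow> bool" where
  "less_eq_cplx x y \<longleftrightarrow> cidx x < cidx y \<or> (cidx x = cidx y \<and> cdeg x \<le> cdeg y)"
definition less_cplx :: "cplx \<Rightarrow> cplx \<Rightarrow> bool" where
  "less_cplx x y \<longleftrightarrow> x \<le> y \<and> \<not> y \<le> x"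
instance
proof
  fix x y z :: cplx
  show "x < y \<longleftrightarrow> x \<le> y \<and> \<not> y \<le> x" by (simp add: less_cplx_def)
  show "x \<le> x" by (simp add: less_eq_cplx_def)
  show "x \<le> y \<Longrightarrow> y \<le> z \<Longrightarrow> x \<le> z" by (auto simp: less_eq_cplx_def)
  show "x \<le> y \<Longrightarrow> y \<le> x \<Longrightarrow> x = y"
    by (cases x; cases y) (auto simp: less_eq_cplx_def)
  show "x \<le> y \<or> y \<le> x" by (auto simp: less_eq_cplx_def)
qed
end

definition bigO :: "(nat \<Rightarrow> ennreal) \<Rightarrow> (nat \<Rightarrow> ennreal) \<Rightarrow> bool" where
  "bigO f g \<longleftrightarrow> (\<exists>c::real. \<exists>N. \<forall>n \<ge> N. f n \<le> ennreal c * g n)"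

definition cls :: "(nat \<Rightarrow> ennreal) \<Rightarrow> cplx" where
  "cls f = (if \<exists>a. bigO f (\<lambda>n. ennreal (real n ^ a))
            then Pol (LEAST a. bigO f (\<lambda>n. ennreal (real n ^ a)))
            else if \<exists>q :: real poly. bigO f (\<lambda>n. ennreal (2 powr poly q (real n))) then Exp
            else if \<exists>q :: real poly. bigO f (\<lambda>n. ennreal (2 powr (2 powr poly q (real n))))
              then TwoExp
            else if \<forall>n. f n \<noteq> \<infinity> then Fin
            else Omega)"

definition iota :: "('f,'v) adp set \<Rightarrow> ('f,'v) adp set \<Rightarrow> cplx" where
  "iota P S = cls (\<lambda>n. SUP t \<in> {t. basic P t \<and> tsize t \<le> n}. edh P S t)"

definition iota_p :: "('f,'v) problem \<Rightarrow> cplx" where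
  "iota_p PS = iota (fst PS) (snd PS)"

definition cMax :: "cplx set \<Rightarrow> cplx" where
  "cMax X = Max (insert (Pol 0) X)"

section \<open>Dependency graph\<close>

text \<open>A dependency pair l^sharp -> t^sharp is represented as (l, Some t), and
  l^sharp -> bot as (l, None).\<close>
type_synonym ('f,'v) dpair = "('f,'v) aterm \<times> ('f,'v) aterm option"

definition np :: "('f,'v) adp set \<Rightarrow> (('f,'v) aterm \<times> ('f,'v) aterm) set" where
  "np P = {(lhs \<alpha>, flat r) | \<alpha> p r. \<alpha> \<in> P \<and> flag \<alpha> \<and> (p, r) \<in># rhs \<alpha>}"

definition dp :: "('f,'v) adp \<Rightarrow> ('f,'v) dpair set" where
  "dp \<alpha> = {(lhs \<alpha>, Some t) | t. \<exists>p r \<pi>. (p, r) \<in># rhs \<alpha> \<and> sharp_sub t \<pi> r}"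

definition dp_bot :: "('f,'v) adp \<Rightarrow> ('f,'v) dpair set" where
  "dp_bot \<alpha> = (if dp \<alpha> = {} then {(lhs \<alpha>, None)} else dp \<alpha>)"

definition dpP :: "('f,'v) adp set \<Rightarrow> ('f,'v) dpair set" where
  "dpP P = (\<Union>\<alpha> \<in> P. dp_bot \<alpha>)"

definition NF_trs :: "(('f,'v) aterm \<times> ('f,'v) aterm) set \<Rightarrow> ('f,'v) aterm \<Rightarrow> bool" where
  "NF_trs R u \<longleftrightarrow> \<not> (\<exists>\<pi> \<in> poss u. \<exists>(l, r) \<in> R. \<exists>\<sigma>. subt_at u \<pi> = tsubst l \<sigma>)"

definition istep :: "(('f,'v) aterm \<times> ('f,'v) aterm) set \<Rightarrow> (('f,'v) aterm \<times> ('f,'v) aterm) set" where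
  "istep R = {(s, t). \<exists>\<pi> \<in> poss s. \<exists>(l, r) \<in> R. \<exists>\<sigma>.
      subt_at s \<pi> = tsubst l \<sigma> \<and>
      (\<forall>u. proper_subterm u (tsubst l \<sigma>) \<longrightarrow> NF_trs R u) \<and>
      t = replace_at s \<pi> (tsubst r \<sigma>)}"

text \<open>Edges of the P-dependency graph.  A node l^sharp -> bot has no outgoing edges, since
  bot sigma = bot is an np(P)-normal form different from any l2^sharp sigma2.\<close>
definition dg_edge :: "('f,'v) adp set \<Rightarrow> ('f,'v) dpair \<Rightarrow> ('f,'v) dpair \<Rightarrow> bool" where
  "dg_edge P d1 d2 \<longleftrightarrow> d1 \<in> dpP P \<and> d2 \<in> dpP P \<and>
     (case snd d1 of
        None \<Rightarrow> False
      | Some t1 \<Rightarrow> \<exists>\<sigma>1 \<sigma>2.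
          (tsubst (sharp_root t1) \<sigma>1, tsubst (sharp_root (fst d2)) \<sigma>2) \<in> (istep (np P))\<^sup>* \<and>
          ANF P (tsubst (sharp_root (fst d1)) \<sigma>1) \<and> ANF P (tsubst (sharp_root (fst d2)) \<sigma>2))"

definition dg_edges :: "('f,'v) adp set \<Rightarrow> (('f,'v) dpair \<times> ('f,'v) dpair) set" where
  "dg_edges P = {(d1, d2). dg_edge P d1 d2}"

definition strongly_conn :: "('f,'v) adp set \<Rightarrow> ('f,'v) dpair set \<Rightarrow> bool" where
  "strongly_conn P G \<longleftrightarrow> G \<subseteq> dpP P \<and>
     (\<forall>a \<in> G. \<forall>b \<in> G. (a, b) \<in> (dg_edges P \<inter> G \<times> G)\<^sup>+)"

definition is_SCC :: "('f,'v) adp set \<Rightarrow> ('f,'v) dpair set \<Rightarrow> bool" where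
  "is_SCC P G \<longleftrightarrow> strongly_conn P G \<and> \<not> (\<exists>G'. G \<subset> G' \<and> strongly_conn P G')"

definition reaches :: "('f,'v) adp set \<Rightarrow> ('f,'v) dpair \<Rightarrow> ('f,'v) dpair \<Rightarrow> bool" where
  "reaches P a b \<longleftrightarrow> (a, b) \<in> (dg_edges P)\<^sup>*"

definition prefix_prop :: "('f,'v) adp set \<Rightarrow> ('f,'v) dpair set \<Rightarrow> ('f,'v) dpair set \<Rightarrow> bool" where
  "prefix_prop P G J \<longleftrightarrow> J \<subseteq> dpP P \<and> (\<forall>a \<in> J. \<exists>b \<in> G. reaches P a b) \<and>
     (\<forall>a \<in> J. \<forall>b \<in> J. reaches P a b \<or> reaches P b a)"

definition SCC_prefix :: "('f,'v) adp set \<Rightarrow> ('f,'v) dpair set \<Rightarrow> bool" where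
  "SCC_prefix P J \<longleftrightarrow> (\<exists>G. is_SCC P G \<and> G \<subseteq> J \<and> prefix_prop P G J \<and>
                           \<not> (\<exists>J'. J \<subset> J' \<and> prefix_prop P G J'))"

section \<open>Restriction of ADPs to a set of dependency pairs\<close>

definition Phi :: "('f,'v) dpair set \<Rightarrow> ('f,'v) aterm \<Rightarrow> ('f,'v) aterm \<Rightarrow> pos set" where
  "Phi J l r = {\<pi>. \<exists>t. (l, Some t) \<in> J \<and> sharp_sub t \<pi> r}"

definition restr :: "('f,'v) adp set \<Rightarrow> ('f,'v) dpair set \<Rightarrow> ('f,'v) adp \<Rightarrow> ('f,'v) adp" where
  "restr P J \<alpha> = ADP (lhs \<alpha>)
     (image_mset (\<lambda>(p, r). (p, sharp_Phi (defs P) (Phi J (lhs \<alpha>) r) r)) (rhs \<alpha>)) (flag \<alpha>)"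

definition proc_DG :: "('f,'v) problem \<Rightarrow> cplx \<times> ('f,'v) problem set" where
  "proc_DG PS = (case PS of (P, S) \<Rightarrow>
     (Pol 0, {(restr P J ` P, restr P J ` S) | J. SCC_prefix P J}))"

section \<open>Proof trees and soundness of processors\<close>

record ('f,'v) ptree =
  pnodes :: "nat list set"
  LA :: "nat list \<Rightarrow> ('f,'v) problem"
  LC :: "nat list \<Rightarrow> cplx"

definition pchildren :: "('f,'v) ptree \<Rightarrow> nat list \<Rightarrow> nat list set" where
  "pchildren T v = {w \<in> pnodes T. \<exists>i. w = v @ [i]}"

definition pleaf :: "('f,'v) ptree \<Rightarrow> nat list \<Rightarrow> bool" where
  "pleaf T v \<longleftrightarrow> pchildren T v = {}"

definition proof_tree :: "('f,'v) ptree \<Rightarrow> bool" where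
  "proof_tree T \<longleftrightarrow> finite (pnodes T) \<and> [] \<in> pnodes T \<and>
     (\<forall>w \<in> pnodes T. w \<noteq> [] \<longrightarrow> butlast w \<in> pnodes T) \<and>
     (\<forall>v \<in> pnodes T. adp_problem (LA T v)) \<and>
     (\<forall>v \<in> pnodes T. \<not> pleaf T v \<longrightarrow>
        (\<exists>Proc :: ('f,'v) problem \<Rightarrow> cplx \<times> ('f,'v) problem set.
            Proc (LA T v) = (LC T v, LA T ` pchildren T v))) \<and>
     (\<forall>v \<in> pnodes T. pleaf T v \<longrightarrow> LC T v = (if snd (LA T v) = {} then Pol 0 else Omega))"

text \<open>L_C(v_1) (+) ... (+) L_C(v_{k-1}) for the root path v_1, ..., v_k = v.\<close>
definition path_sum :: "('f,'v) ptree \<Rightarrow> nat list \<Rightarrow> cplx" where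
  "path_sum T v = foldr max (map (\<lambda>i. LC T (take i v)) [0..<length v]) (Pol 0)"

definition LC' :: "('f,'v) ptree \<Rightarrow> nat list \<Rightarrow> cplx" where
  "LC' T w = (if pleaf T w then iota_p (LA T w) else LC T w)"

definition reach_max :: "('f,'v) ptree \<Rightarrow> nat list \<Rightarrow> cplx" where
  "reach_max T v = Max {LC' T w | w. w \<in> pnodes T \<and> (\<exists>u. w = v @ u)}"

definition wf_proof_tree :: "('f,'v) ptree \<Rightarrow> bool" where
  "wf_proof_tree T \<longleftrightarrow> proof_tree T \<and>
     (\<forall>v \<in> pnodes T. iota (fst (LA T v)) (snd (LA T v)) \<le> max (path_sum T v) (reach_max T v) \<and>
                      iota (fst (LA T v)) (fst (LA T v) - snd (LA T v)) \<le> path_sum T v)"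

definition sound_output :: "('f,'v) problem \<Rightarrow> cplx \<times> ('f,'v) problem set \<Rightarrow> bool" where
  "sound_output PS out \<longleftrightarrow>
     (\<forall>T v. wf_proof_tree T \<and> v \<in> pnodes T \<and> LA T v = PS \<longrightarrow>
        iota (fst PS) (snd PS) \<le> max (max (path_sum T v) (fst out)) (cMax (iota_p ` snd out)) \<and>
        (\<forall>Q \<in> snd out. iota (fst Q) (fst Q - snd Q) \<le> max (path_sum T v) (fst out)))"

definition sound_processor :: "(('f,'v) problem \<Rightarrow> cplx \<times> ('f,'v) problem set) \<Rightarrow> bool" where
  "sound_processor Proc \<longleftrightarrow> (\<forall>PS. adp_problem PS \<longrightarrow> sound_output PS (Proc PS))"

end

theory Submission
  imports Defs
begin

(*
  For the restricted problems only annotations are removed: every chain tree of P|J lifts to a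
  chain tree of P with the same rewrite steps and at least the same annotations, so the
  complexity of P|J relative to P|J \ S|J is bounded by that of P relative to P \ S, which the
  proof tree already bounds.

  For the main inequality, every annotation in a chain tree of P is explained by a path in the
  dependency graph whose last dependency pair created it.  If the ADP of a counted step has a
  dependency pair reaching an SCC, this path extends to an SCC-prefix J, the annotation survives
  the restriction to J, and the step is counted in P|J.  All other counted steps use only
  dependency pairs outside the SCCs and are paid for by a potential: an annotated subterm weighs
  (K+1)^d, where d is the largest number of descendants of an SCC-free dependency pair it can
  reach and K bounds the annotations of a right-hand side.  Such a step lowers the potential by
  at least 1, whereas every other annotated step raises it by at most a constant and is counted
  in some P|J or in P \ S.  Hence the expected number of counted steps is at most a constant
  times one plus the derivation heights of the P|J and of P \ S.
*)

section \<open>Positions, subterms and annotations\<close>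

lemma poss_Nil[simp]: "[] \<in> poss t"
  by (cases t) auto

lemma poss_Var_iff[simp]: "p \<in> poss (Var x) \<longleftrightarrow> p = []"
  by simp

lemma poss_Fun_Cons[simp]: "(i # q) \<in> poss (Fun f b ts) \<longleftrightarrow> i < length ts \<and> q \<in> poss (ts ! i)"
  by auto

declare poss.simps[simp del]

lemma annotated_at_Nil[simp]: "annotated_at t [] \<longleftrightarrow> root_annotated t"
  by (simp add: annotated_at_def)

lemma annotated_at_Var[simp]: "\<not> annotated_at (Var x) q"
  by (cases q) (auto simp: annotated_at_def poss.simps)

lemma annotated_at_Fun_Cons[simp]:
  "annotated_at (Fun f b ts) (i # q) \<longleftrightarrow> i < length ts \<and> annotated_at (ts ! i) q"
  by (auto simp: annotated_at_def)

lemma annotated_at_poss: "annotated_at t p \<Longrightarrow> p \<in> poss t"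
  by (simp add: annotated_at_def)

lemma finite_poss[simp]: "finite (poss t)"
proof (induction t)
  case (Var x) then show ?case by (simp add: poss.simps)
next
  case (Fun f b ts)
  have "poss (Fun f b ts) = insert [] (\<Union>i \<in> {..<length ts}. (Cons i) ` poss (ts ! i))"
    by (simp add: poss.simps)
  then show ?case using Fun by auto
qed

lemma poss_flat[simp]: "poss (flat t) = poss t"
  by (induction t) (auto simp: poss.simps)

lemma flat_flat[simp]: "flat (flat t) = flat t"
  by (induction t) auto

lemma subt_at_flat: "p \<in> poss t \<Longrightarrow> subt_at (flat t) p = flat (subt_at t p)"
proof (induction p arbitrary: t)
  case Nil then show ?case by simp
next
  case (Cons i p) then show ?case by (cases t) auto
qed

lemma flat_replace_at: "flat (replace_at s p u) = replace_at (flat s) p (flat u)"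
proof (induction p arbitrary: s)
  case Nil then show ?case by simp
next
  case (Cons i p) then show ?case
  proof (cases s)
    case (Fun f b ts)
    show ?thesis
    proof (cases "i < length ts")
      case True then show ?thesis using Fun Cons by (simp add: map_update)
    next
      case False then show ?thesis using Fun by (simp add: list_update_beyond)
    qed
  qed simp
qed

lemma flat_flat_above[simp]: "flat (flat_above p t) = flat t"
proof (induction p arbitrary: t)
  case Nil then show ?case by simp
next
  case (Cons i p) then show ?case
  proof (cases t)
    case (Fun f b ts)
    show ?thesis
    proof (cases "i < length ts")
      case True
      then have "(map flat ts)[i := flat (ts ! i)] = map flat ts"
        by (metis list_update_id nth_map)
      then show ?thesis using Fun Cons by (simp add: map_update)
    next
      case False then show ?thesis using Fun by (simp add: list_update_beyond)
    qed
  qed simp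
qed

lemma flat_tsubst: "flat (tsubst t \<sigma>) = tsubst (flat t) (flat \<circ> \<sigma>)"
  by (induction t) auto

lemma unannotated_flat_iff: "flat t = t \<longleftrightarrow> (\<forall>p. \<not> annotated_at t p)"
proof (induction t)
  case (Var x) then show ?case by simp
next
  case (Fun f b ts)
  show ?case
  proof
    assume a: "flat (Fun f b ts) = Fun f b ts"
    then have b: "\<not> b" and c: "\<forall>t\<in>set ts. flat t = t" by (auto simp: map_idI map_eq_conv[symmetric] list_eq_iff_nth_eq)
    show "\<forall>p. \<not> annotated_at (Fun f b ts) p"
    proof
      fix p show "\<not> annotated_at (Fun f b ts) p"
        using b c Fun.IH by (cases p) auto
    qed
  next
    assume a: "\<forall>p. \<not> annotated_at (Fun f b ts) p"
    then have "\<not> b" using a[rule_format, of "[]"] by simp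
    moreover have "\<forall>t\<in>set ts. flat t = t"
    proof
      fix t assume t: "t \<in> set ts"
      then obtain i where i: "i < length ts" "ts ! i = t" by (auto simp: in_set_conv_nth)
      have "\<forall>q. \<not> annotated_at t q" using a i by (metis annotated_at_Fun_Cons)
      then show "flat t = t" using Fun.IH t by blast
    qed
    ultimately show "flat (Fun f b ts) = Fun f b ts" by (simp add: map_idI)
  qed
qed

lemma flat_not_annotated: "\<not> annotated_at (flat t) p"
  using unannotated_flat_iff[of "flat t"] by simp

lemma poss_append: "(p @ q) \<in> poss t \<longleftrightarrow> p \<in> poss t \<and> q \<in> poss (subt_at t p)"
proof (induction p arbitrary: t)
  case Nil then show ?case by simp
next
  case (Cons i p) then show ?case by (cases t) auto
qed

lemma subt_at_append: "p \<in> poss t \<Longrightarrow> subt_at t (p @ q) = subt_at (subt_at t p) q"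
proof (induction p arbitrary: t)
  case Nil then show ?case by simp
next
  case (Cons i p) then show ?case by (cases t) auto
qed

lemma subt_at_tsubst: "p \<in> poss t \<Longrightarrow> subt_at (tsubst t \<sigma>) p = tsubst (subt_at t p) \<sigma>"
proof (induction p arbitrary: t)
  case Nil then show ?case by simp
next
  case (Cons i p) then show ?case by (cases t) auto
qed

lemma annotated_at_tsubst: "annotated_at t p \<Longrightarrow> annotated_at (tsubst t \<sigma>) p"
proof (induction p arbitrary: t)
  case Nil then show ?case by (cases t) auto
next
  case (Cons i p) then show ?case by (cases t) auto
qed

lemma annotated_at_tsubst_rev:
  "annotated_at (tsubst t \<sigma>) p \<Longrightarrow> (\<forall>x \<in> vars t. flat (\<sigma> x) = \<sigma> x) \<Longrightarrow> annotated_at t p"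
proof (induction p arbitrary: t)
  case Nil then show ?case
    by (cases t) (auto, metis aterm.distinct(1) annotated_at_Nil flat_not_annotated)
next
  case (Cons i p) then show ?case
    by (cases t) (auto dest: unannotated_flat_iff[THEN iffD1], meson nth_mem)
qed

lemma flat_tsubst_vars:
  assumes "flat (tsubst t \<sigma>) = tsubst t \<sigma>" "x \<in> vars t"
  shows "flat (\<sigma> x) = \<sigma> x"
  using assms
proof (induction t)
  case (Var y) then show ?case by simp
next
  case (Fun f b ts)
  then obtain t where "t \<in> set ts" "x \<in> vars t" by auto
  moreover have "flat (tsubst t \<sigma>) = tsubst t \<sigma>"
    using Fun.prems(1) \<open>t \<in> set ts\<close> by (auto simp: map_eq_conv)
  ultimately show ?case using Fun.IH by blast
qed

lemma tsubst_flat_comp: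
  assumes "flat (tsubst t \<sigma>) = tsubst t \<sigma>" "flat t = t"
  shows "tsubst t (flat \<circ> \<sigma>) = tsubst t \<sigma>"
  using assms flat_tsubst[of t \<sigma>] by simp

lemma poss_replace_at_above:
  "p \<in> poss s \<Longrightarrow> (p @ w) \<in> poss (replace_at s p u) \<longleftrightarrow> w \<in> poss u"
proof (induction p arbitrary: s)
  case Nil then show ?case by simp
next
  case (Cons i p) then show ?case by (cases s) auto
qed

lemma subt_at_replace_at_above:
  "p \<in> poss s \<Longrightarrow> subt_at (replace_at s p u) (p @ w) = subt_at u w"
proof (induction p arbitrary: s)
  case Nil then show ?case by simp
next
  case (Cons i p) then show ?case by (cases s) auto
qed

lemma annotated_at_replace_at_above:
  "p \<in> poss s \<Longrightarrow> annotated_at (replace_at s p u) (p @ w) \<longleftrightarrow> annotated_at u w"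
  by (simp add: annotated_at_def poss_replace_at_above subt_at_replace_at_above)

lemma annotated_at_replace_at_other:
  "p \<in> poss s \<Longrightarrow> \<not> (\<exists>w. q = p @ w) \<Longrightarrow> annotated_at (replace_at s p u) q \<longleftrightarrow> annotated_at s q"
proof (induction p arbitrary: s q)
  case Nil then show ?case by simp
next
  case (Cons i p)
  then obtain f b ts where s: "s = Fun f b ts" and i: "i < length ts" "p \<in> poss (ts ! i)" by (cases s) auto
  show ?case
  proof (cases q)
    case Nil then show ?thesis using s by simp
  next
    case (Cons j q')
    show ?thesis
    proof (cases "j = i")
      case True
      then have "\<not> (\<exists>w. q' = p @ w)" using Cons Cons.prems by auto
      then show ?thesis using Cons.IH[OF i(2)] s i Cons True by auto
    next
      case False then show ?thesis using s i Cons by auto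
    qed
  qed
qed

lemma subt_at_replace_at_parallel:
  "p \<in> poss s \<Longrightarrow> \<not> (\<exists>w. q = p @ w) \<Longrightarrow> \<not> (\<exists>w. p = q @ w) \<Longrightarrow>
   subt_at (replace_at s p u) q = subt_at s q"
proof (induction p arbitrary: s q)
  case Nil then show ?case by simp
next
  case (Cons i p)
  then obtain f b ts where s: "s = Fun f b ts" and i: "i < length ts" "p \<in> poss (ts ! i)" by (cases s) auto
  show ?case
  proof (cases q)
    case Nil then show ?thesis using Cons.prems by simp
  next
    case (Cons j q')
    show ?thesis
    proof (cases "j = i")
      case True
      then have "\<not> (\<exists>w. q' = p @ w)" "\<not> (\<exists>w. p = q' @ w)" using Cons Cons.prems by auto
      then show ?thesis using Cons.IH[OF i(2)] s i Cons True by auto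
    next
      case False then show ?thesis using s i Cons by auto
    qed
  qed
qed

lemma subt_at_replace_at_below:
  "(q @ w) \<in> poss s \<Longrightarrow> subt_at (replace_at s (q @ w) u) q = replace_at (subt_at s q) w u"
proof (induction q arbitrary: s)
  case Nil then show ?case by simp
next
  case (Cons i q) then show ?case by (cases s) auto
qed

lemma annotated_at_flat_above:
  "p \<in> poss t \<Longrightarrow> annotated_at (flat_above p t) q \<longleftrightarrow> annotated_at t q \<and> \<not> (\<exists>w. w \<noteq> [] \<and> p = q @ w)"
proof (induction p arbitrary: t q)
  case Nil then show ?case by simp
next
  case (Cons i p)
  then obtain f b ts where s: "t = Fun f b ts" and i: "i < length ts" "p \<in> poss (ts ! i)" by (cases t) auto
  show ?case
  proof (cases q)
    case Nil then show ?thesis using s by simp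
  next
    case (Cons j q')
    show ?thesis
    proof (cases "j = i")
      case True
      then show ?thesis using Cons.IH[OF i(2)] s i Cons True by auto
    next
      case False then show ?thesis using s i Cons by auto
    qed
  qed
qed

lemma poss_sharp_root[simp]: "poss (sharp_root x) = poss x"
  by (cases x) (auto simp: poss.simps)

lemma subt_at_sharp_root: "w \<noteq> [] \<Longrightarrow> subt_at (sharp_root x) w = subt_at x w"
  by (cases x; cases w) auto

lemma sharp_root_replace_at: "w \<noteq> [] \<Longrightarrow> sharp_root (replace_at x w u) = replace_at (sharp_root x) w u"
  by (cases x; cases w) auto

lemma proper_subterm_sharp_root: "proper_subterm u (sharp_root x) \<longleftrightarrow> proper_subterm u x"
proof -
  have "\<forall>\<pi>. \<pi> \<noteq> [] \<longrightarrow> subt_at (sharp_root x) \<pi> = subt_at x \<pi>" using subt_at_sharp_root by blast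
  then show ?thesis unfolding proper_subterm_def poss_sharp_root by auto
qed

lemma tsubst_sharp_root: "(\<exists>f b ts. t = Fun f b ts) \<Longrightarrow> tsubst (sharp_root t) \<sigma> = sharp_root (tsubst t \<sigma>)"
  by auto

lemma ANF_sharp: "(\<forall>u. proper_subterm u x \<longrightarrow> NF P u) \<Longrightarrow> ANF P (sharp_root x)"
  unfolding ANF_def by (simp add: proper_subterm_sharp_root)

lemma vars_flat[simp]: "vars (flat t) = vars t"
  by (induction t) auto

lemma ann_is_Fun: "annotated_at r w \<Longrightarrow> \<exists>f ts. flat (subt_at r w) = Fun f False ts"
  unfolding annotated_at_def by (cases "subt_at r w") auto

section \<open>Complexity classes\<close>

lemma le_two_powr: "(x::real) \<le> 2 powr x"
proof (cases "x < 0")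
  case False
  define m where "m = nat \<lfloor>x\<rfloor>"
  have "x < real m + 1" using False unfolding m_def by linarith
  also have "real m + 1 \<le> 2 ^ m"
  proof -
    have "m + 1 \<le> (2::nat) ^ m" using less_exp[of m] by (simp add: Suc_le_eq)
    then have "real (m + 1) \<le> real (2 ^ m)" by (simp only: of_nat_le_iff)
    then show ?thesis by simp
  qed
  also have "(2::real) ^ m = 2 powr real m" by (simp add: powr_realpow)
  also have "\<dots> \<le> 2 powr x" using False unfolding m_def by (intro powr_mono) linarith+
  finally show ?thesis by simp
qed (use powr_ge_zero[of 2 x] in linarith)

lemma bigO_nonneg: "bigO f g \<Longrightarrow> \<exists>c\<ge>0. \<exists>N. \<forall>n\<ge>N. f n \<le> ennreal c * g n"
  unfolding bigO_def by (metis ennreal_eq_0_iff linear)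

lemma bigO_le_trans: "bigO f g \<Longrightarrow> (\<And>n. n \<ge> M \<Longrightarrow> g n \<le> h n) \<Longrightarrow> bigO f h"
  unfolding bigO_def by (meson max.boundedE order.trans mult_left_mono zero_le)

lemma bigO_le: "(\<And>n. h n \<le> f n) \<Longrightarrow> bigO f g \<Longrightarrow> bigO h g"
  unfolding bigO_def by (meson order.trans)

lemma bigO_add: "bigO f g \<Longrightarrow> bigO f' g \<Longrightarrow> bigO (\<lambda>n. f n + f' n) g"
proof -
  assume "bigO f g" "bigO f' g"
  then obtain c N c' N' where c: "c \<ge> 0" "\<forall>n\<ge>N. f n \<le> ennreal c * g n"
    and c': "c' \<ge> 0" "\<forall>n\<ge>N'. f' n \<le> ennreal c' * g n"
    using bigO_nonneg by metis
  have "f n + f' n \<le> ennreal (c + c') * g n" if "max N N' \<le> n" for n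
  proof -
    have "f n + f' n \<le> ennreal c * g n + ennreal c' * g n"
      using c c' that by (intro add_mono) auto
    also have "\<dots> = ennreal (c + c') * g n" using c c' by (simp add: ennreal_plus distrib_right)
    finally show ?thesis .
  qed
  then show ?thesis unfolding bigO_def by blast
qed

lemma bigO_scale: "bigO f g \<Longrightarrow> 0 \<le> d \<Longrightarrow> bigO (\<lambda>n. ennreal d * f n) g"
proof -
  assume "bigO f g" "0 \<le> d"
  then obtain c N where "c \<ge> 0" "\<forall>n\<ge>N. f n \<le> ennreal c * g n"
    using bigO_nonneg by metis
  then have "\<forall>n\<ge>N. ennreal d * f n \<le> ennreal (d * c) * g n"
    using \<open>0 \<le> d\<close> by (metis ennreal_mult mult.assoc mult_left_mono zero_le)
  then show ?thesis unfolding bigO_def by blast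
qed

lemma cplx_le_simps:
  "Pol a \<le> Pol b \<longleftrightarrow> a \<le> b" "Pol 0 \<le> x" "x \<le> Omega"
  by (cases x; simp add: less_eq_cplx_def)+

abbreviation pol_bound :: "nat \<Rightarrow> nat \<Rightarrow> ennreal" where
  "pol_bound a \<equiv> \<lambda>n. ennreal (real n ^ a)"

abbreviation exp_bound :: "real poly \<Rightarrow> nat \<Rightarrow> ennreal" where
  "exp_bound q \<equiv> \<lambda>n. ennreal (2 powr poly q (real n))"

abbreviation dexp_bound :: "real poly \<Rightarrow> nat \<Rightarrow> ennreal" where
  "dexp_bound q \<equiv> \<lambda>n. ennreal (2 powr (2 powr poly q (real n)))"

fun in_cplx :: "(nat \<Rightarrow> ennreal) \<Rightarrow> cplx \<Rightarrow> bool" where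
  "in_cplx f (Pol a) \<longleftrightarrow> bigO f (pol_bound a)"
| "in_cplx f Exp \<longleftrightarrow> (\<exists>q. bigO f (exp_bound q))"
| "in_cplx f TwoExp \<longleftrightarrow> (\<exists>q. bigO f (dexp_bound q))"
| "in_cplx f Fin \<longleftrightarrow> (\<forall>n. f n \<noteq> \<infinity>)"
| "in_cplx f Omega \<longleftrightarrow> True"

lemma in_cplx_cls: "in_cplx f (cls f)"
  unfolding cls_def by (auto intro: LeastI_ex)

lemma cls_le_if_in_cplx: "in_cplx f X \<Longrightarrow> cls f \<le> X"
  unfolding cls_def by (cases X) (auto simp: less_eq_cplx_def intro: Least_le)

lemma in_cplx_Pol_mono:
  assumes "in_cplx f (Pol a)" "a \<le> b"
  shows "in_cplx f (Pol b)"
proof -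
  have "real n ^ a \<le> real n ^ b" if "1 \<le> n" for n
    using that assms(2) by (intro power_increasing) auto
  then show ?thesis using assms(1) by (auto elim!: bigO_le_trans[where M = 1])
qed

lemma in_cplx_Pol_Exp: "in_cplx f (Pol a) \<Longrightarrow> in_cplx f Exp"
  by (auto elim!: bigO_le_trans intro!: exI[of _ "monom 1 a"] simp: poly_monom le_two_powr)

lemma in_cplx_Exp_TwoExp: "in_cplx f Exp \<Longrightarrow> in_cplx f TwoExp"
proof -
  assume "in_cplx f Exp"
  then obtain q where "bigO f (exp_bound q)" by auto
  then have "bigO f (dexp_bound q)"
    by (rule bigO_le_trans[where M = 0]) (intro ennreal_leI powr_mono le_two_powr, simp)
  then show ?thesis by auto
qed

lemma in_cplx_TwoExp_Fin:
  assumes "mono f" "in_cplx f TwoExp"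
  shows "in_cplx f Fin"
proof -
  obtain q where "bigO f (dexp_bound q)" using assms(2) by auto
  then obtain c N where cN: "\<forall>n\<ge>N. f n \<le> ennreal c * dexp_bound q n"
    unfolding bigO_def by blast
  have "f n \<le> f (max n N)" for n using assms(1) by (simp add: monoD)
  moreover have "f (max n N) < \<infinity>" for n
    using cN[rule_format, of "max n N"] by (simp add: order_le_less_trans ennreal_mult_less_top)
  ultimately have "f n < \<infinity>" for n by (rule order_le_less_trans)
  then show ?thesis by (simp add: less_top)
qed

lemma in_cplx_mono:
  assumes "mono f" "in_cplx f X" "X \<le> Y"
  shows "in_cplx f Y"
  using assms(2,3) in_cplx_Pol_mono in_cplx_Pol_Exp in_cplx_Exp_TwoExp in_cplx_TwoExp_Fin[OF assms(1)]
  by (cases X; cases Y) (auto simp: less_eq_cplx_def)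

lemma cls_le_iff_in_cplx: "mono f \<Longrightarrow> cls f \<le> X \<longleftrightarrow> in_cplx f X"
  using in_cplx_mono[OF _ in_cplx_cls] cls_le_if_in_cplx by blast

lemma in_cplx_le: "(\<And>n. h n \<le> f n) \<Longrightarrow> in_cplx f X \<Longrightarrow> in_cplx h X"
  by (cases X) (auto intro: bigO_le simp: top_unique, metis top_unique)

lemma in_cplx_scale: "0 \<le> d \<Longrightarrow> in_cplx f X \<Longrightarrow> in_cplx (\<lambda>n. ennreal d * f n) X"
  by (cases X) (auto intro: bigO_scale simp: ennreal_mult_eq_top_iff)

lemma in_cplx_const: "in_cplx (\<lambda>n. ennreal c) X"
proof (rule in_cplx_mono)
  show "in_cplx (\<lambda>n. ennreal c) (Pol 0)" by (auto simp: bigO_def intro!: exI[of _ c])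
qed (auto simp: mono_def cplx_le_simps)

lemma poly_le_sum_squares:
  "poly q1 x \<le> poly (q1 * q1 + q2 * q2 + 1) (x::real)"
  "poly q2 x \<le> poly (q1 * q1 + q2 * q2 + 1) (x::real)"
proof -
  have "0 \<le> (poly q1 x - 1/2)\<^sup>2 + (poly q2 x)\<^sup>2" "0 \<le> (poly q2 x - 1/2)\<^sup>2 + (poly q1 x)\<^sup>2"
    by simp_all
  then show "poly q1 x \<le> poly (q1 * q1 + q2 * q2 + 1) x" "poly q2 x \<le> poly (q1 * q1 + q2 * q2 + 1) x"
    by (simp_all add: power2_eq_square algebra_simps)
qed

lemma in_cplx_add:
  assumes f: "in_cplx f X" and g: "in_cplx g X"
  shows "in_cplx (\<lambda>n. f n + g n) X"
proof (cases X)
  case Exp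
  then obtain q1 q2 where "bigO f (exp_bound q1)" "bigO g (exp_bound q2)" using f g by auto
  then have "bigO f (exp_bound (q1 * q1 + q2 * q2 + 1))" "bigO g (exp_bound (q1 * q1 + q2 * q2 + 1))"
    by (auto elim!: bigO_le_trans[where M = 0] intro!: ennreal_leI powr_mono simp: poly_le_sum_squares[simplified])
  then show ?thesis unfolding Exp in_cplx.simps by (intro exI bigO_add)
next
  case TwoExp
  then obtain q1 q2 where "bigO f (dexp_bound q1)" "bigO g (dexp_bound q2)" using f g by auto
  then have "bigO f (dexp_bound (q1 * q1 + q2 * q2 + 1))" "bigO g (dexp_bound (q1 * q1 + q2 * q2 + 1))"
    by (auto elim!: bigO_le_trans[where M = 0] intro!: ennreal_leI powr_mono simp: poly_le_sum_squares[simplified])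
  then show ?thesis unfolding TwoExp in_cplx.simps by (intro exI bigO_add)
qed (use f g in \<open>auto intro: bigO_add simp: ennreal_add_eq_top\<close>)

lemma in_cplx_sum:
  "finite A \<Longrightarrow> (\<And>J. J \<in> A \<Longrightarrow> in_cplx (g J) X) \<Longrightarrow> in_cplx (\<lambda>n. \<Sum>J\<in>A. g J n) X"
  by (induction A rule: finite_induct) (auto intro: in_cplx_add in_cplx_const[of 0, simplified])

section \<open>The dependency graph\<close>

lemma finite_dp: "finite (dp \<alpha>)"
proof -
  let ?A = "SIGMA r : snd ` set_mset (rhs \<alpha>). poss r"
  have "dp \<alpha> \<subseteq> (\<lambda>(r, \<pi>). (lhs \<alpha>, Some (flat (subt_at r \<pi>)))) ` ?A"
  proof
    fix x assume "x \<in> dp \<alpha>"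
    then obtain t p r \<pi> where x: "x = (lhs \<alpha>, Some t)" "(p, r) \<in># rhs \<alpha>" "sharp_sub t \<pi> r"
      unfolding dp_def by blast
    then have "(r, \<pi>) \<in> ?A" "t = flat (subt_at r \<pi>)"
      by (auto simp: sharp_sub_def annotated_at_def image_iff intro!: bexI[of _ "(p, r)"])
    then show "x \<in> (\<lambda>(r, \<pi>). (lhs \<alpha>, Some (flat (subt_at r \<pi>)))) ` ?A" using x by force
  qed
  then show ?thesis by (rule finite_subset) auto
qed

lemma finite_dpP: "finite P \<Longrightarrow> finite (dpP P)"
  unfolding dpP_def dp_bot_def by (auto simp: finite_dp)

lemma dg_edges_dpP: "(a, b) \<in> dg_edges P \<Longrightarrow> a \<in> dpP P \<and> b \<in> dpP P"
  by (auto simp: dg_edges_def dg_edge_def)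

lemma trancl_dg_edges_dpP: "(a, b) \<in> (dg_edges P)\<^sup>+ \<Longrightarrow> a \<in> dpP P \<and> b \<in> dpP P"
  by (induction rule: trancl_induct) (auto dest: dg_edges_dpP)

lemma strongly_conn_reaches: "strongly_conn P G \<Longrightarrow> a \<in> G \<Longrightarrow> b \<in> G \<Longrightarrow> reaches P a b"
  unfolding strongly_conn_def reaches_def
  by (meson Int_lower1 rtrancl_mono subsetD trancl_into_rtrancl)

lemma trancl_within_component:
  assumes "(a, z) \<in> (dg_edges P)\<^sup>+" "reaches P x a" "reaches P a x" "reaches P z x"
    and C: "C = {y. reaches P x y \<and> reaches P y x}"
  shows "(a, z) \<in> (dg_edges P \<inter> C \<times> C)\<^sup>+"
  using assms(1-4) unfolding reaches_def
proof (induction rule: trancl_induct)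
  case (base y)
  then have "(x, y) \<in> (dg_edges P)\<^sup>*" by (meson rtrancl.rtrancl_into_rtrancl)
  then show ?case using base C unfolding reaches_def by auto
next
  case (step y z)
  then have yx: "(y, x) \<in> (dg_edges P)\<^sup>*" by (meson converse_rtrancl_into_rtrancl)
  have xy: "(x, y) \<in> (dg_edges P)\<^sup>*"
    using step(1) step(4) by (meson rtrancl_trancl_trancl trancl_into_rtrancl)
  have xz: "(x, z) \<in> (dg_edges P)\<^sup>*" using xy step(2) by (meson rtrancl.rtrancl_into_rtrancl)
  have "(y, z) \<in> dg_edges P \<inter> C \<times> C" using step xy yx xz C unfolding reaches_def by auto
  with step(3)[OF step(4) step(5) yx] show ?case by (rule trancl_into_trancl)
qed

lemma on_cycle_in_SCC:
  assumes fin: "finite P" and cyc: "(x, x) \<in> (dg_edges P)\<^sup>+"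
  shows "\<exists>G. is_SCC P G \<and> x \<in> G"
proof -
  define C where "C = {y. reaches P x y \<and> reaches P y x}"
  have sc: "strongly_conn P C"
    unfolding strongly_conn_def
  proof (intro conjI ballI)
    show "C \<subseteq> dpP P"
    proof
      fix y assume "y \<in> C"
      then have "(x, y) \<in> (dg_edges P)\<^sup>*" unfolding C_def reaches_def by simp
      then show "y \<in> dpP P" using cyc trancl_dg_edges_dpP by (metis rtrancl_eq_or_trancl)
    qed
  next
    fix a b assume a: "a \<in> C" and b: "b \<in> C"
    have ax: "reaches P a x" "reaches P x a" using a unfolding C_def by auto
    have bx: "reaches P x b" "reaches P b x" using b unfolding C_def by auto
    have "(a, x) \<in> (dg_edges P)\<^sup>+" using ax(1) cyc unfolding reaches_def by (rule rtrancl_trancl_trancl)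
    then have "(a, b) \<in> (dg_edges P)\<^sup>+" using bx(1) unfolding reaches_def by (rule trancl_rtrancl_trancl)
    then show "(a, b) \<in> (dg_edges P \<inter> C \<times> C)\<^sup>+"
      using trancl_within_component[OF _ ax(2) ax(1) bx(2) C_def] by blast
  qed
  let ?F = "{G. C \<subseteq> G \<and> strongly_conn P G}"
  have "?F \<subseteq> Pow (dpP P)" by (auto simp: strongly_conn_def)
  then have "finite ?F" using finite_dpP[OF fin] by (meson finite_Pow_iff finite_subset)
  moreover have "C \<in> ?F" using sc by simp
  ultimately obtain G where G: "G \<in> ?F" "C \<subseteq> G" "\<forall>G'\<in>?F. G \<subseteq> G' \<longrightarrow> G = G'"
    using finite_has_maximal2[of ?F C] by blast
  then have "is_SCC P G" unfolding is_SCC_def by auto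
  moreover have "x \<in> C" unfolding C_def reaches_def by simp
  ultimately show ?thesis using G(2) by blast
qed

definition reaches_no_SCC :: "('f,'v) adp set \<Rightarrow> ('f,'v) dpair \<Rightarrow> bool" where
  "reaches_no_SCC P d \<longleftrightarrow> \<not> (\<exists>G. is_SCC P G \<and> (\<exists>g\<in>G. reaches P d g))"

lemma reaches_no_SCC_reaches: "reaches_no_SCC P d \<Longrightarrow> reaches P d e \<Longrightarrow> reaches_no_SCC P e"
  unfolding reaches_no_SCC_def reaches_def by (meson rtrancl_trans)

lemma reaches_no_SCC_acyclic: "finite P \<Longrightarrow> reaches_no_SCC P d \<Longrightarrow> (d, d) \<notin> (dg_edges P)\<^sup>+"
  using on_cycle_in_SCC unfolding reaches_no_SCC_def reaches_def by blast

definition dg_descendants :: "('f,'v) adp set \<Rightarrow> ('f,'v) dpair \<Rightarrow> ('f,'v) dpair set" where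
  "dg_descendants P d = {e. (d, e) \<in> (dg_edges P)\<^sup>+}"

lemma dg_descendants_dpP: "dg_descendants P d \<subseteq> dpP P"
  unfolding dg_descendants_def using trancl_dg_edges_dpP by blast

lemma card_dg_descendants_less:
  assumes fin: "finite P" and d: "reaches_no_SCC P d" and de: "(d, e) \<in> dg_edges P"
  shows "card (dg_descendants P e) < card (dg_descendants P d)"
proof (rule psubset_card_mono)
  show "finite (dg_descendants P d)" using dg_descendants_dpP finite_dpP[OF fin] by (rule finite_subset)
  have "reaches_no_SCC P e" using d de reaches_no_SCC_reaches unfolding reaches_def by blast
  then have "e \<notin> dg_descendants P e" using reaches_no_SCC_acyclic[OF fin] unfolding dg_descendants_def by blast
  then show "dg_descendants P e \<subset> dg_descendants P d" using de unfolding dg_descendants_def by auto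
qed

definition dg_path :: "('f,'v) adp set \<Rightarrow> ('f,'v) dpair list \<Rightarrow> bool" where
  "dg_path P c \<longleftrightarrow> set c \<subseteq> dpP P \<and> (\<forall>i. Suc i < length c \<longrightarrow> (c ! i, c ! Suc i) \<in> dg_edges P)"

lemma dg_path_Nil[simp]: "dg_path P []"
  by (simp add: dg_path_def)

lemma dg_path_snoc:
  assumes c: "dg_path P c" and d: "d \<in> dpP P" and edge: "c \<noteq> [] \<Longrightarrow> (last c, d) \<in> dg_edges P"
  shows "dg_path P (c @ [d])"
  unfolding dg_path_def
proof (intro conjI allI impI)
  show "set (c @ [d]) \<subseteq> dpP P" using c d by (simp add: dg_path_def)
  fix i assume i: "Suc i < length (c @ [d])"
  show "((c @ [d]) ! i, (c @ [d]) ! Suc i) \<in> dg_edges P"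
  proof (cases "Suc i < length c")
    case True then show ?thesis using c by (simp add: dg_path_def nth_append)
  next
    case False
    then have "Suc i = length c" using i by simp
    then have "c \<noteq> []" by auto
    moreover have "i = length c - 1" using \<open>Suc i = length c\<close> by simp
    ultimately show ?thesis using edge by (simp add: nth_append last_conv_nth)
  qed
qed

lemma dg_path_reaches:
  assumes "dg_path P c" "i \<le> j" "j < length c"
  shows "reaches P (c ! i) (c ! j)"
  using assms(2,3)
proof (induction j)
  case (Suc j)
  show ?case
  proof (cases "i = Suc j")
    case False
    then have "reaches P (c ! i) (c ! j)" using Suc by auto
    moreover have "(c ! j, c ! Suc j) \<in> dg_edges P" using assms(1) Suc(3) unfolding dg_path_def by auto
    ultimately show ?thesis unfolding reaches_def by (rule rtrancl_into_rtrancl)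
  qed (simp add: reaches_def)
qed (simp add: reaches_def)

lemma dg_path_reaches_last:
  assumes "dg_path P c" "x \<in> set c"
  shows "reaches P x (last c)"
proof -
  obtain i where "i < length c" "x = c ! i" using assms(2) by (auto simp: in_set_conv_nth)
  moreover from this have "last c = c ! (length c - 1)" by (intro last_conv_nth) auto
  ultimately show ?thesis using dg_path_reaches[OF assms(1), of i "length c - 1"] by simp
qed

lemma dg_path_comparable:
  assumes "dg_path P c" "x \<in> set c" "y \<in> set c"
  shows "reaches P x y \<or> reaches P y x"
proof -
  obtain i j where "i < length c" "x = c ! i" "j < length c" "y = c ! j"
    using assms(2,3) by (auto simp: in_set_conv_nth)
  then show ?thesis using dg_path_reaches[OF assms(1)] by (cases "i \<le> j") auto
qed

lemma prefix_prop_path_SCC: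
  assumes G: "is_SCC P G" and c: "dg_path P c"
    and reach: "c \<noteq> [] \<Longrightarrow> \<exists>g\<in>G. reaches P (last c) g"
  shows "prefix_prop P G (set c \<union> G)"
proof -
  have sc: "strongly_conn P G" using G by (simp add: is_SCC_def)
  have cG: "reaches P x g" if x: "x \<in> set c" and g: "g \<in> G" for x g
  proof -
    have "c \<noteq> []" using x by auto
    then obtain g0 where g0: "g0 \<in> G" "reaches P (last c) g0" using reach by blast
    have "reaches P x (last c)" by (rule dg_path_reaches_last[OF c x])
    then show ?thesis using g0 strongly_conn_reaches[OF sc g0(1) g]
      unfolding reaches_def by (meson rtrancl_trans)
  qed
  show ?thesis
    unfolding prefix_prop_def
  proof (intro conjI ballI)
    show "set c \<union> G \<subseteq> dpP P" using c sc by (auto simp: dg_path_def strongly_conn_def)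
  next
    fix a assume "a \<in> set c \<union> G"
    then show "\<exists>b\<in>G. reaches P a b"
    proof
      assume a: "a \<in> set c"
      then have "c \<noteq> []" by auto
      then obtain g where "g \<in> G" by (meson reach)
      then show ?thesis using cG a by blast
    next
      assume "a \<in> G"
      then show ?thesis unfolding reaches_def by blast
    qed
  next
    fix a b assume "a \<in> set c \<union> G" "b \<in> set c \<union> G"
    then show "reaches P a b \<or> reaches P b a"
      by (elim UnE) (use cG dg_path_comparable[OF c] strongly_conn_reaches[OF sc] in blast)+
  qed
qed

lemma prefix_prop_extends_to_SCC_prefix:
  assumes fin: "finite P" and G: "is_SCC P G" and X: "prefix_prop P G X" "G \<subseteq> X"
  shows "\<exists>J. X \<subseteq> J \<and> SCC_prefix P J"
proof -
  let ?F = "{J. X \<subseteq> J \<and> prefix_prop P G J}"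
  have "?F \<subseteq> Pow (dpP P)" by (auto simp: prefix_prop_def)
  then have "finite ?F" using finite_dpP[OF fin] by (meson finite_Pow_iff finite_subset)
  moreover have "X \<in> ?F" using X by simp
  ultimately obtain J where J: "J \<in> ?F" "X \<subseteq> J" "\<forall>J'\<in>?F. J \<subseteq> J' \<longrightarrow> J = J'"
    using finite_has_maximal2[of ?F X] by blast
  have "SCC_prefix P J"
    unfolding SCC_prefix_def
  proof (intro exI[of _ G] conjI)
    show "\<not> (\<exists>J'. J \<subset> J' \<and> prefix_prop P G J')" using J by blast
  qed (use G X J in auto)
  then show ?thesis using J by blast
qed

lemma finite_SCC_prefixes: "finite P \<Longrightarrow> finite {J. SCC_prefix P J}"
proof -
  assume "finite P"
  moreover have "{J. SCC_prefix P J} \<subseteq> Pow (dpP P)" by (auto simp: SCC_prefix_def prefix_prop_def)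
  ultimately show ?thesis using finite_dpP[of P] by (meson finite_Pow_iff finite_subset)
qed

section \<open>Chain trees\<close>
definition result_term :: "('f,'v) aterm \<Rightarrow> pos \<Rightarrow> ('f,'v) adp \<Rightarrow> ('v \<Rightarrow> ('f,'v) aterm) \<Rightarrow> ('f,'v) aterm \<Rightarrow> ('f,'v) aterm" where
  "result_term s \<pi> \<alpha> \<sigma> r = (if flag \<alpha> \<and> annotated_at s \<pi> then replace_at s \<pi> (tsubst r \<sigma>)
      else if flag \<alpha> \<and> \<not> annotated_at s \<pi> then replace_at s \<pi> (tsubst (flat r) \<sigma>)
      else if \<not> flag \<alpha> \<and> annotated_at s \<pi> then flat_above \<pi> (replace_at s \<pi> (tsubst r \<sigma>))
      else flat_above \<pi> (replace_at s \<pi> (tsubst (flat r) \<sigma>)))"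

lemma adp_result_eq_result_term: "adp_result s \<pi> \<alpha> \<sigma> = image_mset (\<lambda>(p, r). (p, result_term s \<pi> \<alpha> \<sigma> r)) (rhs \<alpha>)"
  unfolding adp_result_def result_term_def by simp

lemma flat_result_term: "flat (result_term s \<pi> \<alpha> \<sigma> r) = replace_at (flat s) \<pi> (tsubst (flat r) (flat \<circ> \<sigma>))"
  unfolding result_term_def by (auto simp: flat_replace_at flat_tsubst)

lemma ex_list_of_image_mset:
  "mset xs = image_mset g M \<Longrightarrow> \<exists>L. mset L = M \<and> map g L = xs"
proof (induction xs arbitrary: M)
  case Nil then show ?case by auto
next
  case (Cons x xs)
  then have "x \<in># image_mset g M" by (metis list.set_intros(1) set_mset_mset)
  then obtain m where m: "m \<in># M" "g m = x" by auto
  then obtain M' where M': "M = add_mset m M'" by (meson mset_add)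
  then have "mset xs = image_mset g M'" using Cons.prems m by simp
  then obtain L' where "mset L' = M'" "map g L' = xs" using Cons.IH by blast
  then show ?case using M' m by (intro exI[of _ "m # L'"]) auto
qed

definition rhs_listing :: "('f,'v) ctree \<Rightarrow> nat list \<Rightarrow> (real \<times> ('f,'v) aterm) list \<Rightarrow> bool" where
  "rhs_listing T v L \<longleftrightarrow> mset L = rhs (crule T v) \<and> length L = nch T v \<and>
     (\<forall>i < nch T v. cprob T (v @ [i]) / cprob T v = fst (L ! i) \<and>
        cterm T (v @ [i]) = result_term (cterm T v) (cpos T v) (crule T v) (csub T v) (snd (L ! i)))"

definition rhs_list :: "('f,'v) ctree \<Rightarrow> nat list \<Rightarrow> (real \<times> ('f,'v) aterm) list" where
  "rhs_list T v = (SOME L. rhs_listing T v L)"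

lemma chain_tree_inner:
  assumes "chain_tree P T" "v \<in> cnodes T" "0 < nch T v"
  shows "adp_redex P (cterm T v) (cpos T v) (crule T v) (csub T v)"
    "mset (map (\<lambda>i. (cprob T (v @ [i]) / cprob T v, cterm T (v @ [i]))) [0..<nch T v])
          = adp_result (cterm T v) (cpos T v) (crule T v) (csub T v)"
  using assms unfolding chain_tree_def by blast+

lemma chain_treeD:
  assumes "chain_tree P T"
  shows "[] \<in> cnodes T" "cprob T [] = 1" "\<forall>w \<in> cnodes T. w \<noteq> [] \<longrightarrow> butlast w \<in> cnodes T"
    "\<forall>v \<in> cnodes T. \<forall>i. v @ [i] \<in> cnodes T \<longleftrightarrow> i < nch T v"
  using assms unfolding chain_tree_def by blast+

lemma rhs_listing_rhs_list:
  assumes "chain_tree P T" "v \<in> cnodes T" "0 < nch T v"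
  shows "rhs_listing T v (rhs_list T v)"
proof -
  let ?g = "\<lambda>(p, r). (p, result_term (cterm T v) (cpos T v) (crule T v) (csub T v) r)"
  have "mset (map (\<lambda>i. (cprob T (v @ [i]) / cprob T v, cterm T (v @ [i]))) [0..<nch T v])
        = image_mset ?g (rhs (crule T v))"
    using chain_tree_inner(2)[OF assms] by (simp add: adp_result_eq_result_term)
  then obtain L where L: "mset L = rhs (crule T v)"
    "map ?g L = map (\<lambda>i. (cprob T (v @ [i]) / cprob T v, cterm T (v @ [i]))) [0..<nch T v]"
    using ex_list_of_image_mset by blast
  have "length (map ?g L) = length (map (\<lambda>i. (cprob T (v @ [i]) / cprob T v, cterm T (v @ [i]))) [0..<nch T v])"
    by (simp only: L(2))
  then have len: "length L = nch T v" by simp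
  have "\<forall>i < nch T v. cprob T (v @ [i]) / cprob T v = fst (L ! i) \<and>
        cterm T (v @ [i]) = result_term (cterm T v) (cpos T v) (crule T v) (csub T v) (snd (L ! i))"
  proof (intro allI impI)
    fix i assume i: "i < nch T v"
    have "map ?g L ! i = map (\<lambda>i. (cprob T (v @ [i]) / cprob T v, cterm T (v @ [i]))) [0..<nch T v] ! i"
      by (simp only: L(2))
    also have "\<dots> = (cprob T (v @ [i]) / cprob T v, cterm T (v @ [i]))" using i by simp
    finally have "?g (L ! i) = (cprob T (v @ [i]) / cprob T v, cterm T (v @ [i]))" using i len by simp
    then show "cprob T (v @ [i]) / cprob T v = fst (L ! i) \<and>
        cterm T (v @ [i]) = result_term (cterm T v) (cpos T v) (crule T v) (csub T v) (snd (L ! i))"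
      using i len by (cases "L ! i") auto
  qed
  then have "rhs_listing T v L" using L len unfolding rhs_listing_def by blast
  then show ?thesis unfolding rhs_list_def by (rule someI)
qed

lemma chain_tree_parent:
  assumes "chain_tree P T" "v @ [i] \<in> cnodes T"
  shows "v \<in> cnodes T" "i < nch T v"
proof -
  have "butlast (v @ [i]) \<in> cnodes T" using assms chain_treeD(3)[OF assms(1)] by blast
  then show v: "v \<in> cnodes T" by simp
  show "i < nch T v" using assms v chain_treeD(4)[OF assms(1)] by blast
qed

lemma NF_cong_lhs:
  assumes "lhs ` P1 = lhs ` P2"
  shows "NF P1 = NF P2"
proof -
  have NF_lhs: "NF P = (\<lambda>t. \<not> (\<exists>\<pi> \<in> poss t. \<exists>l \<in> lhs ` P. \<exists>\<sigma>. flat (subt_at t \<pi>) = tsubst l \<sigma>))"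
    for P :: "('f,'v) adp set"
    unfolding NF_def by blast
  show ?thesis unfolding NF_lhs assms ..
qed

section \<open>Re-annotating chain trees\<close>

fun reann_term_rev :: "('f,'v) ctree \<Rightarrow> ('f,'v) aterm \<Rightarrow> (nat list \<Rightarrow> ('f,'v) adp) \<Rightarrow>
    (nat list \<Rightarrow> (real \<times> ('f,'v) aterm) list) \<Rightarrow> nat list \<Rightarrow> ('f,'v) aterm" where
  "reann_term_rev T t0 \<beta> Lb [] = t0"
| "reann_term_rev T t0 \<beta> Lb (i # rv) = result_term (reann_term_rev T t0 \<beta> Lb rv) (cpos T (rev rv)) (\<beta> (rev rv)) (csub T (rev rv))
      (snd (Lb (rev rv) ! i))"

definition reann_term :: "('f,'v) ctree \<Rightarrow> ('f,'v) aterm \<Rightarrow> (nat list \<Rightarrow> ('f,'v) adp) \<Rightarrow>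
    (nat list \<Rightarrow> (real \<times> ('f,'v) aterm) list) \<Rightarrow> nat list \<Rightarrow> ('f,'v) aterm" where
  "reann_term T t0 \<beta> Lb v = reann_term_rev T t0 \<beta> Lb (rev v)"

lemma reann_term_Nil[simp]: "reann_term T t0 \<beta> Lb [] = t0"
  by (simp add: reann_term_def)

lemma reann_term_snoc[simp]: "reann_term T t0 \<beta> Lb (v @ [i]) = result_term (reann_term T t0 \<beta> Lb v) (cpos T v) (\<beta> v) (csub T v) (snd (Lb v ! i))"
  by (simp add: reann_term_def)

definition reann_tree :: "('f,'v) ctree \<Rightarrow> ('f,'v) aterm \<Rightarrow> (nat list \<Rightarrow> ('f,'v) adp) \<Rightarrow>
    (nat list \<Rightarrow> (real \<times> ('f,'v) aterm) list) \<Rightarrow> ('f,'v) ctree" where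
  "reann_tree T t0 \<beta> Lb = T\<lparr>cterm := reann_term T t0 \<beta> Lb, crule := \<beta>\<rparr>"

text \<open>Data for replaying the steps of a chain tree of PA with ADPs of PB that differ from the
  original ones only in the annotations of their right-hand sides.\<close>

definition reannotation :: "('f,'v) adp set \<Rightarrow> ('f,'v) adp set \<Rightarrow> ('f,'v) ctree \<Rightarrow> ('f,'v) aterm \<Rightarrow>
    (nat list \<Rightarrow> ('f,'v) adp) \<Rightarrow> (nat list \<Rightarrow> (real \<times> ('f,'v) aterm) list) \<Rightarrow> bool" where
  "reannotation PA PB T t0 \<beta> Lb \<longleftrightarrow> chain_tree PA T \<and> flat t0 = flat (cterm T []) \<and> lhs ` PA = lhs ` PB \<and>
    (\<forall>v\<in>cnodes T. 0 < nch T v \<longrightarrow> \<beta> v \<in> PB \<and> lhs (\<beta> v) = lhs (crule T v) \<and>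
       flag (\<beta> v) = flag (crule T v) \<and> mset (Lb v) = rhs (\<beta> v) \<and> length (Lb v) = nch T v \<and>
       (\<forall>i < nch T v. fst (Lb v ! i) = fst (rhs_list T v ! i) \<and> flat (snd (Lb v ! i)) = flat (snd (rhs_list T v ! i))))"

lemma flat_reann_term:
  assumes ok: "reannotation PA PB T t0 \<beta> Lb" and v: "v \<in> cnodes T"
  shows "flat (reann_term T t0 \<beta> Lb v) = flat (cterm T v)"
  using v
proof (induction v rule: rev_induct)
  case Nil then show ?case using ok by (simp add: reannotation_def)
next
  case (snoc i v)
  have ct: "chain_tree PA T" using ok by (simp add: reannotation_def)
  have v: "v \<in> cnodes T" and i: "i < nch T v" using chain_tree_parent[OF ct snoc.prems] by auto
  then have n: "0 < nch T v" by simp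
  have co: "rhs_listing T v (rhs_list T v)" by (rule rhs_listing_rhs_list[OF ct v n])
  have IH: "flat (reann_term T t0 \<beta> Lb v) = flat (cterm T v)" using snoc.IH v by simp
  have fl: "flat (snd (Lb v ! i)) = flat (snd (rhs_list T v ! i))" using ok v n i by (simp add: reannotation_def)
  have "cterm T (v @ [i]) = result_term (cterm T v) (cpos T v) (crule T v) (csub T v) (snd (rhs_list T v ! i))"
    using co i by (simp add: rhs_listing_def)
  then show ?case using IH fl by (simp add: flat_result_term)
qed

lemma reann_tree_simps[simp]:
  "cnodes (reann_tree T t0 \<beta> Lb) = cnodes T" "cprob (reann_tree T t0 \<beta> Lb) = cprob T"
  "nch (reann_tree T t0 \<beta> Lb) = nch T" "cpos (reann_tree T t0 \<beta> Lb) = cpos T"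
  "csub (reann_tree T t0 \<beta> Lb) = csub T" "crule (reann_tree T t0 \<beta> Lb) = \<beta>"
  "cterm (reann_tree T t0 \<beta> Lb) = reann_term T t0 \<beta> Lb"
  by (simp_all add: reann_tree_def)

lemma reannotationD:
  assumes "reannotation PA PB T t0 \<beta> Lb" "v \<in> cnodes T" "0 < nch T v"
  shows "chain_tree PA T" "\<beta> v \<in> PB" "lhs (\<beta> v) = lhs (crule T v)" "flag (\<beta> v) = flag (crule T v)"
    "mset (Lb v) = rhs (\<beta> v)" "length (Lb v) = nch T v"
    "i < nch T v \<Longrightarrow> fst (Lb v ! i) = fst (rhs_list T v ! i)"
    "i < nch T v \<Longrightarrow> flat (snd (Lb v ! i)) = flat (snd (rhs_list T v ! i))"
  using assms unfolding reannotation_def by blast+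

lemma adp_redex_reann_term:
  assumes ok: "reannotation PA PB T t0 \<beta> Lb" and v: "v \<in> cnodes T" and n: "0 < nch T v"
  shows "adp_redex PB (reann_term T t0 \<beta> Lb v) (cpos T v) (\<beta> v) (csub T v)"
proof -
  note b = reannotationD[OF ok v n]
  have red: "adp_redex PA (cterm T v) (cpos T v) (crule T v) (csub T v)"
    by (rule chain_tree_inner(1)[OF b(1) v n])
  have fl: "flat (reann_term T t0 \<beta> Lb v) = flat (cterm T v)" by (rule flat_reann_term[OF ok v])
  have pos: "cpos T v \<in> poss (cterm T v)" using red by (simp add: adp_redex_def)
  then have pos': "cpos T v \<in> poss (reann_term T t0 \<beta> Lb v)" by (metis fl poss_flat)
  have "flat (subt_at (reann_term T t0 \<beta> Lb v) (cpos T v)) = flat (subt_at (cterm T v) (cpos T v))"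
    using fl pos pos' by (metis subt_at_flat)
  moreover have "NF PB = NF PA" using ok NF_cong_lhs by (metis reannotation_def)
  ultimately show ?thesis using red b(2,3) pos' unfolding adp_redex_def by simp
qed

lemma children_reann_term:
  assumes ok: "reannotation PA PB T t0 \<beta> Lb" and v: "v \<in> cnodes T" and n: "0 < nch T v"
  shows "map (\<lambda>i. (cprob T (v @ [i]) / cprob T v, reann_term T t0 \<beta> Lb (v @ [i]))) [0..<nch T v]
    = map (\<lambda>(p, r). (p, result_term (reann_term T t0 \<beta> Lb v) (cpos T v) (\<beta> v) (csub T v) r)) (Lb v)"
proof (rule nth_equalityI)
  note b = reannotationD[OF ok v n]
  show "length (map (\<lambda>i. (cprob T (v @ [i]) / cprob T v, reann_term T t0 \<beta> Lb (v @ [i]))) [0..<nch T v]) =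
      length (map (\<lambda>(p, r). (p, result_term (reann_term T t0 \<beta> Lb v) (cpos T v) (\<beta> v) (csub T v) r)) (Lb v))"
    using b(6) by simp
  fix i assume "i < length (map (\<lambda>i. (cprob T (v @ [i]) / cprob T v, reann_term T t0 \<beta> Lb (v @ [i]))) [0..<nch T v])"
  then have i: "i < nch T v" by simp
  have "cprob T (v @ [i]) / cprob T v = fst (Lb v ! i)"
    using rhs_listing_rhs_list[OF b(1) v n] i b(7) by (simp add: rhs_listing_def)
  then show "map (\<lambda>i. (cprob T (v @ [i]) / cprob T v, reann_term T t0 \<beta> Lb (v @ [i]))) [0..<nch T v] ! i =
      map (\<lambda>(p, r). (p, result_term (reann_term T t0 \<beta> Lb v) (cpos T v) (\<beta> v) (csub T v) r)) (Lb v) ! i"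
    using i b(6) by (cases "Lb v ! i") simp
qed

lemma chain_tree_reann_tree:
  assumes ok: "reannotation PA PB T t0 \<beta> Lb"
  shows "chain_tree PB (reann_tree T t0 \<beta> Lb)"
proof -
  have ct: "chain_tree PA T" using ok by (simp add: reannotation_def)
  have "mset (map (\<lambda>i. (cprob T (v @ [i]) / cprob T v, reann_term T t0 \<beta> Lb (v @ [i]))) [0..<nch T v])
      = adp_result (reann_term T t0 \<beta> Lb v) (cpos T v) (\<beta> v) (csub T v)"
    if "v \<in> cnodes T" "0 < nch T v" for v
    unfolding children_reann_term[OF ok that] adp_result_eq_result_term
    using reannotationD(5)[OF ok that] by (simp add: mset_map)
  then show ?thesis
    using ct adp_redex_reann_term[OF ok] unfolding chain_tree_def by simp
qed

section \<open>Annotated positions of rewrite results\<close>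

lemma annotated_at_tsubst_mono:
  "flat a = flat b \<Longrightarrow> (\<forall>q. annotated_at a q \<longrightarrow> annotated_at b q) \<Longrightarrow>
   annotated_at (tsubst a \<sigma>) q \<Longrightarrow> annotated_at (tsubst b \<sigma>) q"
proof (induction a arbitrary: b q)
  case (Var x)
  then show ?case by (cases b) auto
next
  case (Fun f c ts)
  obtain c' ts' where b: "b = Fun f c' ts'" and m: "map flat ts = map flat ts'"
    using Fun.prems(1) by (cases b) auto
  have len: "length ts' = length ts" using m by (metis length_map)
  have fl: "\<forall>i < length ts. flat (ts ! i) = flat (ts' ! i)"
    using m len by (metis nth_map)
  show ?case
  proof (cases q)
    case Nil
    then have "c" using Fun.prems(3) by simp
    then have "annotated_at (Fun f c ts) []" by simp
    then have "annotated_at (Fun f c' ts') []" using Fun.prems(2) b by blast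
    then show ?thesis using b Nil by simp
  next
    case (Cons i q')
    then have i: "i < length ts" and a: "annotated_at (tsubst (ts ! i) \<sigma>) q'" using Fun.prems(3) by auto
    have "\<forall>q. annotated_at (ts ! i) q \<longrightarrow> annotated_at (ts' ! i) q"
      using Fun.prems(2) b i by (metis annotated_at_Fun_Cons)
    then have "annotated_at (tsubst (ts' ! i) \<sigma>) q'"
      using Fun.IH[OF nth_mem[OF i] fl[rule_format, OF i] _ a] by blast
    then show ?thesis using b Cons i len by simp
  qed
qed

lemma annotated_at_result_term:
  assumes "\<pi> \<in> poss s"
  shows "annotated_at (result_term s \<pi> \<alpha> \<sigma> r) q \<longleftrightarrow>
    (\<not> (\<exists>w. q = \<pi> @ w) \<and> annotated_at s q \<and> (flag \<alpha> \<or> \<not> (\<exists>w. w \<noteq> [] \<and> \<pi> = q @ w))) \<or>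
    (\<exists>w. q = \<pi> @ w \<and> annotated_at (if annotated_at s \<pi> then tsubst r \<sigma> else tsubst (flat r) \<sigma>) w)"
proof -
  define U where "U = (if annotated_at s \<pi> then tsubst r \<sigma> else tsubst (flat r) \<sigma>)"
  have pX: "\<pi> \<in> poss (replace_at s \<pi> U)" using poss_replace_at_above[OF assms, of "[]" U] by simp
  have X: "annotated_at (replace_at s \<pi> U) q \<longleftrightarrow>
      (\<not> (\<exists>w. q = \<pi> @ w) \<and> annotated_at s q) \<or> (\<exists>w. q = \<pi> @ w \<and> annotated_at U w)"
  proof (cases "\<exists>w. q = \<pi> @ w")
    case True
    then obtain w where w: "q = \<pi> @ w" by blast
    show ?thesis using annotated_at_replace_at_above[OF assms, of U w] w by auto
  next
    case False
    show ?thesis using annotated_at_replace_at_other[OF assms False, of U] False by simp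
  qed
  have r: "result_term s \<pi> \<alpha> \<sigma> r = (if flag \<alpha> then replace_at s \<pi> U else flat_above \<pi> (replace_at s \<pi> U))"
    unfolding result_term_def U_def by simp
  have nstrict: "\<not> (\<exists>w'. w' \<noteq> [] \<and> \<pi> = (\<pi> @ w) @ w')" for w by simp
  show ?thesis
  proof (cases "flag \<alpha>")
    case True then show ?thesis using X r U_def by simp
  next
    case False
    have "annotated_at (result_term s \<pi> \<alpha> \<sigma> r) q \<longleftrightarrow>
        annotated_at (replace_at s \<pi> U) q \<and> \<not> (\<exists>w. w \<noteq> [] \<and> \<pi> = q @ w)"
      using r False annotated_at_flat_above[OF pX] by simp
    also have "\<dots> \<longleftrightarrow> (\<not> (\<exists>w. q = \<pi> @ w) \<and> annotated_at s q \<and> \<not> (\<exists>w. w \<noteq> [] \<and> \<pi> = q @ w)) \<or>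
        (\<exists>w. q = \<pi> @ w \<and> annotated_at U w)"
      unfolding X using nstrict by blast
    finally show ?thesis using False U_def by simp
  qed
qed

lemma annotated_at_result_term_mono:
  assumes pos: "\<pi> \<in> poss s" and fs: "flat s' = flat s" and as: "\<forall>q. annotated_at s' q \<longrightarrow> annotated_at s q"
    and fl: "flag \<alpha>' = flag \<alpha>" and fr: "flat r' = flat r" and ar: "\<forall>q. annotated_at r' q \<longrightarrow> annotated_at r q"
    and a: "annotated_at (result_term s' \<pi> \<alpha>' \<sigma> r') q"
  shows "annotated_at (result_term s \<pi> \<alpha> \<sigma> r) q"
proof -
  have pos': "\<pi> \<in> poss s'" using pos fs by (metis poss_flat)
  have U: "annotated_at (if annotated_at s \<pi> then tsubst r \<sigma> else tsubst (flat r) \<sigma>) w"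
    if "annotated_at (if annotated_at s' \<pi> then tsubst r' \<sigma> else tsubst (flat r') \<sigma>) w" for w
  proof (cases "annotated_at s' \<pi>")
    case True
    then have "annotated_at s \<pi>" using as by blast
    then show ?thesis using that True annotated_at_tsubst_mono[OF fr ar] by simp
  next
    case False
    show ?thesis
    proof (cases "annotated_at s \<pi>")
      case True
      have "annotated_at (tsubst (flat r) \<sigma>) w" using that False fr by simp
      then show ?thesis using True annotated_at_tsubst_mono[of "flat r" r] flat_not_annotated by (simp; blast)
    next
      case False2: False
      then show ?thesis using that False fr by simp
    qed
  qed
  show ?thesis using a unfolding annotated_at_result_term[OF pos] annotated_at_result_term[OF pos'] using as fl U by blast
qed

section \<open>Restricting annotations to a set of dependency pairs\<close>

definition restr_rhs :: "('f,'v) adp set \<Rightarrow> ('f,'v) dpair set \<Rightarrow> ('f,'v) adp \<Rightarrow> real \<times> ('f,'v) aterm \<Rightarrow> real \<times> ('f,'v) aterm" where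
  "restr_rhs P J \<alpha> = (\<lambda>(p, r). (p, sharp_Phi (defs P) (Phi J (lhs \<alpha>) r) r))"

lemma restr_simps[simp]: "lhs (restr P J \<alpha>) = lhs \<alpha>" "flag (restr P J \<alpha>) = flag \<alpha>"
  "rhs (restr P J \<alpha>) = image_mset (restr_rhs P J \<alpha>) (rhs \<alpha>)"
  by (simp_all add: restr_def restr_rhs_def)

lemma fst_restr_rhs[simp]: "fst (restr_rhs P J \<alpha> x) = fst x"
  by (cases x) (simp add: restr_rhs_def)

lemma flat_sharp_Phi_at: "flat (sharp_Phi_at D \<Phi> p t) = flat t"
proof (induction t arbitrary: p)
  case (Var x) then show ?case by simp
next
  case (Fun f b ts)
  have "map (\<lambda>i. flat (sharp_Phi_at D \<Phi> (p @ [i]) (ts ! i))) [0..<length ts] = map flat ts"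
    by (rule nth_equalityI) (auto simp: Fun.IH)
  then show ?case by (simp add: comp_def)
qed

lemma flat_restr_rhs[simp]: "flat (snd (restr_rhs P J \<alpha> x)) = flat (snd x)"
  by (cases x) (simp add: restr_rhs_def sharp_Phi_def flat_sharp_Phi_at)

lemma annotated_at_sharp_Phi_at_Phi: "annotated_at (sharp_Phi_at D \<Phi> p t) q \<Longrightarrow> p @ q \<in> \<Phi>"
proof (induction t arbitrary: p q)
  case (Var x) then show ?case by simp
next
  case (Fun f b ts)
  show ?case
  proof (cases q)
    case Nil then show ?thesis using Fun.prems by simp
  next
    case (Cons i q')
    then have i: "i < length ts" and a: "annotated_at (sharp_Phi_at D \<Phi> (p @ [i]) (ts ! i)) q'"
      using Fun.prems by auto
    show ?thesis using Fun.IH[OF nth_mem[OF i] a] Cons by simp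
  qed
qed

lemma annotated_at_sharp_Phi_at: "annotated_at t q \<Longrightarrow> p @ q \<in> \<Phi> \<Longrightarrow> annotated_at (sharp_Phi_at D \<Phi> p t) q"
proof (induction t arbitrary: p q)
  case (Var x) then show ?case by simp
next
  case (Fun f b ts)
  show ?case
  proof (cases q)
    case Nil then show ?thesis using Fun.prems by simp
  next
    case (Cons i q')
    then have i: "i < length ts" and a: "annotated_at (ts ! i) q'"
      using Fun.prems by auto
    have "annotated_at (sharp_Phi_at D \<Phi> (p @ [i]) (ts ! i)) q'"
      using Fun.IH[OF nth_mem[OF i] a] Fun.prems(2) Cons by simp
    then show ?thesis using Cons i by simp
  qed
qed

lemma annotated_at_Phi: "\<pi> \<in> Phi J l r \<Longrightarrow> annotated_at r \<pi>"
  unfolding Phi_def sharp_sub_def by auto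

lemma annotated_at_restr_rhsD: "annotated_at (snd (restr_rhs P J \<alpha> x)) q \<Longrightarrow> annotated_at (snd x) q"
  by (cases x) (auto simp: restr_rhs_def sharp_Phi_def dest!: annotated_at_sharp_Phi_at_Phi intro: annotated_at_Phi)

lemma annotated_at_restr_rhs:
  "annotated_at r q \<Longrightarrow> (lhs \<alpha>, Some (flat (subt_at r q))) \<in> J \<Longrightarrow> annotated_at (snd (restr_rhs P J \<alpha> (p, r))) q"
  unfolding restr_rhs_def sharp_Phi_def
  by (auto intro!: annotated_at_sharp_Phi_at simp: Phi_def sharp_sub_def)

lemma lhs_restr_image: "lhs ` (restr P J ` P) = lhs ` P"
  by (auto simp: image_image)

lemma defs_restr: "defs (restr P J ` P) = defs P"
  unfolding defs_def by auto

lemma basic_restr: "basic (restr P J ` P) = basic P"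
  unfolding basic_def[abs_def] defs_restr by simp

section \<open>Expected derivation heights\<close>

lemma edl_mono:
  assumes "counted_nodes S T \<subseteq> counted_nodes S' T'" "\<forall>v \<in> counted_nodes S T. cprob T v = cprob T' v"
  shows "edl S T \<le> edl S' T'"
  unfolding edl_def
proof (rule SUP_least)
  fix F assume F: "F \<in> {F. finite F \<and> F \<subseteq> counted_nodes S T}"
  then have "(\<Sum>v\<in>F. ennreal (cprob T v)) = (\<Sum>v\<in>F. ennreal (cprob T' v))"
    using assms(2) by (intro sum.cong) auto
  also have "\<dots> \<le> (SUP F \<in> {F. finite F \<and> F \<subseteq> counted_nodes S' T'}. \<Sum>v\<in>F. ennreal (cprob T' v))"
    using F assms(1) by (intro SUP_upper) auto
  finally show "(\<Sum>v\<in>F. ennreal (cprob T v)) \<le> \<dots>" .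
qed

lemma edl_le_edh: "chain_tree P T \<Longrightarrow> cterm T [] = sharp_root t \<Longrightarrow> edl S T \<le> edh P S t"
  unfolding edh_def by (rule SUP_upper) auto

lemma sum_le_edl: "finite F \<Longrightarrow> F \<subseteq> counted_nodes S T \<Longrightarrow> (\<Sum>v\<in>F. ennreal (cprob T v)) \<le> edl S T"
  unfolding edl_def by (rule SUP_upper) auto

definition iota_fun :: "('f,'v) adp set \<Rightarrow> ('f,'v) adp set \<Rightarrow> nat \<Rightarrow> ennreal" where
  "iota_fun P S n = (SUP t \<in> {t. basic P t \<and> tsize t \<le> n}. edh P S t)"

lemma iota_eq_cls_iota_fun: "iota P S = cls (iota_fun P S)"
  unfolding iota_def iota_fun_def by simp

lemma mono_iota_fun: "mono (iota_fun P S)"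
  unfolding iota_fun_def mono_def by (auto intro!: SUP_subset_mono)

lemma iota_fun_mono:
  assumes "\<And>t. basic P t \<Longrightarrow> edh P S t \<le> edh P' S' t" "basic P = basic P'"
  shows "iota_fun P S n \<le> iota_fun P' S' n"
  unfolding iota_fun_def using assms by (intro SUP_mono) auto

section \<open>Lifting chain trees of restricted problems\<close>

definition lift_rule :: "('f,'v) adp set \<Rightarrow> ('f,'v) dpair set \<Rightarrow> ('f,'v) ctree \<Rightarrow> nat list \<Rightarrow> ('f,'v) adp" where
  "lift_rule P J T' v = (SOME \<alpha>. \<alpha> \<in> P \<and> restr P J \<alpha> = crule T' v)"

definition lift_rhs_list :: "('f,'v) adp set \<Rightarrow> ('f,'v) dpair set \<Rightarrow> ('f,'v) ctree \<Rightarrow> nat list \<Rightarrow> (real \<times> ('f,'v) aterm) list" where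
  "lift_rhs_list P J T' v = (SOME L. mset L = rhs (lift_rule P J T' v) \<and> map (restr_rhs P J (lift_rule P J T' v)) L = rhs_list T' v)"

lemma lift_rule:
  assumes "crule T' v \<in> restr P J ` P"
  shows "lift_rule P J T' v \<in> P \<and> restr P J (lift_rule P J T' v) = crule T' v"
proof -
  obtain \<alpha> where "\<alpha> \<in> P" "crule T' v = restr P J \<alpha>" using assms by (rule imageE)
  then have ex: "\<exists>\<alpha>. \<alpha> \<in> P \<and> restr P J \<alpha> = crule T' v" by auto
  show ?thesis unfolding lift_rule_def by (rule someI_ex[OF ex])
qed

lemma lift_rhs_list:
  assumes "crule T' v \<in> restr P J ` P" "mset (rhs_list T' v) = rhs (crule T' v)"
  shows "mset (lift_rhs_list P J T' v) = rhs (lift_rule P J T' v) \<and> map (restr_rhs P J (lift_rule P J T' v)) (lift_rhs_list P J T' v) = rhs_list T' v"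
proof -
  have "restr P J (lift_rule P J T' v) = crule T' v" using lift_rule[OF assms(1)] by blast
  then have "rhs (crule T' v) = image_mset (restr_rhs P J (lift_rule P J T' v)) (rhs (lift_rule P J T' v))"
    by (metis restr_simps(3))
  then have "mset (rhs_list T' v) = image_mset (restr_rhs P J (lift_rule P J T' v)) (rhs (lift_rule P J T' v))"
    using assms(2) by simp
  then have ex: "\<exists>L. mset L = rhs (lift_rule P J T' v) \<and> map (restr_rhs P J (lift_rule P J T' v)) L = rhs_list T' v"
    by (rule ex_list_of_image_mset)
  show ?thesis unfolding lift_rhs_list_def by (rule someI_ex[OF ex])
qed

lemma lift_rhs_list_nth:
  assumes ct: "chain_tree (restr P J ` P) T'" and v: "v \<in> cnodes T'" and n: "0 < nch T' v"
  shows "lift_rule P J T' v \<in> P" "restr P J (lift_rule P J T' v) = crule T' v"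
    "mset (lift_rhs_list P J T' v) = rhs (lift_rule P J T' v)" "length (lift_rhs_list P J T' v) = nch T' v"
    "i < nch T' v \<Longrightarrow> rhs_list T' v ! i = restr_rhs P J (lift_rule P J T' v) (lift_rhs_list P J T' v ! i)"
proof -
  have cr: "crule T' v \<in> restr P J ` P" using chain_tree_inner(1)[OF ct v n] by (simp add: adp_redex_def)
  then show "lift_rule P J T' v \<in> P" "restr P J (lift_rule P J T' v) = crule T' v"
    using lift_rule by blast+
  have co: "rhs_listing T' v (rhs_list T' v)" by (rule rhs_listing_rhs_list[OF ct v n])
  have L: "map (restr_rhs P J (lift_rule P J T' v)) (lift_rhs_list P J T' v) = rhs_list T' v"
    using lift_rhs_list[OF cr] co unfolding rhs_listing_def by auto
  show "mset (lift_rhs_list P J T' v) = rhs (lift_rule P J T' v)"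
    using lift_rhs_list[OF cr] co unfolding rhs_listing_def by auto
  show len: "length (lift_rhs_list P J T' v) = nch T' v"
    using co arg_cong[OF L, of length] unfolding rhs_listing_def by simp
  show "i < nch T' v \<Longrightarrow> rhs_list T' v ! i = restr_rhs P J (lift_rule P J T' v) (lift_rhs_list P J T' v ! i)"
    using L len by (metis nth_map)
qed

definition lift_tree :: "('f,'v) adp set \<Rightarrow> ('f,'v) dpair set \<Rightarrow> ('f,'v) ctree \<Rightarrow> ('f,'v) ctree" where
  "lift_tree P J T' = reann_tree T' (cterm T' []) (lift_rule P J T') (lift_rhs_list P J T')"

lemma reannotation_lift:
  assumes ct: "chain_tree (restr P J ` P) T'"
  shows "reannotation (restr P J ` P) P T' (cterm T' []) (lift_rule P J T') (lift_rhs_list P J T')"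
  unfolding reannotation_def
proof (intro conjI ballI impI)
  fix v assume v: "v \<in> cnodes T'" and n: "0 < nch T' v"
  note L = lift_rhs_list_nth[OF ct v n]
  show "lift_rule P J T' v \<in> P" "mset (lift_rhs_list P J T' v) = rhs (lift_rule P J T' v)"
    "length (lift_rhs_list P J T' v) = nch T' v" by (fact L(1,3,4))+
  show "lhs (lift_rule P J T' v) = lhs (crule T' v)" "flag (lift_rule P J T' v) = flag (crule T' v)"
    using L(2) by (metis restr_simps(1), metis restr_simps(2))
  show "\<forall>i<nch T' v. fst (lift_rhs_list P J T' v ! i) = fst (rhs_list T' v ! i) \<and>
      flat (snd (lift_rhs_list P J T' v ! i)) = flat (snd (rhs_list T' v ! i))"
    using L(5) by simp
qed (simp_all add: ct lhs_restr_image)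

lemma chain_tree_lift_tree: "chain_tree (restr P J ` P) T' \<Longrightarrow> chain_tree P (lift_tree P J T')"
  unfolding lift_tree_def by (rule chain_tree_reann_tree[OF reannotation_lift])

text \<open>Lifting only adds annotations: the rewrite steps are the same, and each right-hand side
  of the restricted problem carries a subset of the annotations of the original one.\<close>

lemma annotated_at_lift_tree:
  assumes ct: "chain_tree (restr P J ` P) T'" and v: "v \<in> cnodes T'"
    and ann: "annotated_at (cterm T' v) q"
  shows "annotated_at (cterm (lift_tree P J T') v) q"
  using v ann unfolding lift_tree_def reann_tree_simps
proof (induction v arbitrary: q rule: rev_induct)
  case (snoc i v)
  have v: "v \<in> cnodes T'" and i: "i < nch T' v" using chain_tree_parent[OF ct snoc.prems(1)] by auto
  then have n: "0 < nch T' v" by simp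
  note L = lift_rhs_list_nth[OF ct v n]
  have pos: "cpos T' v \<in> poss (cterm T' v)"
    using chain_tree_inner(1)[OF ct v n] by (simp add: adp_redex_def)
  have fl: "flat (reann_term T' (cterm T' []) (lift_rule P J T') (lift_rhs_list P J T') v) = flat (cterm T' v)"
    by (rule flat_reann_term[OF reannotation_lift[OF ct] v])
  have pos': "cpos T' v \<in> poss (reann_term T' (cterm T' []) (lift_rule P J T') (lift_rhs_list P J T') v)"
    using pos fl by (metis poss_flat)
  have ch: "cterm T' (v @ [i]) = result_term (cterm T' v) (cpos T' v) (crule T' v) (csub T' v) (snd (rhs_list T' v ! i))"
    using rhs_listing_rhs_list[OF ct v n] i by (simp add: rhs_listing_def)
  show ?case
    unfolding reann_term_snoc
  proof (rule annotated_at_result_term_mono[OF pos' fl[symmetric]])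
    show "\<forall>q. annotated_at (cterm T' v) q \<longrightarrow>
        annotated_at (reann_term T' (cterm T' []) (lift_rule P J T') (lift_rhs_list P J T') v) q"
      using snoc.IH v by blast
    show "flag (crule T' v) = flag (lift_rule P J T' v)" using L(2) by (metis restr_simps(2))
    show "flat (snd (rhs_list T' v ! i)) = flat (snd (lift_rhs_list P J T' v ! i))" using L(5)[OF i] by simp
    show "\<forall>q. annotated_at (snd (rhs_list T' v ! i)) q \<longrightarrow> annotated_at (snd (lift_rhs_list P J T' v ! i)) q"
      using L(5)[OF i] annotated_at_restr_rhsD by metis
  qed (use snoc.prems(2) ch in simp)
qed simp

lemma edh_restr_complement_le:
  "edh (restr P J ` P) (restr P J ` P - restr P J ` S) t \<le> edh P (P - S) t"
  unfolding edh_def[of "restr P J ` P"]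
proof (rule SUP_least, clarify)
  fix T' assume ct: "chain_tree (restr P J ` P) T'" and rt: "cterm T' [] = sharp_root t"
  have "counted_nodes (restr P J ` P - restr P J ` S) T' \<subseteq> counted_nodes (P - S) (lift_tree P J T')"
  proof
    fix v assume "v \<in> counted_nodes (restr P J ` P - restr P J ` S) T'"
    then have v: "v \<in> cnodes T'" "0 < nch T' v" "crule T' v \<notin> restr P J ` S"
      "annotated_at (cterm T' v) (cpos T' v)" unfolding counted_nodes_def by auto
    note L = lift_rhs_list_nth[OF ct v(1,2)]
    have "lift_rule P J T' v \<notin> S" using L(2) v(3) by force
    then show "v \<in> counted_nodes (P - S) (lift_tree P J T')"
      using v L(1) annotated_at_lift_tree[OF ct v(1,4)]
      unfolding counted_nodes_def lift_tree_def by simp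
  qed
  then have "edl (restr P J ` P - restr P J ` S) T' \<le> edl (P - S) (lift_tree P J T')"
    by (rule edl_mono) (simp add: lift_tree_def)
  also have "\<dots> \<le> edh P (P - S) t"
    using chain_tree_lift_tree[OF ct] rt by (intro edl_le_edh) (simp_all add: lift_tree_def)
  finally show "edl (restr P J ` P - restr P J ` S) T' \<le> edh P (P - S) t" .
qed

lemma iota_restr_complement_le:
  "iota (restr P J ` P) (restr P J ` P - restr P J ` S) \<le> iota P (P - S)"
  unfolding iota_eq_cls_iota_fun
proof (rule cls_le_if_in_cplx[OF in_cplx_le[OF _ in_cplx_cls]])
  fix n show "iota_fun (restr P J ` P) (restr P J ` P - restr P J ` S) n \<le> iota_fun P (P - S) n"
    using edh_restr_complement_le basic_restr by (intro iota_fun_mono) auto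
qed

definition unannotated_lhss :: "('f,'v) adp set \<Rightarrow> bool" where
  "unannotated_lhss P \<longleftrightarrow> (\<forall>\<alpha>\<in>P. flat (lhs \<alpha>) = lhs \<alpha>)"

lemma NF_imp_NF_trs:
  assumes lf: "unannotated_lhss P" and nf: "NF P u"
  shows "NF_trs (np P) u"
  unfolding NF_trs_def
proof
  assume "\<exists>\<pi>\<in>poss u. \<exists>(l, r)\<in>np P. \<exists>\<sigma>. subt_at u \<pi> = tsubst l \<sigma>"
  then obtain \<pi> l r \<sigma> where p: "\<pi> \<in> poss u" "(l, r) \<in> np P" "subt_at u \<pi> = tsubst l \<sigma>" by blast
  then obtain \<alpha> where \<alpha>: "\<alpha> \<in> P" "l = lhs \<alpha>" unfolding np_def by blast
  have "flat (subt_at u \<pi>) = tsubst (flat l) (flat \<circ> \<sigma>)" using p(3) by (simp add: flat_tsubst)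
  also have "flat l = l" using lf \<alpha> by (simp add: unannotated_lhss_def)
  finally show False using nf p(1) \<alpha> unfolding NF_def by blast
qed

section \<open>Rewrite steps and the dependency graph\<close>

definition adp_step :: "('f,'v) adp set \<Rightarrow> ('f,'v) aterm \<Rightarrow> pos \<Rightarrow> ('f,'v) adp \<Rightarrow> ('v \<Rightarrow> ('f,'v) aterm) \<Rightarrow> real \<Rightarrow> ('f,'v) aterm \<Rightarrow> bool" where
  "adp_step P s \<pi> \<alpha> \<sigma> p r \<longleftrightarrow> adp_redex P s \<pi> \<alpha> \<sigma> \<and> (p, r) \<in># rhs \<alpha> \<and> unannotated_lhss P \<and>
     vars r \<subseteq> vars (lhs \<alpha>)"

lemma adp_stepD:
  assumes "adp_step P s \<pi> \<alpha> \<sigma> p r"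
  shows "\<pi> \<in> poss s" "\<alpha> \<in> P" "flat (subt_at s \<pi>) = tsubst (lhs \<alpha>) \<sigma>"
    "\<forall>u. proper_subterm u (tsubst (lhs \<alpha>) \<sigma>) \<longrightarrow> NF P u" "(p, r) \<in># rhs \<alpha>" "unannotated_lhss P"
    "vars r \<subseteq> vars (lhs \<alpha>)"
  using assms unfolding adp_step_def adp_redex_def by blast+

lemma adp_step_flat_subst:
  assumes "adp_step P s \<pi> \<alpha> \<sigma> p r"
  shows "tsubst (lhs \<alpha>) (flat \<circ> \<sigma>) = tsubst (lhs \<alpha>) \<sigma>" "\<forall>x \<in> vars r. flat (\<sigma> x) = \<sigma> x"
proof -
  have e: "flat (subt_at s \<pi>) = tsubst (lhs \<alpha>) \<sigma>" using adp_stepD[OF assms] by blast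
  then have ff: "flat (tsubst (lhs \<alpha>) \<sigma>) = tsubst (lhs \<alpha>) \<sigma>" by (metis flat_flat)
  have lf: "flat (lhs \<alpha>) = lhs \<alpha>" using adp_stepD(2,6)[OF assms] by (simp add: unannotated_lhss_def)
  show "tsubst (lhs \<alpha>) (flat \<circ> \<sigma>) = tsubst (lhs \<alpha>) \<sigma>" by (rule tsubst_flat_comp[OF ff lf])
  show "\<forall>x \<in> vars r. flat (\<sigma> x) = \<sigma> x"
    using flat_tsubst_vars[OF ff] adp_stepD(7)[OF assms] by blast
qed

lemma istepI:
  assumes "\<pi> \<in> poss u" "(l, r) \<in> R" "subt_at u \<pi> = tsubst l \<sigma>"
    "\<forall>v. proper_subterm v (tsubst l \<sigma>) \<longrightarrow> NF_trs R v"
  shows "(u, replace_at u \<pi> (tsubst r \<sigma>)) \<in> istep R"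
  using assms unfolding istep_def by blast

lemma flat_subt_at_result_term_above:
  assumes "\<pi> \<in> poss s" "\<pi> = q @ w"
  shows "flat (subt_at (result_term s \<pi> \<alpha> \<sigma> r) q) = replace_at (flat (subt_at s q)) w (tsubst (flat r) (flat \<circ> \<sigma>))"
proof -
  let ?U = "tsubst (flat r) (flat \<circ> \<sigma>)"
  have "\<pi> @ [] \<in> poss (replace_at (flat s) \<pi> ?U)"
    using poss_replace_at_above[of \<pi> "flat s" "[]" ?U] assms(1) by simp
  then have "q \<in> poss (result_term s \<pi> \<alpha> \<sigma> r)"
    using assms(2) poss_append by (metis append_Nil2 flat_result_term poss_flat)
  then have "flat (subt_at (result_term s \<pi> \<alpha> \<sigma> r) q) = subt_at (replace_at (flat s) \<pi> ?U) q"
    using subt_at_flat flat_result_term by metis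
  also have "\<dots> = replace_at (subt_at (flat s) q) w ?U"
    using assms by (simp add: subt_at_replace_at_below)
  also have "subt_at (flat s) q = flat (subt_at s q)"
    using assms poss_append[of q w s] by (simp add: subt_at_flat)
  finally show ?thesis .
qed

lemma adp_step_istep:
  assumes ok: "adp_step P s \<pi> \<alpha> \<sigma> p r" and fl: "flag \<alpha>" and pi: "\<pi> = q @ w" and w: "w \<noteq> []"
  shows "(sharp_root (flat (subt_at s q)), sharp_root (flat (subt_at (result_term s \<pi> \<alpha> \<sigma> r) q))) \<in> istep (np P)"
proof -
  note D = adp_stepD[OF ok]
  have qp: "q \<in> poss s" and wp: "w \<in> poss (subt_at s q)" using D(1) pi poss_append by blast+
  let ?X = "flat (subt_at s q)"
  have "subt_at (sharp_root ?X) w = subt_at ?X w" using w by (rule subt_at_sharp_root)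
  also have "\<dots> = flat (subt_at s \<pi>)" using qp wp pi by (simp add: subt_at_flat subt_at_append)
  also have "\<dots> = tsubst (lhs \<alpha>) (flat \<circ> \<sigma>)" using D(3) adp_step_flat_subst(1)[OF ok] by simp
  finally have "(sharp_root ?X, replace_at (sharp_root ?X) w (tsubst (flat r) (flat \<circ> \<sigma>))) \<in> istep (np P)"
  proof (rule istepI[rotated 2])
    show "w \<in> poss (sharp_root ?X)" using wp by simp
    show "(lhs \<alpha>, flat r) \<in> np P" using D(2,5) fl unfolding np_def by blast
    show "\<forall>u. proper_subterm u (tsubst (lhs \<alpha>) (flat \<circ> \<sigma>)) \<longrightarrow> NF_trs (np P) u"
      using D(4,6) adp_step_flat_subst(1)[OF ok] NF_imp_NF_trs by metis
  qed
  moreover have "sharp_root (flat (subt_at (result_term s \<pi> \<alpha> \<sigma> r) q))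
      = replace_at (sharp_root ?X) w (tsubst (flat r) (flat \<circ> \<sigma>))"
    unfolding flat_subt_at_result_term_above[OF D(1) pi] by (rule sharp_root_replace_at[OF w])
  ultimately show ?thesis by simp
qed

lemma annotated_at_result_term_outside:
  assumes ok: "adp_step P s \<pi> \<alpha> \<sigma> p r"
    and a: "annotated_at (result_term s \<pi> \<alpha> \<sigma> r) q" and nq: "\<not> (\<exists>w. q = \<pi> @ w)"
  shows "annotated_at s q \<and>
    (sharp_root (flat (subt_at s q)), sharp_root (flat (subt_at (result_term s \<pi> \<alpha> \<sigma> r) q))) \<in> (istep (np P))\<^sup>*"
proof -
  note D = adp_stepD[OF ok]
  have disj: "(\<not> (\<exists>w. q = \<pi> @ w) \<and> annotated_at s q \<and> (flag \<alpha> \<or> \<not> (\<exists>w. w \<noteq> [] \<and> \<pi> = q @ w))) \<or>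
    (\<exists>w. q = \<pi> @ w \<and> annotated_at (if annotated_at s \<pi> then tsubst r \<sigma> else tsubst (flat r) \<sigma>) w)"
    using annotated_at_result_term[OF D(1)] a by (rule iffD1)
  have c: "annotated_at s q" "flag \<alpha> \<or> \<not> (\<exists>w. w \<noteq> [] \<and> \<pi> = q @ w)"
    using disj nq by (elim disjE conjE; simp)+
  have qp: "q \<in> poss s" using c(1) by (rule annotated_at_poss)
  show ?thesis
  proof (cases "\<exists>w. \<pi> = q @ w")
    case True
    then obtain w where w: "\<pi> = q @ w" by blast
    then have "w \<noteq> []" using nq by auto
    then have fl: "flag \<alpha>" using c(2) w by blast
    show ?thesis using adp_step_istep[OF ok fl w \<open>w \<noteq> []\<close>] c(1) by blast
  next
    case False
    let ?U = "tsubst (flat r) (flat \<circ> \<sigma>)"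
    have fres: "flat (result_term s \<pi> \<alpha> \<sigma> r) = replace_at (flat s) \<pi> ?U" by (rule flat_result_term)
    have pres: "q \<in> poss (result_term s \<pi> \<alpha> \<sigma> r)" using a by (rule annotated_at_poss)
    have "flat (subt_at (result_term s \<pi> \<alpha> \<sigma> r) q) = subt_at (flat (result_term s \<pi> \<alpha> \<sigma> r)) q"
      using pres by (simp add: subt_at_flat)
    also have "\<dots> = subt_at (flat s) q"
      unfolding fres using D(1) nq False by (simp add: subt_at_replace_at_parallel)
    also have "\<dots> = flat (subt_at s q)" using qp by (simp add: subt_at_flat)
    finally show ?thesis using c(1) by simp
  qed
qed

lemma annotated_at_result_term_inside:
  assumes ok: "adp_step P s \<pi> \<alpha> \<sigma> p r"
    and a: "annotated_at (result_term s \<pi> \<alpha> \<sigma> r) (\<pi> @ w)"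
  shows "annotated_at s \<pi>" "annotated_at r w"
    "flat (subt_at (result_term s \<pi> \<alpha> \<sigma> r) (\<pi> @ w)) = tsubst (flat (subt_at r w)) (flat \<circ> \<sigma>)"
proof -
  note D = adp_stepD[OF ok]
  have sfl: "\<forall>x \<in> vars r. flat (\<sigma> x) = \<sigma> x" by (rule adp_step_flat_subst(2)[OF ok])
  have disj: "(\<not> (\<exists>w'. \<pi> @ w = \<pi> @ w') \<and> annotated_at s (\<pi> @ w) \<and> (flag \<alpha> \<or> \<not> (\<exists>w'. w' \<noteq> [] \<and> \<pi> = (\<pi> @ w) @ w'))) \<or>
    (\<exists>w'. \<pi> @ w = \<pi> @ w' \<and> annotated_at (if annotated_at s \<pi> then tsubst r \<sigma> else tsubst (flat r) \<sigma>) w')"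
    using annotated_at_result_term[OF D(1)] a by (rule iffD1)
  have c: "annotated_at (if annotated_at s \<pi> then tsubst r \<sigma> else tsubst (flat r) \<sigma>) w"
    using disj
  proof (elim disjE)
    assume "\<exists>w'. \<pi> @ w = \<pi> @ w' \<and> annotated_at (if annotated_at s \<pi> then tsubst r \<sigma> else tsubst (flat r) \<sigma>) w'"
    then obtain w' where "\<pi> @ w = \<pi> @ w'" "annotated_at (if annotated_at s \<pi> then tsubst r \<sigma> else tsubst (flat r) \<sigma>) w'"
      by blast
    then show ?thesis by simp
  qed blast
  show as: "annotated_at s \<pi>"
  proof (rule ccontr)
    assume "\<not> annotated_at s \<pi>"
    then have "annotated_at (tsubst (flat r) \<sigma>) w" using c by simp
    then have "annotated_at (flat r) w" using annotated_at_tsubst_rev[of "flat r" \<sigma> w] sfl by simp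
    then show False using flat_not_annotated by blast
  qed
  then have "annotated_at (tsubst r \<sigma>) w" using c by simp
  then show ar: "annotated_at r w" using sfl by (rule annotated_at_tsubst_rev)
  have wp: "w \<in> poss r" using ar by (rule annotated_at_poss)
  have pres: "\<pi> @ w \<in> poss (result_term s \<pi> \<alpha> \<sigma> r)" using a by (rule annotated_at_poss)
  have "flat (subt_at (result_term s \<pi> \<alpha> \<sigma> r) (\<pi> @ w)) = subt_at (flat (result_term s \<pi> \<alpha> \<sigma> r)) (\<pi> @ w)"
    using pres by (simp add: subt_at_flat)
  also have "\<dots> = subt_at (replace_at (flat s) \<pi> (tsubst (flat r) (flat \<circ> \<sigma>))) (\<pi> @ w)"
    by (simp only: flat_result_term)
  also have "\<dots> = subt_at (tsubst (flat r) (flat \<circ> \<sigma>)) w"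
    using D(1) by (simp add: subt_at_replace_at_above)
  also have "\<dots> = tsubst (subt_at (flat r) w) (flat \<circ> \<sigma>)"
    using wp by (simp add: subt_at_tsubst)
  also have "subt_at (flat r) w = flat (subt_at r w)" using wp by (simp add: subt_at_flat)
  finally show "flat (subt_at (result_term s \<pi> \<alpha> \<sigma> r) (\<pi> @ w)) = tsubst (flat (subt_at r w)) (flat \<circ> \<sigma>)" .
qed

definition wf_adps :: "('f,'v) adp set \<Rightarrow> bool" where
  "wf_adps P \<longleftrightarrow> finite P \<and> (\<forall>\<alpha>\<in>P. valid_adp (defs P) \<alpha>)"

lemma wf_adps_unannotated_lhss: "wf_adps P \<Longrightarrow> unannotated_lhss P"
  unfolding wf_adps_def valid_adp_def unannotated_lhss_def unannotated_def by blast

lemma wf_adps_lhs_Fun: "wf_adps P \<Longrightarrow> \<alpha> \<in> P \<Longrightarrow> \<exists>f ts. lhs \<alpha> = Fun f False ts"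
  unfolding wf_adps_def valid_adp_def by blast

lemma wf_adps_rhs: "wf_adps P \<Longrightarrow> \<alpha> \<in> P \<Longrightarrow> (p, r) \<in># rhs \<alpha> \<Longrightarrow> vars r \<subseteq> vars (lhs \<alpha>) \<and> 0 < p"
  unfolding wf_adps_def valid_adp_def by fastforce

lemma wf_adps_sum: "wf_adps P \<Longrightarrow> \<alpha> \<in> P \<Longrightarrow> sum_mset (image_mset fst (rhs \<alpha>)) = 1"
  unfolding wf_adps_def valid_adp_def by blast

lemma finite_wf_adps: "wf_adps P \<Longrightarrow> finite P"
  by (simp add: wf_adps_def)

lemma chain_tree_adp_step:
  assumes ct: "chain_tree P T" and w: "wf_adps P" and v: "v \<in> cnodes T" and n: "0 < nch T v" and i: "i < nch T v"
  shows "adp_step P (cterm T v) (cpos T v) (crule T v) (csub T v) (fst (rhs_list T v ! i)) (snd (rhs_list T v ! i))"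
    "cterm T (v @ [i]) = result_term (cterm T v) (cpos T v) (crule T v) (csub T v) (snd (rhs_list T v ! i))"
    "crule T v \<in> P"
proof -
  have red: "adp_redex P (cterm T v) (cpos T v) (crule T v) (csub T v)" by (rule chain_tree_inner(1)[OF ct v n])
  then show cr: "crule T v \<in> P" by (simp add: adp_redex_def)
  have co: "rhs_listing T v (rhs_list T v)" by (rule rhs_listing_rhs_list[OF ct v n])
  then have "rhs_list T v ! i \<in> set (rhs_list T v)" using i by (simp add: rhs_listing_def)
  then have mem: "(fst (rhs_list T v ! i), snd (rhs_list T v ! i)) \<in># rhs (crule T v)"
    using co by (simp add: rhs_listing_def flip: set_mset_mset)
  show "adp_step P (cterm T v) (cpos T v) (crule T v) (csub T v) (fst (rhs_list T v ! i)) (snd (rhs_list T v ! i))"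
    unfolding adp_step_def using red mem wf_adps_unannotated_lhss[OF w] wf_adps_rhs[OF w cr mem] by blast
  show "cterm T (v @ [i]) = result_term (cterm T v) (cpos T v) (crule T v) (csub T v) (snd (rhs_list T v ! i))"
    using co i by (simp add: rhs_listing_def)
qed

definition dp_creates :: "('f,'v) adp set \<Rightarrow> ('f,'v) dpair \<Rightarrow> ('f,'v) aterm \<Rightarrow> bool" where
  "dp_creates P d u \<longleftrightarrow> (\<exists>l t \<sigma>. d = (l, Some t) \<and> ANF P (tsubst (sharp_root l) \<sigma>) \<and>
      (tsubst (sharp_root t) \<sigma>, sharp_root u) \<in> (istep (np P))\<^sup>*)"

lemma adp_step_ANF:
  assumes ok: "adp_step P s \<pi> \<alpha> \<sigma> p r" and lf: "\<exists>f ts. lhs \<alpha> = Fun f False ts"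
  shows "ANF P (tsubst (sharp_root (lhs \<alpha>)) (flat \<circ> \<sigma>))"
    "tsubst (sharp_root (lhs \<alpha>)) (flat \<circ> \<sigma>) = sharp_root (flat (subt_at s \<pi>))"
proof -
  note D = adp_stepD[OF ok]
  have e: "tsubst (sharp_root (lhs \<alpha>)) (flat \<circ> \<sigma>) = sharp_root (tsubst (lhs \<alpha>) (flat \<circ> \<sigma>))"
    using lf by (intro tsubst_sharp_root) auto
  also have "tsubst (lhs \<alpha>) (flat \<circ> \<sigma>) = tsubst (lhs \<alpha>) \<sigma>" by (rule adp_step_flat_subst(1)[OF ok])
  finally have e2: "tsubst (sharp_root (lhs \<alpha>)) (flat \<circ> \<sigma>) = sharp_root (tsubst (lhs \<alpha>) \<sigma>)" .
  then show "ANF P (tsubst (sharp_root (lhs \<alpha>)) (flat \<circ> \<sigma>))" using ANF_sharp D(4) by metis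
  show "tsubst (sharp_root (lhs \<alpha>)) (flat \<circ> \<sigma>) = sharp_root (flat (subt_at s \<pi>))" using e2 D(3) by simp
qed

lemma dg_edge_if_dp_creates:
  assumes ok: "adp_step P s \<pi> \<alpha> \<sigma> p r" and lf: "\<exists>f ts. lhs \<alpha> = Fun f False ts"
    and cr: "dp_creates P d1 (flat (subt_at s \<pi>))" and d1: "d1 \<in> dpP P" and d2: "d2 \<in> dpP P"
    and f2: "fst d2 = lhs \<alpha>"
  shows "(d1, d2) \<in> dg_edges P"
proof -
  obtain l t \<sigma>1 where c: "d1 = (l, Some t)" "ANF P (tsubst (sharp_root l) \<sigma>1)"
    "(tsubst (sharp_root t) \<sigma>1, sharp_root (flat (subt_at s \<pi>))) \<in> (istep (np P))\<^sup>*"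
    using cr unfolding dp_creates_def by blast
  note SA = adp_step_ANF[OF ok lf]
  have ex: "\<exists>\<sigma>1' \<sigma>2. (tsubst (sharp_root t) \<sigma>1', tsubst (sharp_root (fst d2)) \<sigma>2) \<in> (istep (np P))\<^sup>* \<and>
          ANF P (tsubst (sharp_root (fst d1)) \<sigma>1') \<and> ANF P (tsubst (sharp_root (fst d2)) \<sigma>2)"
    using c SA f2 by (intro exI[of _ \<sigma>1] exI[of _ "flat \<circ> \<sigma>"]) simp
  have "dg_edge P d1 d2"
    unfolding dg_edge_def using d1 d2 c(1) ex by simp
  then show ?thesis by (simp add: dg_edges_def)
qed

lemma dp_of_annotated:
  assumes "\<alpha> \<in> P" "(p, r) \<in># rhs \<alpha>" "annotated_at r w"
  shows "(lhs \<alpha>, Some (flat (subt_at r w))) \<in> dp \<alpha>" "(lhs \<alpha>, Some (flat (subt_at r w))) \<in> dpP P"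
proof -
  show m: "(lhs \<alpha>, Some (flat (subt_at r w))) \<in> dp \<alpha>"
    unfolding dp_def sharp_sub_def using assms(2,3) by blast
  then have "dp_bot \<alpha> = dp \<alpha>" by (auto simp: dp_bot_def)
  then show "(lhs \<alpha>, Some (flat (subt_at r w))) \<in> dpP P"
    using m assms(1) unfolding dpP_def by blast
qed

lemma dp_bot_fst: "d \<in> dp_bot \<alpha> \<Longrightarrow> fst d = lhs \<alpha>"
  unfolding dp_bot_def dp_def by (auto split: if_splits)

lemma dp_bot_dpP: "\<alpha> \<in> P \<Longrightarrow> d \<in> dp_bot \<alpha> \<Longrightarrow> d \<in> dpP P"
  unfolding dpP_def by blast

lemma dp_bot_ne: "dp_bot \<alpha> \<noteq> {}"
  unfolding dp_bot_def by auto

section \<open>Tracing annotations along paths of the dependency graph\<close>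

definition restr_rule :: "('f,'v) adp set \<Rightarrow> ('f,'v) dpair set \<Rightarrow> ('f,'v) ctree \<Rightarrow> nat list \<Rightarrow> ('f,'v) adp" where
  "restr_rule P J T v = restr P J (crule T v)"

definition restr_rhs_list :: "('f,'v) adp set \<Rightarrow> ('f,'v) dpair set \<Rightarrow> ('f,'v) ctree \<Rightarrow> nat list \<Rightarrow>
    (real \<times> ('f,'v) aterm) list" where
  "restr_rhs_list P J T v = map (restr_rhs P J (crule T v)) (rhs_list T v)"

definition restr_tree :: "('f,'v) adp set \<Rightarrow> ('f,'v) dpair set \<Rightarrow> ('f,'v) ctree \<Rightarrow> ('f,'v) ctree" where
  "restr_tree P J T = reann_tree T (cterm T []) (restr_rule P J T) (restr_rhs_list P J T)"

definition restr_term :: "('f,'v) adp set \<Rightarrow> ('f,'v) dpair set \<Rightarrow> ('f,'v) ctree \<Rightarrow> nat list \<Rightarrow> ('f,'v) aterm" where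
  "restr_term P J T = reann_term T (cterm T []) (restr_rule P J T) (restr_rhs_list P J T)"

lemma reannotation_restr:
  assumes ct: "chain_tree P T"
  shows "reannotation P (restr P J ` P) T (cterm T []) (restr_rule P J T) (restr_rhs_list P J T)"
  unfolding reannotation_def
proof (intro conjI ballI impI)
  show "chain_tree P T" by (rule ct)
  show "flat (cterm T []) = flat (cterm T [])" ..
  show "lhs ` P = lhs ` restr P J ` P" by (rule lhs_restr_image[symmetric])
  fix v assume v: "v \<in> cnodes T" and n: "0 < nch T v"
  have cr: "crule T v \<in> P" using chain_tree_inner(1)[OF ct v n] by (simp add: adp_redex_def)
  have co: "rhs_listing T v (rhs_list T v)" by (rule rhs_listing_rhs_list[OF ct v n])
  show "restr_rule P J T v \<in> restr P J ` P" using cr by (simp add: restr_rule_def)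
  show "lhs (restr_rule P J T v) = lhs (crule T v)" by (simp add: restr_rule_def)
  show "flag (restr_rule P J T v) = flag (crule T v)" by (simp add: restr_rule_def)
  show "mset (restr_rhs_list P J T v) = rhs (restr_rule P J T v)" using co by (simp add: restr_rule_def restr_rhs_list_def rhs_listing_def)
  show "length (restr_rhs_list P J T v) = nch T v" using co by (simp add: restr_rhs_list_def rhs_listing_def)
  show "\<forall>i<nch T v. fst (restr_rhs_list P J T v ! i) = fst (rhs_list T v ! i) \<and> flat (snd (restr_rhs_list P J T v ! i)) = flat (snd (rhs_list T v ! i))"
    using co by (simp add: restr_rhs_list_def rhs_listing_def)
qed

lemma restr_term_snoc: "restr_term P J T (v @ [i]) = result_term (restr_term P J T v) (cpos T v) (restr P J (crule T v)) (csub T v) (snd (restr_rhs_list P J T v ! i))"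
  by (simp add: restr_term_def restr_rule_def)

lemma chain_tree_restr_tree: "chain_tree P T \<Longrightarrow> chain_tree (restr P J ` P) (restr_tree P J T)"
  unfolding restr_tree_def by (rule chain_tree_reann_tree[OF reannotation_restr])

lemma restr_rhs_list_nth:
  assumes "chain_tree P T" "v \<in> cnodes T" "0 < nch T v" "i < nch T v"
  shows "restr_rhs_list P J T v ! i = restr_rhs P J (crule T v) (rhs_list T v ! i)"
proof -
  have "length (rhs_list T v) = nch T v" using rhs_listing_rhs_list[OF assms(1-3)] by (simp add: rhs_listing_def)
  then show ?thesis using assms(4) by (simp add: restr_rhs_list_def)
qed

lemma dp_creates_istep:
  "dp_creates P d u \<Longrightarrow> (sharp_root u, sharp_root u') \<in> (istep (np P))\<^sup>* \<Longrightarrow> dp_creates P d u'"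
  unfolding dp_creates_def by (blast intro: rtrancl_trans)

text \<open>The invariant behind the dependency graph processor: every annotation of a term in a
  chain tree is explained by a path in the dependency graph whose last pair creates the
  annotated subterm, and the annotation survives in the restriction to any set of dependency
  pairs containing that path.\<close>

definition traced :: "('f,'v) adp set \<Rightarrow> ('f,'v) dpair list \<Rightarrow> ('f,'v) aterm \<Rightarrow>
    (('f,'v) dpair set \<Rightarrow> ('f,'v) aterm) \<Rightarrow> pos \<Rightarrow> bool" where
  "traced P c s s_restr q \<longleftrightarrow> dg_path P c \<and>
     (c \<noteq> [] \<longrightarrow> dp_creates P (last c) (flat (subt_at s q))) \<and>
     (\<forall>J. set c \<subseteq> J \<longrightarrow> annotated_at (s_restr J) q)"

lemma traced_step_outside:
  assumes ok: "adp_step P s \<pi> \<alpha> \<sigma> p r" and fl: "\<And>J. flat (s_restr J) = flat s"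
    and a: "annotated_at (result_term s \<pi> \<alpha> \<sigma> r) q" and nq: "\<not> (\<exists>w. q = \<pi> @ w)"
    and tr: "traced P c s s_restr q"
  shows "traced P c (result_term s \<pi> \<alpha> \<sigma> r)
    (\<lambda>J. result_term (s_restr J) \<pi> (restr P J \<alpha>) \<sigma> (snd (restr_rhs P J \<alpha> (p, r)))) q"
proof -
  note D = adp_stepD[OF ok]
  have steps: "(sharp_root (flat (subt_at s q)), sharp_root (flat (subt_at (result_term s \<pi> \<alpha> \<sigma> r) q)))
      \<in> (istep (np P))\<^sup>*"
    using annotated_at_result_term_outside[OF ok a nq] by blast
  have kept: "flag \<alpha> \<or> \<not> (\<exists>w. w \<noteq> [] \<and> \<pi> = q @ w)"
    using a nq unfolding annotated_at_result_term[OF D(1)] by blast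
  have "annotated_at (result_term (s_restr J) \<pi> (restr P J \<alpha>) \<sigma> (snd (restr_rhs P J \<alpha> (p, r)))) q"
    if "set c \<subseteq> J" for J
  proof -
    have pos: "\<pi> \<in> poss (s_restr J)" using D(1) fl by (metis poss_flat)
    show ?thesis unfolding annotated_at_result_term[OF pos]
      using nq kept tr that by (simp add: traced_def)
  qed
  then show ?thesis using tr steps dp_creates_istep unfolding traced_def by blast
qed

lemma traced_step_inside:
  assumes ok: "adp_step P s \<pi> \<alpha> \<sigma> p r" and lf: "\<exists>f ts. lhs \<alpha> = Fun f False ts"
    and fl: "\<And>J. flat (s_restr J) = flat s"
    and a: "annotated_at (result_term s \<pi> \<alpha> \<sigma> r) (\<pi> @ w)" and tr: "traced P c s s_restr \<pi>"
  shows "traced P (c @ [(lhs \<alpha>, Some (flat (subt_at r w)))]) (result_term s \<pi> \<alpha> \<sigma> r)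
    (\<lambda>J. result_term (s_restr J) \<pi> (restr P J \<alpha>) \<sigma> (snd (restr_rhs P J \<alpha> (p, r)))) (\<pi> @ w)"
proof -
  note D = adp_stepD[OF ok]
  note new = annotated_at_result_term_inside[OF ok a]
  define d where "d = (lhs \<alpha>, Some (flat (subt_at r w)))"
  have dP: "d \<in> dpP P" unfolding d_def using dp_of_annotated(2)[OF D(2) D(5) new(2)] .
  have c: "dg_path P c" "c \<noteq> [] \<Longrightarrow> dp_creates P (last c) (flat (subt_at s \<pi>))"
    "set c \<subseteq> J \<Longrightarrow> annotated_at (s_restr J) \<pi>" for J
    using tr unfolding traced_def by blast+
  have path: "dg_path P (c @ [d])"
  proof (rule dg_path_snoc[OF c(1) dP])
    assume "c \<noteq> []"
    moreover from this have "last c \<in> dpP P" using c(1) unfolding dg_path_def by auto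
    ultimately show "(last c, d) \<in> dg_edges P"
      using dg_edge_if_dp_creates[OF ok lf c(2) _ dP] by (simp add: d_def)
  qed
  have "\<exists>f ts. flat (subt_at r w) = Fun f False ts" by (rule ann_is_Fun[OF new(2)])
  then have "tsubst (sharp_root (flat (subt_at r w))) (flat \<circ> \<sigma>)
      = sharp_root (flat (subt_at (result_term s \<pi> \<alpha> \<sigma> r) (\<pi> @ w)))"
    using new(3) by auto
  then have creates: "dp_creates P d (flat (subt_at (result_term s \<pi> \<alpha> \<sigma> r) (\<pi> @ w)))"
    unfolding dp_creates_def d_def using adp_step_ANF(1)[OF ok lf] by auto
  have "annotated_at (result_term (s_restr J) \<pi> (restr P J \<alpha>) \<sigma> (snd (restr_rhs P J \<alpha> (p, r)))) (\<pi> @ w)"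
    if J: "set (c @ [d]) \<subseteq> J" for J
  proof -
    have "annotated_at (snd (restr_rhs P J \<alpha> (p, r))) w"
      using J by (intro annotated_at_restr_rhs[OF new(2)]) (simp add: d_def)
    moreover have "\<pi> \<in> poss (s_restr J)" using D(1) fl by (metis poss_flat)
    ultimately show ?thesis unfolding annotated_at_result_term[OF \<open>\<pi> \<in> poss (s_restr J)\<close>]
      using c(3) J by (auto intro: annotated_at_tsubst)
  qed
  then show ?thesis using path creates unfolding traced_def d_def by auto
qed

lemma annotations_traced:
  assumes ct: "chain_tree P T" and w: "wf_adps P" and v: "v \<in> cnodes T"
    and a: "annotated_at (cterm T v) q"
  shows "\<exists>c. traced P c (cterm T v) (\<lambda>J. restr_term P J T v) q"
  using v a
proof (induction v arbitrary: q rule: rev_induct)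
  case Nil
  show ?case by (intro exI[of _ "[]"]) (simp add: traced_def restr_term_def Nil.prems)
next
  case (snoc i v)
  have v: "v \<in> cnodes T" and i: "i < nch T v" using chain_tree_parent[OF ct snoc.prems(1)] by auto
  then have n: "0 < nch T v" by simp
  obtain p r where pr: "rhs_list T v ! i = (p, r)" by fastforce
  let ?s = "cterm T v" and ?\<pi> = "cpos T v" and ?\<alpha> = "crule T v" and ?\<sigma> = "csub T v"
  have ok: "adp_step P ?s ?\<pi> ?\<alpha> ?\<sigma> p r" and ch: "cterm T (v @ [i]) = result_term ?s ?\<pi> ?\<alpha> ?\<sigma> r"
    and lf: "\<exists>f ts. lhs ?\<alpha> = Fun f False ts"
    using chain_tree_adp_step[OF ct w v n i] wf_adps_lhs_Fun[OF w] pr by auto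
  have fl: "flat (restr_term P J T v) = flat ?s" for J
    using flat_reann_term[OF reannotation_restr[OF ct] v] by (simp add: restr_term_def)
  have chJ: "restr_term P J T (v @ [i])
      = result_term (restr_term P J T v) ?\<pi> (restr P J ?\<alpha>) ?\<sigma> (snd (restr_rhs P J ?\<alpha> (p, r)))" for J
    using restr_term_snoc restr_rhs_list_nth[OF ct v n i] pr by metis
  have a: "annotated_at (result_term ?s ?\<pi> ?\<alpha> ?\<sigma> r) q" using snoc.prems(2) ch by simp
  show ?case
  proof (cases "\<exists>w. q = ?\<pi> @ w")
    case True
    then obtain w where q: "q = ?\<pi> @ w" by blast
    obtain c where "traced P c ?s (\<lambda>J. restr_term P J T v) ?\<pi>"
      using snoc.IH[OF v annotated_at_result_term_inside(1)[OF ok a[unfolded q]]] by blast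
    from traced_step_inside[OF ok lf fl a[unfolded q] this] show ?thesis
      unfolding ch chJ q by blast
  next
    case False
    obtain c where "traced P c ?s (\<lambda>J. restr_term P J T v) q"
      using snoc.IH[OF v] annotated_at_result_term_outside[OF ok a False] by blast
    from traced_step_outside[OF ok fl a False this] show ?thesis
      unfolding ch chJ by blast
  qed
qed

lemma counted_in_restr_tree:
  assumes ct: "chain_tree P T" and w: "wf_adps P" and vc: "v \<in> counted_nodes S T"
    and d2: "d2 \<in> dp_bot (crule T v)" and nt: "\<not> reaches_no_SCC P d2"
  shows "\<exists>J. SCC_prefix P J \<and> v \<in> counted_nodes (restr P J ` S) (restr_tree P J T)"
proof -
  have v: "v \<in> cnodes T" and n: "0 < nch T v" and cS: "crule T v \<in> S"
    and an: "annotated_at (cterm T v) (cpos T v)" using vc unfolding counted_nodes_def by auto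
  have fin: "finite P" using w by (simp add: wf_adps_def)
  have ok: "adp_step P (cterm T v) (cpos T v) (crule T v) (csub T v) (fst (rhs_list T v ! 0)) (snd (rhs_list T v ! 0))"
    and aP: "crule T v \<in> P" using chain_tree_adp_step[OF ct w v n n] by auto
  have lf: "\<exists>f ts. lhs (crule T v) = Fun f False ts" using wf_adps_lhs_Fun[OF w aP] .
  obtain c where c: "dg_path P c" "c \<noteq> [] \<longrightarrow> dp_creates P (last c) (flat (subt_at (cterm T v) (cpos T v)))"
    "\<forall>J. set c \<subseteq> J \<longrightarrow> annotated_at (restr_term P J T v) (cpos T v)"
    using annotations_traced[OF ct w v an] unfolding traced_def by blast
  obtain G g where G: "is_SCC P G" "g \<in> G" "reaches P d2 g" using nt unfolding reaches_no_SCC_def by blast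
  have d2P: "d2 \<in> dpP P" using dp_bot_dpP[OF aP d2] .
  have reach: "\<exists>g\<in>G. reaches P (last c) g" if ne: "c \<noteq> []"
  proof -
    have lc: "last c \<in> dpP P" using c(1) ne unfolding dg_path_def by auto
    have "(last c, d2) \<in> dg_edges P"
      using dg_edge_if_dp_creates[OF ok lf _ lc d2P dp_bot_fst[OF d2]] c(2) ne by blast
    then show ?thesis using G(2,3) unfolding reaches_def by (meson converse_rtrancl_into_rtrancl)
  qed
  have pp: "prefix_prop P G (set c \<union> G)" by (rule prefix_prop_path_SCC[OF G(1) c(1) reach])
  obtain J where J: "set c \<union> G \<subseteq> J" "SCC_prefix P J"
    using prefix_prop_extends_to_SCC_prefix[OF fin G(1) pp] by blast
  have "annotated_at (restr_term P J T v) (cpos T v)" using c(3) J(1) by blast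
  then have "v \<in> counted_nodes (restr P J ` S) (restr_tree P J T)"
    unfolding counted_nodes_def restr_tree_def using v n cS by (simp add: restr_rule_def restr_term_def)
  then show ?thesis using J(2) by blast
qed

section \<open>Weights and potential of terms\<close>

definition ann_poss :: "('f,'v) aterm \<Rightarrow> pos set" where
  "ann_poss t = {q. annotated_at t q}"

lemma finite_ann_poss[simp]: "finite (ann_poss t)"
proof -
  have "ann_poss t \<subseteq> poss t" unfolding ann_poss_def using annotated_at_poss by blast
  then show ?thesis using finite_poss finite_subset by blast
qed

definition reachable_dps :: "('f,'v) adp set \<Rightarrow> ('f,'v) aterm \<Rightarrow> ('f,'v) dpair set" where
  "reachable_dps P u = {d \<in> dpP P. \<exists>\<sigma>2. (sharp_root u, tsubst (sharp_root (fst d)) \<sigma>2) \<in> (istep (np P))\<^sup>* \<and>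
      ANF P (tsubst (sharp_root (fst d)) \<sigma>2)}"

definition dp_weight :: "('f,'v) adp set \<Rightarrow> nat \<Rightarrow> ('f,'v) dpair \<Rightarrow> real" where
  "dp_weight P K d = (real K + 1) ^ card (dg_descendants P d)"

definition term_weight :: "('f,'v) adp set \<Rightarrow> nat \<Rightarrow> ('f,'v) aterm \<Rightarrow> real" where
  "term_weight P K u = Max (insert 0 (dp_weight P K ` {d \<in> reachable_dps P u. reaches_no_SCC P d}))"

definition max_weight :: "('f,'v) adp set \<Rightarrow> nat \<Rightarrow> real" where
  "max_weight P K = (real K + 1) ^ card (dpP P)"

definition pos_weight :: "('f,'v) adp set \<Rightarrow> nat \<Rightarrow> ('f,'v) aterm \<Rightarrow> pos \<Rightarrow> real" where
  "pos_weight P K t q = term_weight P K (flat (subt_at t q))"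

definition potential :: "('f,'v) adp set \<Rightarrow> nat \<Rightarrow> ('f,'v) aterm \<Rightarrow> real" where
  "potential P K t = (\<Sum>q\<in>ann_poss t. pos_weight P K t q)"

lemma finite_reachable_dps: "finite P \<Longrightarrow> finite (reachable_dps P u)"
  unfolding reachable_dps_def by (rule finite_subset[OF _ finite_dpP]) auto

lemma finite_weights: "finite P \<Longrightarrow> finite (dp_weight P K ` {d \<in> reachable_dps P u. reaches_no_SCC P d})"
  by (rule finite_imageI, rule finite_subset[OF _ finite_reachable_dps]) auto

lemma max_weight_nonneg: "0 \<le> max_weight P K"
  unfolding max_weight_def by simp

lemma dp_weight_ge_1: "1 \<le> dp_weight P K d"
  unfolding dp_weight_def by simp

lemma term_weight_nonneg: "finite P \<Longrightarrow> 0 \<le> term_weight P K u"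
  unfolding term_weight_def using finite_weights by (intro Max_ge) auto

lemma dp_weight_le_term_weight: "finite P \<Longrightarrow> d \<in> reachable_dps P u \<Longrightarrow> reaches_no_SCC P d \<Longrightarrow> dp_weight P K d \<le> term_weight P K u"
  unfolding term_weight_def using finite_weights by (intro Max_ge) auto

lemma term_weight_le_max_weight: assumes "finite P" shows "term_weight P K u \<le> max_weight P K"
proof -
  have "\<forall>x \<in> insert 0 (dp_weight P K ` {d \<in> reachable_dps P u. reaches_no_SCC P d}). x \<le> max_weight P K"
  proof
    fix x assume "x \<in> insert 0 (dp_weight P K ` {d \<in> reachable_dps P u. reaches_no_SCC P d})"
    then show "x \<le> max_weight P K"
    proof
      assume "x = 0" then show ?thesis by (simp add: max_weight_def)
    next
      assume "x \<in> dp_weight P K ` {d \<in> reachable_dps P u. reaches_no_SCC P d}"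
      then obtain d where x: "x = dp_weight P K d" by blast
      have "card (dg_descendants P d) \<le> card (dpP P)" using dg_descendants_dpP finite_dpP[OF assms] by (rule card_mono[rotated])
      then show ?thesis unfolding x dp_weight_def max_weight_def by (intro power_increasing) auto
    qed
  qed
  then show ?thesis unfolding term_weight_def using finite_weights[OF assms] by (subst Max_le_iff) auto
qed

lemma term_weight_istep_mono:
  assumes fin: "finite P" and st: "(sharp_root u, sharp_root u') \<in> (istep (np P))\<^sup>*"
  shows "term_weight P K u' \<le> term_weight P K u"
proof -
  have "reachable_dps P u' \<subseteq> reachable_dps P u"
    unfolding reachable_dps_def using st by (auto intro: rtrancl_trans)
  then show ?thesis unfolding term_weight_def using finite_weights[OF fin]
    by (intro Max_mono) auto
qed

lemma dp_weight_le_redex_weight: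
  assumes ok: "adp_step P s \<pi> \<alpha> \<sigma> p r" and lf: "\<exists>f ts. lhs \<alpha> = Fun f False ts" and fin: "finite P"
    and d: "d \<in> dp_bot \<alpha>" and t: "reaches_no_SCC P d"
  shows "dp_weight P K d \<le> term_weight P K (flat (subt_at s \<pi>))"
proof (rule dp_weight_le_term_weight[OF fin _ t])
  note SA = adp_step_ANF[OF ok lf]
  have aP: "\<alpha> \<in> P" using adp_stepD(2)[OF ok] .
  show "d \<in> reachable_dps P (flat (subt_at s \<pi>))"
    unfolding reachable_dps_def using dp_bot_dpP[OF aP d] dp_bot_fst[OF d] SA
    by (auto intro!: exI[of _ "flat \<circ> \<sigma>"])
qed

lemma mult_power_add_one_le: "ce < cd \<Longrightarrow> real K * (real K + 1) ^ ce + 1 \<le> (real K + 1) ^ cd"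
proof -
  assume "ce < cd"
  then have "(real K + 1) ^ Suc ce \<le> (real K + 1) ^ cd" by (intro power_increasing) auto
  moreover have "real K * (real K + 1) ^ ce + 1 \<le> (real K + 1) ^ Suc ce"
  proof -
    have "1 \<le> (real K + 1) ^ ce" by simp
    then show ?thesis by (simp add: algebra_simps)
  qed
  ultimately show ?thesis by linarith
qed

lemma term_weight_created:
  assumes ok: "adp_step P s \<pi> \<alpha> \<sigma> p r" and lf: "\<exists>f ts. lhs \<alpha> = Fun f False ts" and fin: "finite P"
    and ar: "annotated_at r w" and t: "reaches_no_SCC P (lhs \<alpha>, Some (flat (subt_at r w)))"
  shows "real K * term_weight P K (tsubst (flat (subt_at r w)) (flat \<circ> \<sigma>)) + 1 \<le> dp_weight P K (lhs \<alpha>, Some (flat (subt_at r w)))"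
proof -
  define t' where "t' = flat (subt_at r w)"
  define d where "d = (lhs \<alpha>, Some t')"
  note D = adp_stepD[OF ok]
  note SA = adp_step_ANF[OF ok lf]
  have dP: "d \<in> dpP P" unfolding d_def t'_def by (rule dp_of_annotated(2)[OF D(2) D(5) ar])
  have tFun: "\<exists>f ts. t' = Fun f False ts" unfolding t'_def by (rule ann_is_Fun[OF ar])
  have shr: "sharp_root (tsubst t' (flat \<circ> \<sigma>)) = tsubst (sharp_root t') (flat \<circ> \<sigma>)"
    using tFun by auto
  have edge: "(d, e) \<in> dg_edges P" if e: "e \<in> reachable_dps P (tsubst t' (flat \<circ> \<sigma>))" for e
  proof -
    obtain \<sigma>2 where e2: "e \<in> dpP P" "(sharp_root (tsubst t' (flat \<circ> \<sigma>)), tsubst (sharp_root (fst e)) \<sigma>2) \<in> (istep (np P))\<^sup>*"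
      "ANF P (tsubst (sharp_root (fst e)) \<sigma>2)" using e unfolding reachable_dps_def by blast
    have ex: "\<exists>\<sigma>1 \<sigma>2'. (tsubst (sharp_root t') \<sigma>1, tsubst (sharp_root (fst e)) \<sigma>2') \<in> (istep (np P))\<^sup>* \<and>
        ANF P (tsubst (sharp_root (fst d)) \<sigma>1) \<and> ANF P (tsubst (sharp_root (fst e)) \<sigma>2')"
      using e2 SA(1) shr by (intro exI[of _ "flat \<circ> \<sigma>"] exI[of _ \<sigma>2]) (simp add: d_def)
    have "dg_edge P d e" unfolding dg_edge_def using dP e2(1) ex by (simp add: d_def)
    then show ?thesis by (simp add: dg_edges_def)
  qed
  have td: "reaches_no_SCC P d" using t by (simp add: d_def t'_def)
  have "\<forall>x \<in> insert 0 (dp_weight P K ` {e \<in> reachable_dps P (tsubst t' (flat \<circ> \<sigma>)). reaches_no_SCC P e}). real K * x + 1 \<le> dp_weight P K d"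
  proof
    fix x assume "x \<in> insert 0 (dp_weight P K ` {e \<in> reachable_dps P (tsubst t' (flat \<circ> \<sigma>)). reaches_no_SCC P e})"
    then show "real K * x + 1 \<le> dp_weight P K d"
    proof
      assume "x = 0" then show ?thesis using dp_weight_ge_1 by simp
    next
      assume "x \<in> dp_weight P K ` {e \<in> reachable_dps P (tsubst t' (flat \<circ> \<sigma>)). reaches_no_SCC P e}"
      then obtain e where x: "x = dp_weight P K e" "e \<in> reachable_dps P (tsubst t' (flat \<circ> \<sigma>))" by blast
      have "card (dg_descendants P e) < card (dg_descendants P d)" by (rule card_dg_descendants_less[OF fin td edge[OF x(2)]])
      then show ?thesis unfolding x dp_weight_def by (rule mult_power_add_one_le)
    qed
  qed
  moreover have "term_weight P K (tsubst t' (flat \<circ> \<sigma>)) \<in> insert 0 (dp_weight P K ` {e \<in> reachable_dps P (tsubst t' (flat \<circ> \<sigma>)). reaches_no_SCC P e})"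
    unfolding term_weight_def using finite_weights[OF fin] by (intro Max_in) auto
  ultimately show ?thesis unfolding d_def t'_def by blast
qed

lemma finite_ann_poss_below: "finite {w. annotated_at t (\<pi> @ w)}"
proof -
  have "{w. annotated_at t (\<pi> @ w)} = (\<lambda>w. \<pi> @ w) -` ann_poss t" by (auto simp: ann_poss_def)
  then show ?thesis using finite_vimageI[OF finite_ann_poss, of "\<lambda>w. \<pi> @ w" t] by (simp add: inj_on_def)
qed

lemma finite_ann_poss_outside: "finite {q \<in> ann_poss t. \<not> (\<exists>w. q = \<pi> @ w)}"
  by (rule finite_subset[OF _ finite_ann_poss]) auto

lemma potential_split:
  "potential P K t = (\<Sum>q\<in>{q \<in> ann_poss t. \<not> (\<exists>w. q = \<pi> @ w)}. pos_weight P K t q)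
    + (\<Sum>w\<in>{w. annotated_at t (\<pi> @ w)}. pos_weight P K t (\<pi> @ w))"
proof -
  let ?O = "{q \<in> ann_poss t. \<not> (\<exists>w. q = \<pi> @ w)}" and ?I = "{w. annotated_at t (\<pi> @ w)}"
  have "ann_poss t = ?O \<union> (\<lambda>w. \<pi> @ w) ` ?I" by (auto simp: ann_poss_def)
  then have "potential P K t = sum (pos_weight P K t) (?O \<union> (\<lambda>w. \<pi> @ w) ` ?I)"
    unfolding potential_def by (rule arg_cong)
  also have "\<dots> = sum (pos_weight P K t) ?O + sum (pos_weight P K t) ((\<lambda>w. \<pi> @ w) ` ?I)"
    using finite_ann_poss_outside finite_ann_poss_below by (intro sum.union_disjoint) auto
  also have "sum (pos_weight P K t) ((\<lambda>w. \<pi> @ w) ` ?I) = (\<Sum>w\<in>?I. pos_weight P K t (\<pi> @ w))"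
    by (simp add: sum.reindex inj_on_def)
  finally show ?thesis .
qed

lemma potential_ge_redex:
  assumes "finite P"
  shows "(\<Sum>q\<in>{q \<in> ann_poss s. \<not> (\<exists>w. q = \<pi> @ w)}. pos_weight P K s q)
    + (if annotated_at s \<pi> then pos_weight P K s \<pi> else 0) \<le> potential P K s"
proof -
  have nonneg: "0 \<le> pos_weight P K s q" for q
    unfolding pos_weight_def by (rule term_weight_nonneg[OF assms])
  have "(if annotated_at s \<pi> then pos_weight P K s \<pi> else 0)
      \<le> (\<Sum>w\<in>{w. annotated_at s (\<pi> @ w)}. pos_weight P K s (\<pi> @ w))"
  proof (cases "annotated_at s \<pi>")
    case True
    then have "pos_weight P K s (\<pi> @ []) \<le> (\<Sum>w\<in>{w. annotated_at s (\<pi> @ w)}. pos_weight P K s (\<pi> @ w))"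
      using nonneg by (intro member_le_sum) (simp_all add: finite_ann_poss_below)
    then show ?thesis using True by simp
  qed (simp add: nonneg sum_nonneg)
  then show ?thesis unfolding potential_split[of P K s \<pi>] by simp
qed

lemma outer_weights_step:
  assumes ok: "adp_step P s \<pi> \<alpha> \<sigma> p r" and fin: "finite P"
  shows "(\<Sum>q\<in>{q \<in> ann_poss (result_term s \<pi> \<alpha> \<sigma> r). \<not> (\<exists>w. q = \<pi> @ w)}. pos_weight P K (result_term s \<pi> \<alpha> \<sigma> r) q)
    \<le> (\<Sum>q\<in>{q \<in> ann_poss s. \<not> (\<exists>w. q = \<pi> @ w)}. pos_weight P K s q)"
    (is "sum _ ?A \<le> sum _ ?B")
proof -
  have "sum (pos_weight P K (result_term s \<pi> \<alpha> \<sigma> r)) ?A \<le> sum (pos_weight P K s) ?A"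
  proof (rule sum_mono)
    fix q assume "q \<in> ?A"
    then have "annotated_at (result_term s \<pi> \<alpha> \<sigma> r) q" "\<not> (\<exists>w. q = \<pi> @ w)"
      unfolding ann_poss_def by auto
    then have "(sharp_root (flat (subt_at s q)), sharp_root (flat (subt_at (result_term s \<pi> \<alpha> \<sigma> r) q)))
        \<in> (istep (np P))\<^sup>*"
      by (rule annotated_at_result_term_outside[OF ok, THEN conjunct2])
    then show "pos_weight P K (result_term s \<pi> \<alpha> \<sigma> r) q \<le> pos_weight P K s q"
      unfolding pos_weight_def by (rule term_weight_istep_mono[OF fin])
  qed
  also have "?A \<subseteq> ?B"
    using annotated_at_result_term_outside[OF ok] unfolding ann_poss_def by blast
  then have "sum (pos_weight P K s) ?A \<le> sum (pos_weight P K s) ?B"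
    using term_weight_nonneg[OF fin] finite_ann_poss_outside
    by (intro sum_mono2) (simp_all add: pos_weight_def)
  finally show ?thesis .
qed

lemma inner_ann_poss_result_term:
  assumes ok: "adp_step P s \<pi> \<alpha> \<sigma> p r"
  shows "{w. annotated_at (result_term s \<pi> \<alpha> \<sigma> r) (\<pi> @ w)} \<subseteq> ann_poss r"
    "{w. annotated_at (result_term s \<pi> \<alpha> \<sigma> r) (\<pi> @ w)} \<noteq> {} \<Longrightarrow> annotated_at s \<pi>"
  using annotated_at_result_term_inside[OF ok] by (auto simp: ann_poss_def)

lemma inner_weights_le_max_weight:
  assumes ok: "adp_step P s \<pi> \<alpha> \<sigma> p r" and fin: "finite P" and K: "card (ann_poss r) \<le> K"
  shows "(\<Sum>w\<in>{w. annotated_at (result_term s \<pi> \<alpha> \<sigma> r) (\<pi> @ w)}. pos_weight P K (result_term s \<pi> \<alpha> \<sigma> r) (\<pi> @ w))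
    \<le> real K * max_weight P K"
    (is "sum _ ?W \<le> _")
proof -
  have "sum (\<lambda>w. pos_weight P K (result_term s \<pi> \<alpha> \<sigma> r) (\<pi> @ w)) ?W \<le> (\<Sum>w\<in>?W. max_weight P K)"
    unfolding pos_weight_def by (intro sum_mono term_weight_le_max_weight[OF fin])
  also have "\<dots> = real (card ?W) * max_weight P K" by simp
  also have "\<dots> \<le> real K * max_weight P K"
    using card_mono[OF finite_ann_poss inner_ann_poss_result_term(1)[OF ok]] K max_weight_nonneg
    by (intro mult_right_mono) auto
  finally show ?thesis .
qed

lemma sum_le_if_scaled_le:
  fixes f :: "'a \<Rightarrow> real"
  assumes "finite A" "card A \<le> K" "1 \<le> M" "\<And>x. x \<in> A \<Longrightarrow> real K * f x + 1 \<le> M"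
  shows "sum f A + 1 \<le> M"
proof (cases "K = 0")
  case True
  then show ?thesis using assms(1-3) by simp
next
  case False
  then have "sum f A \<le> (\<Sum>x\<in>A. (M - 1) / real K)"
    using assms(4) by (intro sum_mono) (simp add: field_simps)
  also have "\<dots> = real (card A) * ((M - 1) / real K)" by simp
  also have "\<dots> \<le> real K * ((M - 1) / real K)" using assms(2,3) by (intro mult_right_mono) auto
  also have "\<dots> = M - 1" using False by simp
  finally show ?thesis by simp
qed

text \<open>The heart of the potential argument: when all dependency pairs of the applied ADP lie
  outside every SCC, the at most K new annotations are each created by such a pair,
  whose weight exceeds K times the weight of whatever it can reach.\<close>

lemma inner_weights_acyclic:
  assumes ok: "adp_step P s \<pi> \<alpha> \<sigma> p r" and lf: "\<exists>f ts. lhs \<alpha> = Fun f False ts" and fin: "finite P"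
    and K: "card (ann_poss r) \<le> K" and acyclic: "\<forall>d\<in>dp_bot \<alpha>. reaches_no_SCC P d"
  shows "(\<Sum>w\<in>{w. annotated_at (result_term s \<pi> \<alpha> \<sigma> r) (\<pi> @ w)}. pos_weight P K (result_term s \<pi> \<alpha> \<sigma> r) (\<pi> @ w))
    + 1 \<le> pos_weight P K s \<pi>"
proof (rule sum_le_if_scaled_le)
  note D = adp_stepD[OF ok]
  show "finite {w. annotated_at (result_term s \<pi> \<alpha> \<sigma> r) (\<pi> @ w)}"
    using inner_ann_poss_result_term(1)[OF ok] finite_ann_poss finite_subset by blast
  show "card {w. annotated_at (result_term s \<pi> \<alpha> \<sigma> r) (\<pi> @ w)} \<le> K"
    using card_mono[OF finite_ann_poss inner_ann_poss_result_term(1)[OF ok]] K by simp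
  obtain d0 where d0: "d0 \<in> dp_bot \<alpha>" using dp_bot_ne by blast
  show "1 \<le> pos_weight P K s \<pi>"
    using dp_weight_le_redex_weight[OF ok lf fin d0 acyclic[rule_format, OF d0], of K]
      dp_weight_ge_1[of P K d0] unfolding pos_weight_def by linarith
  fix w assume "w \<in> {w. annotated_at (result_term s \<pi> \<alpha> \<sigma> r) (\<pi> @ w)}"
  then have "annotated_at (result_term s \<pi> \<alpha> \<sigma> r) (\<pi> @ w)" by simp
  note new = annotated_at_result_term_inside[OF ok this]
  define d where "d = (lhs \<alpha>, Some (flat (subt_at r w)))"
  have "d \<in> dp \<alpha>" unfolding d_def by (rule dp_of_annotated(1)[OF D(2) D(5) new(2)])
  moreover from this have "dp_bot \<alpha> = dp \<alpha>" by (auto simp: dp_bot_def)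
  ultimately have d: "d \<in> dp_bot \<alpha>" "reaches_no_SCC P d" using acyclic by auto
  have "real K * term_weight P K (tsubst (flat (subt_at r w)) (flat \<circ> \<sigma>)) + 1 \<le> dp_weight P K d"
    using term_weight_created[OF ok lf fin new(2)] d(2) unfolding d_def by blast
  also have "\<dots> \<le> term_weight P K (flat (subt_at s \<pi>))" by (rule dp_weight_le_redex_weight[OF ok lf fin d])
  finally show "real K * pos_weight P K (result_term s \<pi> \<alpha> \<sigma> r) (\<pi> @ w) + 1 \<le> pos_weight P K s \<pi>"
    unfolding pos_weight_def using new(3) by simp
qed

lemma potential_step:
  assumes ok: "adp_step P s \<pi> \<alpha> \<sigma> p r" and lf: "\<exists>f ts. lhs \<alpha> = Fun f False ts" and fin: "finite P"
    and K: "card (ann_poss r) \<le> K"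
  shows "potential P K (result_term s \<pi> \<alpha> \<sigma> r) + (if annotated_at s \<pi> \<and> (\<forall>d\<in>dp_bot \<alpha>. reaches_no_SCC P d) then 1 else 0)
    \<le> potential P K s + (if annotated_at s \<pi> \<and> \<not> (\<forall>d\<in>dp_bot \<alpha>. reaches_no_SCC P d) then real K * max_weight P K else 0)"
proof -
  note split = potential_split[of P K "result_term s \<pi> \<alpha> \<sigma> r" \<pi>]
  note outer = outer_weights_step[OF ok fin, of K]
  note redex = potential_ge_redex[OF fin, of K s \<pi>]
  have "0 \<le> pos_weight P K s \<pi>" unfolding pos_weight_def by (rule term_weight_nonneg[OF fin])
  moreover have "0 \<le> max_weight P K" by (simp add: max_weight_def)
  moreover have "{w. annotated_at (result_term s \<pi> \<alpha> \<sigma> r) (\<pi> @ w)} = {}" if "\<not> annotated_at s \<pi>"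
    using inner_ann_poss_result_term(2)[OF ok] that by blast
  ultimately show ?thesis
    using split outer redex inner_weights_le_max_weight[OF ok fin K] inner_weights_acyclic[OF ok lf fin K]
    by (cases "annotated_at s \<pi>") (auto split: if_splits)
qed

section \<open>Expected potential along a chain tree\<close>

definition level :: "('f,'v) ctree \<Rightarrow> nat \<Rightarrow> nat list set" where
  "level T D = {v \<in> cnodes T. length v = D}"

definition below_level :: "('f,'v) ctree \<Rightarrow> nat \<Rightarrow> nat list set" where
  "below_level T D = {v \<in> cnodes T. length v < D}"

lemma level_0: "chain_tree P T \<Longrightarrow> level T 0 = {[]}"
  unfolding level_def using chain_treeD(1) by auto

lemma level_Suc:
  assumes ct: "chain_tree P T"
  shows "level T (Suc D) = (\<lambda>(v, i). v @ [i]) ` (SIGMA v : level T D. {..<nch T v})"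
proof
  show "level T (Suc D) \<subseteq> (\<lambda>(v, i). v @ [i]) ` (SIGMA v : level T D. {..<nch T v})"
  proof
    fix w assume w: "w \<in> level T (Suc D)"
    then have "w \<noteq> []" unfolding level_def by auto
    then obtain v i where wv: "w = v @ [i]" by (metis append_butlast_last_id)
    have "w \<in> cnodes T" using w unfolding level_def by auto
    then have "v \<in> cnodes T" "i < nch T v" using chain_tree_parent[OF ct] wv by auto
    moreover have "length v = D" using w wv unfolding level_def by auto
    ultimately show "w \<in> (\<lambda>(v, i). v @ [i]) ` (SIGMA v : level T D. {..<nch T v})"
      unfolding level_def wv by force
  qed
next
  show "(\<lambda>(v, i). v @ [i]) ` (SIGMA v : level T D. {..<nch T v}) \<subseteq> level T (Suc D)"
    using chain_treeD(4)[OF ct] unfolding level_def by auto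
qed

lemma finite_level: assumes ct: "chain_tree P T" shows "finite (level T D)"
proof (induction D)
  case 0 then show ?case using level_0[OF ct] by simp
next
  case (Suc D) then show ?case unfolding level_Suc[OF ct] by auto
qed

lemma sum_level_Suc:
  assumes ct: "chain_tree P T"
  shows "(\<Sum>w\<in>level T (Suc D). f w) = (\<Sum>v\<in>level T D. \<Sum>i<nch T v. f (v @ [i]))"
proof -
  have inj: "inj_on (\<lambda>(v, i). v @ [i]) (SIGMA v : level T D. {..<nch T v})"
    by (auto simp: inj_on_def)
  have "(\<Sum>w\<in>level T (Suc D). f w) = (\<Sum>x\<in>(SIGMA v : level T D. {..<nch T v}). f ((\<lambda>(v, i). v @ [i]) x))"
    unfolding level_Suc[OF ct] using sum.reindex[OF inj, of f] by (simp add: comp_def)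
  also have "\<dots> = (\<Sum>v\<in>level T D. \<Sum>i<nch T v. f (v @ [i]))"
  proof -
    have "(\<Sum>v\<in>level T D. \<Sum>i<nch T v. f (v @ [i])) = (\<Sum>(v, i)\<in>(SIGMA v : level T D. {..<nch T v}). f (v @ [i]))"
      by (rule sum.Sigma) (auto intro: finite_level[OF ct])
    also have "\<dots> = (\<Sum>x\<in>(SIGMA v : level T D. {..<nch T v}). f ((\<lambda>(v, i). v @ [i]) x))"
      by (rule sum.cong) auto
    finally show ?thesis by simp
  qed
  finally show ?thesis .
qed

lemma below_level_Suc: "below_level T (Suc D) = below_level T D \<union> level T D" "below_level T D \<inter> level T D = {}"
  unfolding below_level_def level_def by auto

lemma finite_below_level: "chain_tree P T \<Longrightarrow> finite (below_level T D)"
proof (induction D)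
  case 0 then show ?case by (simp add: below_level_def)
next
  case (Suc D) then show ?case using below_level_Suc(1)[of T D] finite_level by auto
qed

lemma child_prob:
  assumes ct: "chain_tree P T" and w: "wf_adps P" and v: "v \<in> cnodes T" and n: "0 < nch T v" and i: "i < nch T v"
    and pv: "cprob T v \<noteq> 0"
  shows "cprob T (v @ [i]) = cprob T v * fst (rhs_list T v ! i)" "0 < fst (rhs_list T v ! i)"
proof -
  have co: "rhs_listing T v (rhs_list T v)" by (rule rhs_listing_rhs_list[OF ct v n])
  then have "cprob T (v @ [i]) / cprob T v = fst (rhs_list T v ! i)" using i by (simp add: rhs_listing_def)
  then show "cprob T (v @ [i]) = cprob T v * fst (rhs_list T v ! i)" using pv by (simp add: field_simps)
  have ok: "adp_step P (cterm T v) (cpos T v) (crule T v) (csub T v) (fst (rhs_list T v ! i)) (snd (rhs_list T v ! i))"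
    and cr: "crule T v \<in> P" using chain_tree_adp_step[OF ct w v n i] by auto
  show "0 < fst (rhs_list T v ! i)" using wf_adps_rhs[OF w cr adp_stepD(5)[OF ok]] by simp
qed

lemma prob_pos:
  assumes ct: "chain_tree P T" and w: "wf_adps P" and v: "v \<in> cnodes T"
  shows "0 < cprob T v"
  using v
proof (induction v rule: rev_induct)
  case Nil then show ?case using chain_treeD(2)[OF ct] by simp
next
  case (snoc i v)
  have v: "v \<in> cnodes T" and i: "i < nch T v" using chain_tree_parent[OF ct snoc.prems] by auto
  then have n: "0 < nch T v" by simp
  have pv: "0 < cprob T v" using snoc.IH v by simp
  show ?case using child_prob[OF ct w v n i] pv by simp
qed

lemma child_prob_sum:
  assumes ct: "chain_tree P T" and w: "wf_adps P" and v: "v \<in> cnodes T" and n: "0 < nch T v"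
  shows "(\<Sum>i<nch T v. cprob T (v @ [i])) = cprob T v"
proof -
  have co: "rhs_listing T v (rhs_list T v)" by (rule rhs_listing_rhs_list[OF ct v n])
  have cr: "crule T v \<in> P" using chain_tree_adp_step[OF ct w v n n] by auto
  have pv: "cprob T v \<noteq> 0" using prob_pos[OF ct w v] by simp
  have len: "length (rhs_list T v) = nch T v" using co by (simp add: rhs_listing_def)
  have "(\<Sum>i<nch T v. fst (rhs_list T v ! i)) = sum_list (map fst (rhs_list T v))"
    using len by (simp add: sum_list_sum_nth atLeast0LessThan)
  also have "\<dots> = sum_mset (image_mset fst (mset (rhs_list T v)))"
    by (metis mset_map sum_mset_sum_list)
  also have "\<dots> = 1" using co wf_adps_sum[OF w cr] by (simp add: rhs_listing_def)
  finally have s1: "(\<Sum>i<nch T v. fst (rhs_list T v ! i)) = 1" .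
  have "(\<Sum>i<nch T v. cprob T (v @ [i])) = (\<Sum>i<nch T v. cprob T v * fst (rhs_list T v ! i))"
    using child_prob(1)[OF ct w v n _ pv] by simp
  also have "\<dots> = cprob T v" using s1 by (simp add: sum_distrib_left[symmetric])
  finally show ?thesis .
qed

lemma expected_child_potential:
  assumes ct: "chain_tree P T" and w: "wf_adps P" and v: "v \<in> cnodes T" and Pot0: "0 \<le> Pot v"
    and step: "\<And>i. 0 < nch T v \<Longrightarrow> i < nch T v \<Longrightarrow> Pot (v @ [i]) + (if dec then 1 else 0) \<le> Pot v + inc"
  shows "(\<Sum>i<nch T v. cprob T (v @ [i]) * Pot (v @ [i])) + (if 0 < nch T v \<and> dec then cprob T v else 0)
    \<le> cprob T v * Pot v + (if 0 < nch T v then cprob T v * inc else 0)"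
proof (cases "0 < nch T v")
  case False
  then show ?thesis using prob_pos[OF ct w v] Pot0 by simp
next
  case True
  have "(\<Sum>i<nch T v. cprob T (v @ [i]) * Pot (v @ [i])) \<le>
      (\<Sum>i<nch T v. cprob T (v @ [i]) * (Pot v + inc - (if dec then 1 else 0)))"
  proof (rule sum_mono)
    fix i assume "i \<in> {..<nch T v}"
    then have i: "i < nch T v" by simp
    have "0 < cprob T (v @ [i])" using prob_pos[OF ct w] chain_treeD(4)[OF ct] v i by blast
    moreover have "Pot (v @ [i]) \<le> Pot v + inc - (if dec then 1 else 0)" using step[OF True i] by simp
    ultimately show "cprob T (v @ [i]) * Pot (v @ [i]) \<le> cprob T (v @ [i]) * (Pot v + inc - (if dec then 1 else 0))"
      by (intro mult_left_mono) auto
  qed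
  also have "\<dots> = cprob T v * (Pot v + inc - (if dec then 1 else 0))"
    using child_prob_sum[OF ct w v True] by (simp add: sum_distrib_right[symmetric])
  finally show ?thesis using True by (cases dec) (simp_all add: algebra_simps)
qed

text \<open>A supermartingale-style bound: if every step lowers the potential by 1 at the nodes
  satisfying dec, and raises it by at most inc elsewhere, then the probability mass of the
  former nodes is bounded by the initial potential plus the expected total increase.\<close>

lemma expected_potential_bound:
  assumes ct: "chain_tree P T" and w: "wf_adps P"
    and Pot0: "\<And>v. 0 \<le> Pot v"
    and step: "\<And>v i. v \<in> cnodes T \<Longrightarrow> 0 < nch T v \<Longrightarrow> i < nch T v \<Longrightarrow>
        Pot (v @ [i]) + (if dec v then 1 else 0) \<le> Pot v + inc v"
  shows "(\<Sum>v\<in>below_level T D. if 0 < nch T v \<and> dec v then cprob T v else 0) + (\<Sum>v\<in>level T D. cprob T v * Pot v)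
    \<le> Pot [] + (\<Sum>v\<in>below_level T D. if 0 < nch T v then cprob T v * inc v else 0)"
proof (induction D)
  case 0
  show ?case using level_0[OF ct] chain_treeD(2)[OF ct] by (simp add: below_level_def)
next
  case (Suc D)
  have "(\<Sum>w\<in>level T (Suc D). cprob T w * Pot w) + (\<Sum>v\<in>level T D. if 0 < nch T v \<and> dec v then cprob T v else 0)
      = (\<Sum>v\<in>level T D. (\<Sum>i<nch T v. cprob T (v @ [i]) * Pot (v @ [i])) + (if 0 < nch T v \<and> dec v then cprob T v else 0))"
    unfolding sum_level_Suc[OF ct] by (simp add: sum.distrib)
  also have "\<dots> \<le> (\<Sum>v\<in>level T D. cprob T v * Pot v + (if 0 < nch T v then cprob T v * inc v else 0))"
    using expected_child_potential[OF ct w _ Pot0 step] by (intro sum_mono) (auto simp: level_def)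
  also have "\<dots> = (\<Sum>v\<in>level T D. cprob T v * Pot v) + (\<Sum>v\<in>level T D. if 0 < nch T v then cprob T v * inc v else 0)"
    by (simp add: sum.distrib)
  finally have lv: "(\<Sum>w\<in>level T (Suc D). cprob T w * Pot w) + (\<Sum>v\<in>level T D. if 0 < nch T v \<and> dec v then cprob T v else 0)
      \<le> (\<Sum>v\<in>level T D. cprob T v * Pot v) + (\<Sum>v\<in>level T D. if 0 < nch T v then cprob T v * inc v else 0)" .
  have fu: "finite (below_level T D)" "finite (level T D)" using finite_below_level[OF ct] finite_level[OF ct] by auto
  have s1: "(\<Sum>v\<in>below_level T (Suc D). g v) = (\<Sum>v\<in>below_level T D. g v) + (\<Sum>v\<in>level T D. g v)" for g :: "nat list \<Rightarrow> real"
    unfolding below_level_Suc(1) by (rule sum.union_disjoint[OF fu(1) fu(2) below_level_Suc(2)])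
  show ?case unfolding s1 using Suc.IH lv by linarith
qed

section \<open>Bounding the expected derivation height\<close>

definition max_rhs_ann :: "('f,'v) adp set \<Rightarrow> nat" where
  "max_rhs_ann P = Max (insert 0 ((\<lambda>x. card (ann_poss (snd x))) ` (\<Union>\<alpha>\<in>P. set_mset (rhs \<alpha>))))"

lemma card_ann_poss_le_max_rhs_ann:
  assumes "finite P" "\<alpha> \<in> P" "(p, r) \<in># rhs \<alpha>"
  shows "card (ann_poss r) \<le> max_rhs_ann P"
  unfolding max_rhs_ann_def using assms by (intro Max_ge) force+

definition drops_potential :: "('f,'v) adp set \<Rightarrow> ('f,'v) ctree \<Rightarrow> nat list \<Rightarrow> bool" where
  "drops_potential P T v \<longleftrightarrow> annotated_at (cterm T v) (cpos T v) \<and> (\<forall>d\<in>dp_bot (crule T v). reaches_no_SCC P d)"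
definition potential_increase :: "('f,'v) adp set \<Rightarrow> nat \<Rightarrow> ('f,'v) ctree \<Rightarrow> nat list \<Rightarrow> real" where
  "potential_increase P K T v = (if annotated_at (cterm T v) (cpos T v) \<and> \<not> (\<forall>d\<in>dp_bot (crule T v). reaches_no_SCC P d) then real K * max_weight P K else 0)"

lemma chain_tree_potential_bound:
  assumes ct: "chain_tree P T" and w: "wf_adps P"
  shows "(\<Sum>v\<in>below_level T D. if 0 < nch T v \<and> drops_potential P T v then cprob T v else 0)
    \<le> potential P (max_rhs_ann P) (cterm T []) + (\<Sum>v\<in>below_level T D. if 0 < nch T v then cprob T v * potential_increase P (max_rhs_ann P) T v else 0)"
proof -
  have fin: "finite P" using w by (simp add: wf_adps_def)
  let ?Pot = "\<lambda>v. potential P (max_rhs_ann P) (cterm T v)"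
  have Pot0: "0 \<le> ?Pot v" for v unfolding potential_def pos_weight_def using term_weight_nonneg[OF fin] by (intro sum_nonneg) auto
  have step: "?Pot (v @ [i]) + (if drops_potential P T v then 1 else 0) \<le> ?Pot v + potential_increase P (max_rhs_ann P) T v"
    if v: "v \<in> cnodes T" and n: "0 < nch T v" and i: "i < nch T v" for v i
  proof -
    have ok: "adp_step P (cterm T v) (cpos T v) (crule T v) (csub T v) (fst (rhs_list T v ! i)) (snd (rhs_list T v ! i))"
      and ch: "cterm T (v @ [i]) = result_term (cterm T v) (cpos T v) (crule T v) (csub T v) (snd (rhs_list T v ! i))"
      and cr: "crule T v \<in> P" using chain_tree_adp_step[OF ct w v n i] by auto
    have K: "card (ann_poss (snd (rhs_list T v ! i))) \<le> max_rhs_ann P"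
      using card_ann_poss_le_max_rhs_ann[OF fin cr adp_stepD(5)[OF ok]] .
    show ?thesis using potential_step[OF ok wf_adps_lhs_Fun[OF w cr] fin K] ch
      unfolding drops_potential_def potential_increase_def by simp
  qed
  have "(\<Sum>v\<in>below_level T D. if 0 < nch T v \<and> drops_potential P T v then cprob T v else 0) + (\<Sum>v\<in>level T D. cprob T v * ?Pot v)
    \<le> ?Pot [] + (\<Sum>v\<in>below_level T D. if 0 < nch T v then cprob T v * potential_increase P (max_rhs_ann P) T v else 0)"
    by (rule expected_potential_bound[OF ct w Pot0 step])
  moreover have "0 \<le> (\<Sum>v\<in>level T D. cprob T v * ?Pot v)"
    using prob_pos[OF ct w] Pot0 unfolding level_def by (intro sum_nonneg) (auto intro: mult_nonneg_nonneg less_imp_le)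
  ultimately show ?thesis by linarith
qed

lemma sum_cover:
  fixes f :: "'a \<Rightarrow> ennreal"
  assumes "finite I" "finite X" "\<forall>x\<in>X. \<exists>J\<in>I. x \<in> C J"
  shows "sum f X \<le> (\<Sum>J\<in>I. sum f (X \<inter> C J))"
proof -
  have "sum f X \<le> (\<Sum>x\<in>X. \<Sum>J\<in>I. if x \<in> C J then f x else 0)"
  proof (rule sum_mono)
    fix x assume "x \<in> X"
    then obtain J where J: "J \<in> I" "x \<in> C J" using assms(3) by blast
    have "f x = (if x \<in> C J then f x else 0)" using J by simp
    also have "\<dots> \<le> (\<Sum>J\<in>I. if x \<in> C J then f x else 0)"
      by (rule member_le_sum[OF J(1)]) (auto simp: assms(1))
    finally show "f x \<le> (\<Sum>J\<in>I. if x \<in> C J then f x else 0)" .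
  qed
  also have "\<dots> = (\<Sum>J\<in>I. \<Sum>x\<in>X. if x \<in> C J then f x else 0)" by (rule sum.swap)
  also have "\<dots> = (\<Sum>J\<in>I. sum f (X \<inter> C J))"
  proof (rule sum.cong[OF refl])
    fix J show "(\<Sum>x\<in>X. if x \<in> C J then f x else 0) = sum f (X \<inter> C J)"
      using assms(2) by (simp add: sum.inter_restrict)
  qed
  finally show ?thesis .
qed

lemma restr_tree_root: "cterm (restr_tree P J T) [] = cterm T []"
  by (simp add: restr_tree_def)

lemma sum_counted_in_restr_trees:
  assumes ct: "chain_tree P T" and w: "wf_adps P" and root: "cterm T [] = sharp_root t"
    and X: "finite X" "X \<subseteq> counted_nodes S T" "\<forall>v\<in>X. \<not> (\<forall>d\<in>dp_bot (crule T v). reaches_no_SCC P d)"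
  shows "(\<Sum>v\<in>X. ennreal (cprob T v)) \<le> (\<Sum>J\<in>{J. SCC_prefix P J}. edh (restr P J ` P) (restr P J ` S) t)"
proof -
  have fin: "finite P" using w by (simp add: wf_adps_def)
  let ?I = "{J. SCC_prefix P J}"
  let ?C = "\<lambda>J. counted_nodes (restr P J ` S) (restr_tree P J T)"
  have cov: "\<forall>x\<in>X. \<exists>J\<in>?I. x \<in> ?C J"
  proof
    fix x assume x: "x \<in> X"
    then obtain d where "d \<in> dp_bot (crule T x)" "\<not> reaches_no_SCC P d" using X(3) by blast
    then show "\<exists>J\<in>?I. x \<in> ?C J" using counted_in_restr_tree[OF ct w _ ] X(2) x by blast
  qed
  have "(\<Sum>v\<in>X. ennreal (cprob T v)) \<le> (\<Sum>J\<in>?I. \<Sum>v\<in>X \<inter> ?C J. ennreal (cprob T v))"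
    by (rule sum_cover[OF finite_SCC_prefixes[OF fin] X(1) cov])
  also have "\<dots> \<le> (\<Sum>J\<in>?I. edh (restr P J ` P) (restr P J ` S) t)"
  proof (rule sum_mono)
    fix J assume "J \<in> ?I"
    have "(\<Sum>v\<in>X \<inter> ?C J. ennreal (cprob T v)) = (\<Sum>v\<in>X \<inter> ?C J. ennreal (cprob (restr_tree P J T) v))"
      by (simp add: restr_tree_def)
    also have "\<dots> \<le> edl (restr P J ` S) (restr_tree P J T)" using X(1) by (intro sum_le_edl) auto
    also have "\<dots> \<le> edh (restr P J ` P) (restr P J ` S) t"
      using chain_tree_restr_tree[OF ct] root restr_tree_root[of P J T] by (intro edl_le_edh) auto
    finally show "(\<Sum>v\<in>X \<inter> ?C J. ennreal (cprob T v)) \<le> edh (restr P J ` P) (restr P J ` S) t" .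
  qed
  finally show ?thesis .
qed

lemma ann_poss_basic:
  assumes "basic P t" shows "ann_poss (sharp_root t) \<subseteq> {[]}"
proof
  fix q assume q: "q \<in> ann_poss (sharp_root t)"
  obtain f ts where t: "t = Fun f False ts" "\<forall>u\<in>set ts. unannotated u" using assms unfolding basic_def by blast
  show "q \<in> {[]}"
  proof (cases q)
    case Nil then show ?thesis by simp
  next
    case (Cons i q')
    then have "i < length ts" "annotated_at (ts ! i) q'" using q t unfolding ann_poss_def by auto
    moreover have "flat (ts ! i) = ts ! i" using t(2) \<open>i < length ts\<close> unfolding unannotated_def by simp
    ultimately show ?thesis using flat_not_annotated by metis
  qed
qed

lemma potential_basic_le:
  assumes fin: "finite P" and b: "basic P t"
  shows "potential P K (sharp_root t) \<le> max_weight P K"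
proof -
  have "potential P K (sharp_root t) \<le> (\<Sum>q\<in>{[]}. term_weight P K (flat (subt_at (sharp_root t) q)))"
    unfolding potential_def pos_weight_def using ann_poss_basic[OF b] term_weight_nonneg[OF fin] by (intro sum_mono2) auto
  also have "\<dots> \<le> max_weight P K" using term_weight_le_max_weight[OF fin] by simp
  finally show ?thesis .
qed

lemma sum_filter_split:
  assumes "finite A"
  shows "sum f A = sum f {x \<in> A. Q x} + sum f {x \<in> A. \<not> Q x}"
proof -
  have "sum f ({x \<in> A. Q x} \<union> {x \<in> A. \<not> Q x}) = sum f {x \<in> A. Q x} + sum f {x \<in> A. \<not> Q x}"
    using assms by (intro sum.union_disjoint) auto
  moreover have "{x \<in> A. Q x} \<union> {x \<in> A. \<not> Q x} = A" by blast
  ultimately show ?thesis by simp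
qed

definition raising_nodes :: "('f,'v) adp set \<Rightarrow> ('f,'v) ctree \<Rightarrow> nat list set" where
  "raising_nodes P T = {v \<in> cnodes T. 0 < nch T v \<and> annotated_at (cterm T v) (cpos T v) \<and>
     \<not> (\<forall>d\<in>dp_bot (crule T v). reaches_no_SCC P d)}"

lemma sum_raising_nodes_le:
  assumes ct: "chain_tree P T" and w: "wf_adps P" and root: "cterm T [] = sharp_root t"
    and I: "finite I" "I \<subseteq> raising_nodes P T"
  shows "(\<Sum>v\<in>I. ennreal (cprob T v))
    \<le> (\<Sum>J\<in>{J. SCC_prefix P J}. edh (restr P J ` P) (restr P J ` S) t) + edh P (P - S) t"
proof -
  let ?I1 = "{v \<in> I. crule T v \<in> S}" and ?I2 = "{v \<in> I. crule T v \<notin> S}"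
  have "(\<Sum>v\<in>I. ennreal (cprob T v)) = (\<Sum>v\<in>?I1. ennreal (cprob T v)) + (\<Sum>v\<in>?I2. ennreal (cprob T v))"
    using I(1) by (rule sum_filter_split)
  moreover have "(\<Sum>v\<in>?I1. ennreal (cprob T v)) \<le> (\<Sum>J\<in>{J. SCC_prefix P J}. edh (restr P J ` P) (restr P J ` S) t)"
    using I by (intro sum_counted_in_restr_trees[OF ct w root]) (auto simp: raising_nodes_def counted_nodes_def)
  moreover have "(\<Sum>v\<in>?I2. ennreal (cprob T v)) \<le> edh P (P - S) t"
  proof -
    have "?I2 \<subseteq> counted_nodes (P - S) T"
      using I(2) chain_tree_adp_step(3)[OF ct w] by (auto simp: raising_nodes_def counted_nodes_def)
    then have "(\<Sum>v\<in>?I2. ennreal (cprob T v)) \<le> edl (P - S) T" using I(1) by (intro sum_le_edl) auto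
    also have "\<dots> \<le> edh P (P - S) t" using ct root by (rule edl_le_edh)
    finally show ?thesis .
  qed
  ultimately show ?thesis by (simp add: add_mono)
qed

lemma sum_drops_potential_le:
  assumes ct: "chain_tree P T" and w: "wf_adps P" and root: "cterm T [] = sharp_root t" and b: "basic P t"
    and F: "finite F" "F \<subseteq> cnodes T" "\<And>v. v \<in> F \<Longrightarrow> 0 < nch T v \<and> drops_potential P T v"
  obtains I where "finite I" "I \<subseteq> raising_nodes P T"
    "(\<Sum>v\<in>F. cprob T v) \<le> max_weight P (max_rhs_ann P)
       + real (max_rhs_ann P) * max_weight P (max_rhs_ann P) * (\<Sum>v\<in>I. cprob T v)"
proof
  define K where "K = max_rhs_ann P"
  define D where "D = Suc (Max (insert 0 (length ` F)))"
  define I where "I = {v \<in> below_level T D. 0 < nch T v \<and> annotated_at (cterm T v) (cpos T v) \<and>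
    \<not> (\<forall>d\<in>dp_bot (crule T v). reaches_no_SCC P d)}"
  have finD: "finite (below_level T D)" by (rule finite_below_level[OF ct])
  then show "finite I" unfolding I_def by simp
  show "I \<subseteq> raising_nodes P T" unfolding I_def raising_nodes_def below_level_def by auto
  have FD: "F \<subseteq> below_level T D"
  proof
    fix v assume "v \<in> F"
    then have "length v \<le> Max (insert 0 (length ` F))" using F(1) by (intro Max_ge) auto
    then show "v \<in> below_level T D" using \<open>v \<in> F\<close> F(2) unfolding below_level_def D_def by auto
  qed
  have "(\<Sum>v\<in>F. cprob T v) = (\<Sum>v\<in>F. if 0 < nch T v \<and> drops_potential P T v then cprob T v else 0)"
    using F(3) by (intro sum.cong) auto
  also have "\<dots> \<le> (\<Sum>v\<in>below_level T D. if 0 < nch T v \<and> drops_potential P T v then cprob T v else 0)"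
    using FD finD prob_pos[OF ct w] unfolding below_level_def by (intro sum_mono2) (auto intro: less_imp_le)
  finally have drops: "(\<Sum>v\<in>F. cprob T v)
      \<le> (\<Sum>v\<in>below_level T D. if 0 < nch T v \<and> drops_potential P T v then cprob T v else 0)" .
  have "(\<Sum>v\<in>below_level T D. if 0 < nch T v then cprob T v * potential_increase P K T v else 0)
      = (\<Sum>v\<in>below_level T D. if 0 < nch T v \<and> annotated_at (cterm T v) (cpos T v) \<and>
          \<not> (\<forall>d\<in>dp_bot (crule T v). reaches_no_SCC P d) then real K * max_weight P K * cprob T v else 0)"
    by (intro sum.cong) (auto simp: potential_increase_def)
  also have "\<dots> = (\<Sum>v\<in>I. real K * max_weight P K * cprob T v)"
    unfolding I_def using finD by (simp add: sum.inter_filter)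
  also have "\<dots> = real K * max_weight P K * (\<Sum>v\<in>I. cprob T v)"
    by (simp add: sum_distrib_left)
  finally have increase: "(\<Sum>v\<in>below_level T D. if 0 < nch T v then cprob T v * potential_increase P K T v else 0)
      = real K * max_weight P K * (\<Sum>v\<in>I. cprob T v)" .
  have "potential P K (cterm T []) \<le> max_weight P K"
    unfolding root by (rule potential_basic_le[OF finite_wf_adps[OF w] b])
  then show "(\<Sum>v\<in>F. cprob T v) \<le> max_weight P (max_rhs_ann P)
       + real (max_rhs_ann P) * max_weight P (max_rhs_ann P) * (\<Sum>v\<in>I. cprob T v)"
    using drops increase chain_tree_potential_bound[OF ct w, of D] unfolding K_def by linarith
qed

lemma sum_drops_potential_le_edh:
  assumes ct: "chain_tree P T" and w: "wf_adps P" and root: "cterm T [] = sharp_root t" and b: "basic P t"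
    and F: "finite F" "F \<subseteq> cnodes T" "\<And>v. v \<in> F \<Longrightarrow> 0 < nch T v \<and> drops_potential P T v"
  shows "(\<Sum>v\<in>F. ennreal (cprob T v)) \<le> ennreal (max_weight P (max_rhs_ann P))
    + ennreal (real (max_rhs_ann P) * max_weight P (max_rhs_ann P)) *
      ((\<Sum>J\<in>{J. SCC_prefix P J}. edh (restr P J ` P) (restr P J ` S) t) + edh P (P - S) t)"
proof -
  define W where "W = max_weight P (max_rhs_ann P)"
  define KW where "KW = real (max_rhs_ann P) * W"
  have W: "0 \<le> W" and KW: "0 \<le> KW" unfolding KW_def W_def max_weight_def by simp_all
  have nonneg: "v \<in> cnodes T \<Longrightarrow> 0 \<le> cprob T v" for v using prob_pos[OF ct w] less_imp_le by blast
  obtain I where I: "finite I" "I \<subseteq> raising_nodes P T" "(\<Sum>v\<in>F. cprob T v) \<le> W + KW * (\<Sum>v\<in>I. cprob T v)"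
    unfolding W_def KW_def by (rule sum_drops_potential_le[OF ct w root b F])
  have I_nonneg: "0 \<le> (\<Sum>v\<in>I. cprob T v)"
    using I(2) nonneg unfolding raising_nodes_def by (intro sum_nonneg) auto
  have "(\<Sum>v\<in>F. ennreal (cprob T v)) = ennreal (\<Sum>v\<in>F. cprob T v)"
    using F(2) nonneg by (intro sum_ennreal) auto
  also have "\<dots> \<le> ennreal (W + KW * (\<Sum>v\<in>I. cprob T v))" by (intro ennreal_leI I(3))
  also have "\<dots> = ennreal W + ennreal KW * ennreal (\<Sum>v\<in>I. cprob T v)"
    using W KW I_nonneg by (simp add: ennreal_mult)
  also have "ennreal (\<Sum>v\<in>I. cprob T v) = (\<Sum>v\<in>I. ennreal (cprob T v))"
    using I(2) nonneg unfolding raising_nodes_def by (intro sum_ennreal[symmetric]) auto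
  finally have "(\<Sum>v\<in>F. ennreal (cprob T v)) \<le> ennreal W + ennreal KW * (\<Sum>v\<in>I. ennreal (cprob T v))" .
  with sum_raising_nodes_le[OF ct w root I(1,2)] show ?thesis
    unfolding W_def KW_def by (meson add_left_mono mult_left_mono order_trans zero_le)
qed

definition dg_factor :: "('f,'v) adp set \<Rightarrow> real" where
  "dg_factor P = (1 + real (max_rhs_ann P)) * max_weight P (max_rhs_ann P)"

lemma dg_factor_bound:
  "B + (ennreal (max_weight P (max_rhs_ann P))
      + ennreal (real (max_rhs_ann P) * max_weight P (max_rhs_ann P)) * (B + E))
    \<le> ennreal (dg_factor P) * (1 + B + E)"
proof -
  define W where "W = max_weight P (max_rhs_ann P)"
  define KW where "KW = real (max_rhs_ann P) * W"
  have "1 \<le> W" "0 \<le> KW" unfolding W_def KW_def max_weight_def by simp_all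
  moreover have C: "dg_factor P = W + KW" unfolding dg_factor_def W_def KW_def by (simp add: distrib_right)
  ultimately have "ennreal W \<le> ennreal (dg_factor P)" "1 + ennreal KW \<le> ennreal (dg_factor P)"
    "ennreal KW \<le> ennreal (dg_factor P)"
    by (simp_all add: ennreal_leI flip: ennreal_1 ennreal_plus)
  then have "ennreal W + (1 + ennreal KW) * B + ennreal KW * E
      \<le> ennreal (dg_factor P) + ennreal (dg_factor P) * B + ennreal (dg_factor P) * E"
    by (intro add_mono mult_right_mono) simp_all
  then show ?thesis unfolding W_def[symmetric] KW_def[symmetric] by (simp add: algebra_simps)
qed

lemma edl_bound:
  assumes ct: "chain_tree P T" and w: "wf_adps P" and root: "cterm T [] = sharp_root t" and b: "basic P t"
  shows "edl S T \<le> ennreal (dg_factor P) *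
    (1 + (\<Sum>J\<in>{J. SCC_prefix P J}. edh (restr P J ` P) (restr P J ` S) t) + edh P (P - S) t)"
  unfolding edl_def
proof (rule SUP_least, clarify)
  fix F assume F: "finite F" "F \<subseteq> counted_nodes S T"
  define Fc where "Fc = {v \<in> F. drops_potential P T v}"
  define Fb where "Fb = {v \<in> F. \<not> drops_potential P T v}"
  have "(\<Sum>v\<in>Fb. ennreal (cprob T v)) \<le> (\<Sum>J\<in>{J. SCC_prefix P J}. edh (restr P J ` P) (restr P J ` S) t)"
    using F unfolding Fb_def
    by (intro sum_counted_in_restr_trees[OF ct w root]) (auto simp: counted_nodes_def drops_potential_def)
  moreover have "finite Fc" "Fc \<subseteq> cnodes T" "\<And>v. v \<in> Fc \<Longrightarrow> 0 < nch T v \<and> drops_potential P T v"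
    using F unfolding Fc_def counted_nodes_def by auto
  note Fc = sum_drops_potential_le_edh[OF ct w root b this, of S]
  ultimately have "(\<Sum>v\<in>Fc. ennreal (cprob T v)) + (\<Sum>v\<in>Fb. ennreal (cprob T v))
      \<le> ennreal (dg_factor P) *
        (1 + (\<Sum>J\<in>{J. SCC_prefix P J}. edh (restr P J ` P) (restr P J ` S) t) + edh P (P - S) t)"
    by (intro order_trans[OF _ dg_factor_bound]) (simp add: add_mono add.commute)
  moreover have "(\<Sum>v\<in>F. ennreal (cprob T v)) = (\<Sum>v\<in>Fc. ennreal (cprob T v)) + (\<Sum>v\<in>Fb. ennreal (cprob T v))"
    unfolding Fc_def Fb_def using F(1) by (rule sum_filter_split)
  ultimately show "(\<Sum>v\<in>F. ennreal (cprob T v)) \<le> ennreal (dg_factor P) *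
      (1 + (\<Sum>J\<in>{J. SCC_prefix P J}. edh (restr P J ` P) (restr P J ` S) t) + edh P (P - S) t)"
    by simp
qed

lemma edh_bound:
  assumes w: "wf_adps P" and b: "basic P t"
  shows "edh P S t \<le> ennreal (dg_factor P) *
    (1 + (\<Sum>J\<in>{J. SCC_prefix P J}. edh (restr P J ` P) (restr P J ` S) t) + edh P (P - S) t)"
  unfolding edh_def[of P S] by (rule SUP_least) (clarify, rule edl_bound[OF _ w _ b])

lemma iota_fun_bound:
  assumes w: "wf_adps P"
  shows "iota_fun P S n \<le> ennreal (dg_factor P) *
    (1 + (\<Sum>J\<in>{J. SCC_prefix P J}. iota_fun (restr P J ` P) (restr P J ` S) n) + iota_fun P (P - S) n)"
  unfolding iota_fun_def[of P S]
proof (rule SUP_least, clarify)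
  fix t assume b: "basic P t" and sz: "tsize t \<le> n"
  have "edh (restr P J ` P) (restr P J ` S) t \<le> iota_fun (restr P J ` P) (restr P J ` S) n" for J
    unfolding iota_fun_def using b sz basic_restr[of P J] by (intro SUP_upper) auto
  moreover have "edh P (P - S) t \<le> iota_fun P (P - S) n"
    unfolding iota_fun_def using b sz by (intro SUP_upper) auto
  ultimately have "ennreal (dg_factor P) *
      (1 + (\<Sum>J\<in>{J. SCC_prefix P J}. edh (restr P J ` P) (restr P J ` S) t) + edh P (P - S) t)
    \<le> ennreal (dg_factor P) *
      (1 + (\<Sum>J\<in>{J. SCC_prefix P J}. iota_fun (restr P J ` P) (restr P J ` S) n) + iota_fun P (P - S) n)"
    by (intro mult_left_mono add_mono sum_mono order_refl) simp_all
  with edh_bound[OF w b] show "edh P S t \<le> \<dots>" by (rule order_trans)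
qed

lemma iota_le_iff_in_cplx: "iota P S \<le> X \<longleftrightarrow> in_cplx (iota_fun P S) X"
  unfolding iota_eq_cls_iota_fun by (rule cls_le_iff_in_cplx[OF mono_iota_fun])

lemma iota_le_DG:
  assumes w: "wf_adps P" and complement: "iota P (P - S) \<le> X"
    and restricted: "\<And>J. SCC_prefix P J \<Longrightarrow> iota (restr P J ` P) (restr P J ` S) \<le> X"
  shows "iota P S \<le> X"
  unfolding iota_eq_cls_iota_fun
proof (rule cls_le_if_in_cplx, rule in_cplx_le[OF iota_fun_bound[OF w]])
  have factor: "0 \<le> dg_factor P" by (simp add: dg_factor_def max_weight_def)
  have one: "in_cplx (\<lambda>n. 1) X" using in_cplx_const[of 1 X] by simp
  have compl: "in_cplx (iota_fun P (P - S)) X"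
    using complement by (simp only: iota_le_iff_in_cplx)
  have "in_cplx (iota_fun (restr P J ` P) (restr P J ` S)) X" if "J \<in> {J. SCC_prefix P J}" for J
    using restricted that by (simp only: iota_le_iff_in_cplx mem_Collect_eq)
  then have restr: "in_cplx (\<lambda>n. \<Sum>J\<in>{J. SCC_prefix P J}. iota_fun (restr P J ` P) (restr P J ` S) n) X"
    using finite_SCC_prefixes[OF finite_wf_adps[OF w]] by (intro in_cplx_sum)
  show "in_cplx (\<lambda>n. ennreal (dg_factor P) *
      (1 + (\<Sum>J\<in>{J. SCC_prefix P J}. iota_fun (restr P J ` P) (restr P J ` S) n) + iota_fun P (P - S) n)) X"
    by (rule in_cplx_scale[OF factor in_cplx_add[OF in_cplx_add[OF one restr] compl]])
qed

section \<open>Soundness of the dependency graph processor\<close>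

lemma cMax_ge: "finite A \<Longrightarrow> x \<in> A \<Longrightarrow> x \<le> cMax A"
  unfolding cMax_def by (intro Max_ge) auto

lemma sound_output_DG:
  assumes w: "wf_adps P"
  shows "sound_output (P, S) (proc_DG (P, S))"
  unfolding sound_output_def proc_DG_def prod.case fst_conv snd_conv
proof (intro allI impI conjI ballI)
  fix T v assume "wf_proof_tree T \<and> v \<in> pnodes T \<and> LA T v = (P, S)"
  then have complement: "iota P (P - S) \<le> path_sum T v" unfolding wf_proof_tree_def by force
  let ?Outs = "{(restr P J ` P, restr P J ` S) | J. SCC_prefix P J}"
  have "finite ?Outs" using finite_SCC_prefixes[OF finite_wf_adps[OF w]] by (simp add: setcompr_eq_image)
  show "iota P S \<le> max (max (path_sum T v) (Pol 0)) (cMax (iota_p ` ?Outs))"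
  proof (rule iota_le_DG[OF w])
    show "iota P (P - S) \<le> max (max (path_sum T v) (Pol 0)) (cMax (iota_p ` ?Outs))"
      using complement by (simp add: le_max_iff_disj)
    fix J assume "SCC_prefix P J"
    then have "iota_p (restr P J ` P, restr P J ` S) \<le> cMax (iota_p ` ?Outs)"
      using \<open>finite ?Outs\<close> by (intro cMax_ge) auto
    then show "iota (restr P J ` P) (restr P J ` S) \<le> max (max (path_sum T v) (Pol 0)) (cMax (iota_p ` ?Outs))"
      by (simp add: iota_p_def le_max_iff_disj)
  qed
  fix Q assume "Q \<in> ?Outs"
  then obtain J where "Q = (restr P J ` P, restr P J ` S)" by blast
  then show "iota (fst Q) (fst Q - snd Q) \<le> max (path_sum T v) (Pol 0)"
    using order_trans[OF iota_restr_complement_le complement] by (simp add: le_max_iff_disj)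
qed

theorem mainTheorem6:
  assumes "infinite (UNIV :: 'v set)"
  shows "sound_processor (proc_DG :: ('f::finite, 'v) problem \<Rightarrow> cplx \<times> ('f, 'v) problem set)"
  unfolding sound_processor_def
proof (intro allI impI)
  fix PS :: "('f, 'v) problem"
  assume "adp_problem PS"
  then show "sound_output PS (proc_DG PS)"
    by (cases PS) (simp add: adp_problem_def wf_adps_def sound_output_DG)
qed

end
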